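(* Let $\alpha\in\mathbb{R}^n$ be a real vector and $\mu\in\mathbb{R}^n_+$ a non-negative vector such that the weights $\mu$ are monotone in the degrees $d$ (i.e., for all $i,j\in V$, $1<d_i<d_j$ implies $\mu_i\leqslant\mu_j$) and the matrix $\mathrm{diag}(\alpha)+\mu\mu^\top-A$ is positive semidefinite. Then for any tree $T\in\mathcal{T}(d)$ $$C_A(T)\geqslant LB(\alpha,\mu):=\frac{n-1}{2}\sum_{i,j=1}^n\mu_{ij}-\left(\frac{n-1}{2}\sum_{i=1}^n\alpha_i+\mu^\top P(H(\mu))\mu\right),$$ where $H(\mu)\in\mathcal{H}(\mu,d)$ is a Huffman tree for the weight sequence $\mu$ and degree sequence $d$. In other words, $LB(\alpha,\mu)$ is a lower bound for $\min_{T\in\mathcal{T}(d)}C_A(T)$.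
   Context: Let $V=\{1,\dots,n\}$ be a set of terminals and $A=(\mu_{ij})_{i,j=1}^n$ a symmetric non-negative flow matrix (the entries $\mu_{ij}$ of $A$ are distinct from the components $\mu_i$ of the weight vector $\mu$). Let $d=(d_1,\dots,d_n)$ be a generating degree sequence, i.e., a sequence of natural numbers with $\sum_{i=1}^n d_i=2(n-1)$, and let $\mathcal{T}(d)$ be the set of trees on vertex set $V$ in which vertex $i$ has degree $d_i$ for all $i$. For a tree $T$, $D(T)=(d_T(i,j))_{i,j=1}^n$ is its shortest-path distance matrix, and the cost is $C_A(T)=\sum_{\{i,j\}\subset V}\mu_{ij}d_T(i,j)=\frac12\mathrm{tr}\,D(T)A$ (the proof in the paper works with $C_A(T)=\mathrm{tr}\,D(T)A$). Let $J$ be the $n\times n$ all-ones matrix and $P(T):=\frac{n-1}{2}J-D(T)$; $P(T)$ is positive semidefinite for every tree $T$ of order $n$. For a weight vector $\mu$, the vertex-weighted Wiener index is $WI_\mu(T)=\mu^\top D(T)\mu$. $\mathcal{H}(\mu,d)$ denotes the set of trees produced by the generalized Huffman algorithm for weights $\mu$ and degrees $d$: starting from the set $W$ of pendent vertices ($d_i=1$) and the set $M$ of internal vertices, it repeatedly picks $m\in M$ of least current weight (ties broken by least degree), attaches to it the $d_m-1$ vertices of least weight in $W$, removes them from $W$, adds their weights to $\mu_m$, and moves $m$ from $M$ to $W$; when one internal vertex remains it is joined to all remaining vertices of $W$. It is known that if $\mu$ is monotone in $d$, every minimizer of $WI_\mu$ over $\mathcal{T}(d)$ is such a Huffman tree,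 and all Huffman trees in $\mathcal{H}(\mu,d)$ share the same value of $WI_\mu$. *)

theory Defs
  imports Complex_Main
begin

text \<open>Vertex set V = {1..n}; graphs are given by their edge sets (sets of 2-element sets).
Matrices are functions nat => nat => real, vectors nat => real, used on indices in {1..n}.\<close>

definition walk :: "nat set set \<Rightarrow> nat list \<Rightarrow> bool" where
  "walk E xs \<longleftrightarrow> (\<forall>k. Suc k < length xs \<longrightarrow> {xs ! k, xs ! Suc k} \<in> E)"

definition connects :: "nat set set \<Rightarrow> nat \<Rightarrow> nat \<Rightarrow> nat \<Rightarrow> bool" where
  "connects E i j k \<longleftrightarrow>
     (\<exists>xs. xs \<noteq> [] \<and> hd xs = i \<and> last xs = j \<and> length xs = Suc k \<and> walk E xs)"

definition tdist :: "nat set set \<Rightarrow> nat \<Rightarrow> nat \<Rightarrow> nat" where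
  "tdist E i j = (LEAST k. connects E i j k)"

definition is_tree :: "nat \<Rightarrow> nat set set \<Rightarrow> bool" where
  "is_tree n E \<longleftrightarrow>
     E \<subseteq> {{i, j} | i j. i \<in> {1..n} \<and> j \<in> {1..n} \<and> i \<noteq> j} \<and>
     card E = n - 1 \<and>
     (\<forall>i\<in>{1..n}. \<forall>j\<in>{1..n}. \<exists>k. connects E i j k)"

definition tree_deg :: "nat set set \<Rightarrow> nat \<Rightarrow> nat" where
  "tree_deg E i = card {e \<in> E. i \<in> e}"

definition generating_deg_seq :: "nat \<Rightarrow> (nat \<Rightarrow> nat) \<Rightarrow> bool" where
  "generating_deg_seq n d \<longleftrightarrow> (\<Sum>i=1..n. d i) = 2 * (n - 1)"

definition trees_deg :: "nat \<Rightarrow> (nat \<Rightarrow> nat) \<Rightarrow> nat set set set" where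
  "trees_deg n d = {E. is_tree n E \<and> (\<forall>i\<in>{1..n}. tree_deg E i = d i)}"

text \<open>Cost C_A(T) = tr D(T) A = sum over ordered pairs (the convention used in the proof).\<close>
definition cost :: "nat \<Rightarrow> (nat \<Rightarrow> nat \<Rightarrow> real) \<Rightarrow> nat set set \<Rightarrow> real" where
  "cost n A E = (\<Sum>i=1..n. \<Sum>j=1..n. A i j * real (tdist E i j))"

definition Pmat :: "nat \<Rightarrow> nat set set \<Rightarrow> nat \<Rightarrow> nat \<Rightarrow> real" where
  "Pmat n E i j = (real n - 1) / 2 - real (tdist E i j)"

definition psd_on :: "nat \<Rightarrow> (nat \<Rightarrow> nat \<Rightarrow> real) \<Rightarrow> bool" where
  "psd_on n M \<longleftrightarrow> (\<forall>x :: nat \<Rightarrow> real. (\<Sum>i=1..n. \<Sum>j=1..n. x i * M i j * x j) \<ge> 0)"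

definition quad_form :: "nat \<Rightarrow> (nat \<Rightarrow> real) \<Rightarrow> (nat \<Rightarrow> nat \<Rightarrow> real) \<Rightarrow> real" where
  "quad_form n x M = (\<Sum>i=1..n. \<Sum>j=1..n. x i * M i j * x j)"

text \<open>Generalized Huffman algorithm.  A state consists of the set W of available vertices,
the set M of unprocessed internal vertices, the current weights w and the edges built so far.\<close>
inductive huff_reach :: "nat \<Rightarrow> (nat \<Rightarrow> real) \<Rightarrow> (nat \<Rightarrow> nat)
    \<Rightarrow> nat set \<Rightarrow> nat set \<Rightarrow> (nat \<Rightarrow> real) \<Rightarrow> nat set set \<Rightarrow> bool"
  for n :: nat and mu :: "nat \<Rightarrow> real" and d :: "nat \<Rightarrow> nat" where
  init: "huff_reach n mu d {i \<in> {1..n}. d i = 1} {i \<in> {1..n}. d i \<ge> 2} mu {}"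
| step: "\<lbrakk> huff_reach n mu d W M w E; card M \<ge> 2; m \<in> M;
           \<forall>k\<in>M. w m \<le> w k;
           \<forall>k\<in>M. w k = w m \<longrightarrow> d m \<le> d k;
           S \<subseteq> W; card S = d m - 1;
           \<forall>s\<in>S. \<forall>x\<in>W - S. w s \<le> w x \<rbrakk>
         \<Longrightarrow> huff_reach n mu d (insert m (W - S)) (M - {m})
               (w(m := w m + sum w S)) (E \<union> (\<lambda>s. {m, s}) ` S)"

text \<open>When one internal vertex remains it is joined
to all remaining vertices of W; if there are no internal vertices at all (n = 2) the two
pendent vertices are joined.\<close>
definition huffman_trees :: "nat \<Rightarrow> (nat \<Rightarrow> real) \<Rightarrow> (nat \<Rightarrow> nat) \<Rightarrow> nat set set set" where
  "huffman_trees n mu d =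
     {E'. \<exists>W m w E. huff_reach n mu d W {m} w E \<and> E' = E \<union> (\<lambda>s. {m, s}) ` W}
   \<union> {E'. \<exists>W w E a b. huff_reach n mu d W {} w E \<and> W = {a, b} \<and> a \<noteq> b \<and> E' = insert {a, b} E}"

definition LB :: "nat \<Rightarrow> (nat \<Rightarrow> nat \<Rightarrow> real) \<Rightarrow> (nat \<Rightarrow> real) \<Rightarrow> (nat \<Rightarrow> real)
    \<Rightarrow> nat set set \<Rightarrow> real" where
  "LB n A alpha mu H =
     (real n - 1) / 2 * (\<Sum>i=1..n. \<Sum>j=1..n. A i j)
     - ((real n - 1) / 2 * (\<Sum>i=1..n. alpha i) + quad_form n mu (Pmat n H))"

end

(* With M = diag alpha + mu mu^T - A, the bound is the identity
     C_A(T) - LB(alpha, mu) = tr (P(T) M) + (mu^T P(H) mu - mu^T P(T) mu)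
   together with two inequalities. The trace is nonnegative because M is positive semidefinite
   and P(T) is a Gram matrix: rooting T anywhere, (n - 1)/2 - d_T(i, j) is half the sum, over the
   edges e, of the products of the signs recording on which side of e the vertices i and j lie.
   The bracket equals WI_mu(T) - WI_mu(H), which is nonnegative because Huffman trees minimise the
   vertex-weighted Wiener index over T(d).

   The optimality of Huffman trees is proved by induction on the number of internal vertices.
   WI_mu(T) is twice the sum, over the edges, of s (W - s) where s is the weight cut off by the
   edge; rooted at a centroid, every cut-off weight is at most W/2. An exchange argument turns an
   optimal tree into one in which the first Huffman step is realised: subtree weights of an
   optimal tree decrease with depth (otherwise swapping two subtrees helps), so the lightest
   internal vertex m can be relabelled onto the deepest internal level and given the d_m - 1
   lightest leaves as children without increasing the cost. Contracting that star gives an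
   instance of the same problem that the remaining Huffman steps solve. *)

theory Submission
  imports Defs "HOL-Combinatorics.Transposition"
begin

section \<open>Walks and distances\<close>

lemma walk_Cons2: "walk E (x # y # xs) \<longleftrightarrow> {x, y} \<in> E \<and> walk E (y # xs)"
  unfolding walk_def by (auto simp: All_less_Suc2 less_Suc_eq_0_disj)

lemma walk_append_single: "walk E (xs @ [y, x]) \<longleftrightarrow> walk E (xs @ [y]) \<and> {y, x} \<in> E"
  unfolding walk_def by (auto simp: nth_append less_Suc_eq split: if_splits)

lemma walk_rev: "walk E xs \<Longrightarrow> walk E (rev xs)"
proof (induction xs rule: induct_list012)
  case (3 x y zs)
  then show ?case
    by (simp add: walk_Cons2) (metis append.assoc append_Cons append_Nil insert_commute rev.simps(2) walk_append_single)
qed (simp_all add: walk_def)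

lemma connects_refl: "connects E i i 0"
  unfolding connects_def walk_def by (rule exI[of _ "[i]"]) simp

lemma connects_sym: "connects E i j k \<Longrightarrow> connects E j i k"
  unfolding connects_def by (metis walk_rev hd_rev last_rev length_rev rev_is_Nil_conv)

lemma connects_Cons: "{i, x} \<in> E \<Longrightarrow> connects E x j k \<Longrightarrow> connects E i j (Suc k)"
  unfolding connects_def by (metis last_ConsR length_Cons list.collapse list.distinct(1) list.sel(1) walk_Cons2)

lemma connects_0: "connects E i j 0 \<Longrightarrow> i = j"
  unfolding connects_def by (auto simp: length_Suc_conv)

lemma connects_SucD: "connects E i j (Suc k) \<Longrightarrow> \<exists>x. {i, x} \<in> E \<and> connects E x j k"
  unfolding connects_def
  by (metis (no_types, lifting) Suc_length_conv last_ConsR length_0_conv list.distinct(1) list.sel(1) nat.distinct(1) walk_Cons2)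

lemma tdist_eqI: "connects E i j k \<Longrightarrow> (\<And>k'. connects E i j k' \<Longrightarrow> k \<le> k') \<Longrightarrow> tdist E i j = k"
  unfolding tdist_def by (rule Least_equality) auto

lemma tdist_conn: "connects E i j k \<Longrightarrow> connects E i j (tdist E i j)"
  unfolding tdist_def by (rule LeastI)

lemma tdist_le: "connects E i j k \<Longrightarrow> tdist E i j \<le> k"
  unfolding tdist_def by (rule Least_le)

lemma tdist_self[simp]: "tdist E i i = 0"
  using tdist_le[OF connects_refl[of E i]] by simp

section \<open>Rooted representation of trees\<close>

definition tree :: "nat set \<Rightarrow> nat set set \<Rightarrow> bool" where
  "tree V E \<longleftrightarrow> finite V \<and> E \<subseteq> {{i, j} | i j. i \<in> V \<and> j \<in> V \<and> i \<noteq> j} \<and>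
     card E = card V - 1 \<and> (\<forall>i\<in>V. \<forall>j\<in>V. \<exists>k. connects E i j k)"

text \<open>A tree rooted at \<open>r\<close> is encoded by its parent map \<open>par\<close> together with \<open>anc v\<close>, the set
  of vertices on the path from \<open>v\<close> up to the root with the root excluded; so \<open>card (anc v)\<close> is the
  depth of \<open>v\<close>, \<open>p \<in> anc v\<close> says that \<open>v\<close> lies in the subtree hanging at \<open>p\<close>, and the
  distance of \<open>i\<close> and \<open>j\<close> is \<open>card (sym_diff (anc i) (anc j))\<close>.\<close>

definition rooted :: "nat set \<Rightarrow> (nat \<Rightarrow> nat) \<Rightarrow> nat \<Rightarrow> (nat \<Rightarrow> nat set) \<Rightarrow> bool" where
  "rooted V par r anc \<longleftrightarrow> finite V \<and> r \<in> V \<and> anc r = {} \<and> (\<forall>v\<in>V. anc v \<subseteq> V) \<and>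
     (\<forall>v\<in>V - {r}. par v \<in> V \<and> anc v = insert v (anc (par v)) \<and> v \<notin> anc (par v))"

definition parent_edges :: "nat set \<Rightarrow> (nat \<Rightarrow> nat) \<Rightarrow> nat \<Rightarrow> nat set set" where
  "parent_edges V par r = (\<lambda>v. {v, par v}) ` (V - {r})"

definition parent_deg :: "nat set \<Rightarrow> (nat \<Rightarrow> nat) \<Rightarrow> nat \<Rightarrow> nat \<Rightarrow> nat" where
  "parent_deg V par r v = card {u \<in> V - {r}. par u = v} + (if v = r then 0 else 1)"

locale rooted_tree =
  fixes V par r anc
  assumes R: "rooted V par r anc"
begin

lemma finV[simp]: "finite V" using R by (simp add: rooted_def)
lemma rV[simp]: "r \<in> V" using R by (simp add: rooted_def)
lemma anc_root[simp]: "anc r = {}" using R by (simp add: rooted_def)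
lemma anc_sub: "v \<in> V \<Longrightarrow> anc v \<subseteq> V" using R by (simp add: rooted_def)
lemma finite_anc[simp]: "v \<in> V \<Longrightarrow> finite (anc v)" using anc_sub finite_subset finV by blast
lemma par_in_V: "v \<in> V \<Longrightarrow> v \<noteq> r \<Longrightarrow> par v \<in> V" using R by (simp add: rooted_def)
lemma anc_rec: "v \<in> V \<Longrightarrow> v \<noteq> r \<Longrightarrow> anc v = insert v (anc (par v))" using R by (simp add: rooted_def)
lemma notin_anc_par: "v \<in> V \<Longrightarrow> v \<noteq> r \<Longrightarrow> v \<notin> anc (par v)" using R by (simp add: rooted_def)

definition depth :: "nat \<Rightarrow> nat" where "depth v = card (anc v)"

lemma depth_r[simp]: "depth r = 0" by (simp add: depth_def)
lemma depth_rec: "v \<in> V \<Longrightarrow> v \<noteq> r \<Longrightarrow> depth v = Suc (depth (par v))"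
  unfolding depth_def using anc_rec notin_anc_par par_in_V finite_anc by simp

lemma depth_induct[consumes 1, case_names root step]:
  assumes "v \<in> V" and "P r" and "\<And>v. v \<in> V \<Longrightarrow> v \<noteq> r \<Longrightarrow> P (par v) \<Longrightarrow> P v"
  shows "P v"
proof -
  have "\<forall>v. v \<in> V \<and> depth v = n \<longrightarrow> P v" for n
  proof (induction n)
    case 0
    then show ?case
    proof (intro allI impI)
      fix v assume "v \<in> V \<and> depth v = 0"
      then show "P v" using assms depth_rec[of v] by (cases "v = r") auto
    qed
  next
    case (Suc n)
    show ?case
    proof (intro allI impI)
      fix v assume v: "v \<in> V \<and> depth v = Suc n"
      then have "v \<noteq> r" by auto
      then have "depth (par v) = n" "par v \<in> V" using v depth_rec[of v] par_in_V[of v] by auto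
      then show "P v" using v \<open>v \<noteq> r\<close> Suc.IH assms(3)[of v] by blast
    qed
  qed
  then show ?thesis using assms(1) by blast
qed

lemma r_notin: "v \<in> V \<Longrightarrow> r \<notin> anc v"
proof (induction v rule: depth_induct)
  case root then show ?case by simp
next
  case (step v)
  have "anc v = insert v (anc (par v))" using anc_rec step(1,2) by blast
  then show ?case using step(2,3) by auto
qed

lemma self_in: "v \<in> V \<Longrightarrow> v \<noteq> r \<Longrightarrow> v \<in> anc v" using anc_rec by simp

lemma anc_sub': "v \<in> V \<Longrightarrow> anc v \<subseteq> V - {r}" using anc_sub r_notin by blast

lemma anc_trans: "v \<in> V \<Longrightarrow> z \<in> anc v \<Longrightarrow> anc z \<subseteq> anc v"
proof (induction v rule: depth_induct)
  case root then show ?case by simp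
next
  case (step v)
  then show ?case using anc_rec[of v] by auto
qed

lemma anc_chain: "v \<in> V \<Longrightarrow> z1 \<in> anc v \<Longrightarrow> z2 \<in> anc v \<Longrightarrow> z1 \<in> anc z2 \<or> z2 \<in> anc z1 \<or> z1 = z2"
proof (induction v rule: depth_induct)
  case root then show ?case by simp
next
  case (step v)
  have Av: "anc v = insert v (anc (par v))" using anc_rec step by simp
  show ?case
  proof (cases "z1 = v")
    case True
    then show ?thesis using step Av by auto
  next
    case f1: False
    show ?thesis
    proof (cases "z2 = v")
      case True then show ?thesis using step Av by auto
    next
      case False then show ?thesis using f1 step Av by auto
    qed
  qed
qed

lemma depth_mono: "v \<in> V \<Longrightarrow> z \<in> anc v \<Longrightarrow> depth z \<le> depth v"
  unfolding depth_def using anc_trans by (simp add: card_mono)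

lemma depth_strict: "v \<in> V \<Longrightarrow> z \<in> anc v \<Longrightarrow> z \<noteq> v \<Longrightarrow> depth z < depth v"
proof (induction v rule: depth_induct)
  case root then show ?case by simp
next
  case (step v)
  then have "z \<in> anc (par v)" using anc_rec[of v] by auto
  then have "depth z \<le> depth (par v)" using depth_mono[of "par v" z] par_in_V[of v] step by auto
  then show ?case using depth_rec[of v] step by simp
qed

lemma anc_inj: "u \<in> V \<Longrightarrow> v \<in> V \<Longrightarrow> anc u = anc v \<Longrightarrow> u = v"
proof (rule ccontr)
  assume u: "u \<in> V" and v: "v \<in> V" and e: "anc u = anc v" and ne: "u \<noteq> v"
  show False
  proof (cases "u = r")
    case True
    then have "anc v = {}" using e by simp
    moreover have "v \<noteq> r" using True ne by simp
    ultimately show False using self_in v by auto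
  next
    case False
    then have "u \<in> anc v" using self_in u e by auto
    then have "depth u < depth v" using depth_strict v ne by auto
    then show False using e depth_def by simp
  qed
qed

lemma child_exists: "v \<in> V \<Longrightarrow> z \<in> anc v \<Longrightarrow> z \<noteq> v \<Longrightarrow> \<exists>u\<in>anc v. u \<in> V \<and> u \<noteq> r \<and> par u = z"
proof (induction v rule: depth_induct)
  case root then show ?case by simp
next
  case (step v)
  have Av: "anc v = insert v (anc (par v))" using anc_rec step by simp
  then have z: "z \<in> anc (par v)" using step by auto
  show ?case
  proof (cases "z = par v")
    case True then show ?thesis using step Av by auto
  next
    case False
    then obtain u where "u \<in> anc (par v)" "u \<in> V" "u \<noteq> r" "par u = z"
      using step.IH z by auto
    then show ?thesis using Av by auto
  qed
qed

lemma top_exists: "v \<in> V \<Longrightarrow> v \<noteq> r \<Longrightarrow> \<exists>c\<in>anc v. c \<in> V \<and> c \<noteq> r \<and> par c = r"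
proof (induction v rule: depth_induct)
  case root then show ?case by simp
next
  case (step v)
  show ?case
  proof (cases "par v = r")
    case True then show ?thesis using step self_in by auto
  next
    case False
    then obtain c where "c \<in> anc (par v)" "c \<in> V" "c \<noteq> r" "par c = r" using step by auto
    then show ?thesis using anc_rec[of v] step by auto
  qed
qed

lemma par_ne: "v \<in> V \<Longrightarrow> v \<noteq> r \<Longrightarrow> par v \<noteq> v"
  using notin_anc_par self_in by metis

lemma par_in_anc: "v \<in> V \<Longrightarrow> v \<noteq> r \<Longrightarrow> par v \<noteq> r \<Longrightarrow> par v \<in> anc v"
  using anc_rec[of v] self_in[of "par v"] par_in_V[of v] by auto

lemma parent_edge_inj: "inj_on (\<lambda>v. {v, par v}) (V - {r})"
proof (rule inj_onI)
  fix u v assume u: "u \<in> V - {r}" and v: "v \<in> V - {r}" and e: "{u, par u} = {v, par v}"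
  show "u = v"
  proof (rule ccontr)
    assume "u \<noteq> v"
    then have "u = par v" "v = par u" using e by (auto simp: doubleton_eq_iff)
    then have "depth u = Suc (depth v)" "depth v = Suc (depth u)" using depth_rec[of u] depth_rec[of v] u v by auto
    then show False by simp
  qed
qed

lemma card_parent_edges: "card (parent_edges V par r) = card V - 1"
  unfolding parent_edges_def using card_image[OF parent_edge_inj] by (simp add: card_Diff_singleton)

lemma parent_edges_sub: "parent_edges V par r \<subseteq> {{i, j} | i j. i \<in> V \<and> j \<in> V \<and> i \<noteq> j}"
  unfolding parent_edges_def using par_in_V par_ne by fastforce

end

lemma card_sym_diff_triangle:
  assumes "finite X" "finite Y" "finite Z"
  shows "card (sym_diff X Z) \<le> card (sym_diff X Y) + card (sym_diff Y Z)"
proof -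
  have "sym_diff X Z \<subseteq> sym_diff X Y \<union> sym_diff Y Z" by blast
  then have "card (sym_diff X Z) \<le> card (sym_diff X Y \<union> sym_diff Y Z)"
    by (rule card_mono[rotated]) (simp add: assms)
  also have "\<dots> \<le> card (sym_diff X Y) + card (sym_diff Y Z)" by (rule card_Un_le)
  finally show ?thesis .
qed

context rooted_tree
begin

lemma parent_edge_mem: "e \<in> parent_edges V par r \<Longrightarrow> e = {x, y} \<Longrightarrow> x \<in> V \<and> y \<in> V \<and> card (sym_diff (anc x) (anc y)) = 1"
proof -
  assume e: "e \<in> parent_edges V par r" and xy: "e = {x, y}"
  then obtain v where v: "v \<in> V" "v \<noteq> r" "e = {v, par v}" unfolding parent_edges_def by auto
  have sd1: "sym_diff (anc v) (anc (par v)) = {v}" using anc_rec[of v] notin_anc_par[of v] v by auto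
  have sd2: "sym_diff (anc (par v)) (anc v) = {v}" using sd1 by auto
  from xy v have "(x = v \<and> y = par v) \<or> (x = par v \<and> y = v)" by (auto simp: doubleton_eq_iff)
  then show ?thesis using sd1 sd2 v par_in_V[of v] by auto
qed

lemma connects_length_ge: "connects (parent_edges V par r) i j k \<Longrightarrow> i \<in> V \<Longrightarrow> card (sym_diff (anc i) (anc j)) \<le> k \<and> j \<in> V"
proof (induction k arbitrary: i)
  case 0
  then have "i = j" using connects_0 by blast
  then show ?case using 0 by simp
next
  case (Suc k)
  obtain x where x: "{i, x} \<in> parent_edges V par r" "connects (parent_edges V par r) x j k"
    using connects_SucD[OF Suc.prems(1)] by blast
  have xi: "x \<in> V" "card (sym_diff (anc i) (anc x)) = 1" using parent_edge_mem[OF x(1), of i x] by auto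
  have IH: "card (sym_diff (anc x) (anc j)) \<le> k" "j \<in> V" using Suc.IH[OF x(2) xi(1)] by auto
  have "card (sym_diff (anc i) (anc j)) \<le> card (sym_diff (anc i) (anc x)) + card (sym_diff (anc x) (anc j))"
    by (rule card_sym_diff_triangle) (use Suc.prems xi IH in auto)
  then show ?case using xi IH by simp
qed

lemma parent_edge_in: "v \<in> V \<Longrightarrow> v \<noteq> r \<Longrightarrow> {v, par v} \<in> parent_edges V par r"
  unfolding parent_edges_def by auto

lemma card_sym_diff_anc_par:
  assumes "i \<in> V" "i \<noteq> r" "i \<notin> anc j" "j \<in> V"
  shows "card (sym_diff (anc i) (anc j)) = Suc (card (sym_diff (anc (par i)) (anc j)))"
proof -
  have "sym_diff (anc i) (anc j) = insert i (sym_diff (anc (par i)) (anc j))" "i \<notin> sym_diff (anc (par i)) (anc j)"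
    using anc_rec[of i] notin_anc_par[of i] assms by auto
  then show ?thesis using finite_anc par_in_V assms by simp
qed

lemma connects_sym_diff:
  "i \<in> V \<Longrightarrow> j \<in> V \<Longrightarrow> card (sym_diff (anc i) (anc j)) = n \<Longrightarrow> connects (parent_edges V par r) i j n"
proof (induction n arbitrary: i j)
  case 0
  then have "anc i = anc j" using finite_anc by auto
  then show ?case using anc_inj 0 connects_refl by metis
next
  case (Suc n)
  have "anc i \<noteq> anc j" using Suc.prems(3) by auto
  then consider "i \<noteq> r" "i \<notin> anc j" | "j \<noteq> r" "j \<notin> anc i"
    using anc_trans[of j i] anc_trans[of i j] Suc.prems(1,2) by fastforce
  then show ?case
  proof cases
    case 1
    then have "connects (parent_edges V par r) (par i) j n"
      using Suc card_sym_diff_anc_par[of i j] par_in_V[of i] by simp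
    then show ?thesis using connects_Cons parent_edge_in[of i] 1 Suc.prems by blast
  next
    case 2
    have "card (sym_diff (anc j) (anc i)) = Suc n" using Suc.prems(3) by (simp add: Un_commute)
    then have "connects (parent_edges V par r) (par j) i n"
      using Suc card_sym_diff_anc_par[of j i] par_in_V[of j] 2 by simp
    then show ?thesis using connects_Cons parent_edge_in[of j] 2 Suc.prems connects_sym by blast
  qed
qed

lemma tdist_parent_edges:
  assumes "i \<in> V" "j \<in> V" shows "tdist (parent_edges V par r) i j = card (sym_diff (anc i) (anc j))"
proof (rule tdist_eqI)
  show "connects (parent_edges V par r) i j (card (sym_diff (anc i) (anc j)))" using connects_sym_diff assms by blast
  fix k' assume "connects (parent_edges V par r) i j k'"
  then show "card (sym_diff (anc i) (anc j)) \<le> k'" using connects_length_ge assms by blast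
qed

lemma tree_parent_edges: "tree V (parent_edges V par r)"
  unfolding tree_def
proof (intro conjI ballI)
  fix i j assume "i \<in> V" "j \<in> V"
  then show "\<exists>k. connects (parent_edges V par r) i j k" using connects_sym_diff by blast
qed (auto simp only: card_parent_edges parent_edges_sub finV)

lemma tree_deg_parent_edges: "v \<in> V \<Longrightarrow> tree_deg (parent_edges V par r) v = parent_deg V par r v"
proof -
  assume v: "v \<in> V"
  have "{e \<in> parent_edges V par r. v \<in> e} = (\<lambda>u. {u, par u}) ` {u \<in> V - {r}. u = v \<or> par u = v}"
    unfolding parent_edges_def by auto
  moreover have "inj_on (\<lambda>u. {u, par u}) {u \<in> V - {r}. u = v \<or> par u = v}"
    by (rule inj_on_subset[OF parent_edge_inj]) auto
  ultimately have "tree_deg (parent_edges V par r) v = card {u \<in> V - {r}. u = v \<or> par u = v}"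
    unfolding tree_deg_def by (simp only: card_image)
  also have "{u \<in> V - {r}. u = v \<or> par u = v} = {u \<in> V - {r}. par u = v} \<union> (if v = r then {} else {v})"
    using v by auto
  also have "card \<dots> = card {u \<in> V - {r}. par u = v} + (if v = r then 0 else 1)"
    using par_ne[of v] v by (auto simp: card_insert_if)
  finally show ?thesis unfolding parent_deg_def .
qed

end

lemma funpow_iterates_Suc: "{(f ^^ i) v | i. i < Suc n} = insert v {(f ^^ i) (f v) | i. i < n}"
proof -
  have "{(f ^^ i) v | i. i < Suc n} = (\<lambda>i. (f ^^ i) v) ` {..<Suc n}" by auto
  also have "\<dots> = insert v ((\<lambda>i. (f ^^ i) (f v)) ` {..<n})"
    unfolding lessThan_Suc_eq_insert_0 by (simp add: image_image funpow_Suc_right del: funpow.simps)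
  also have "(\<lambda>i. (f ^^ i) (f v)) ` {..<n} = {(f ^^ i) (f v) | i. i < n}" by auto
  finally show ?thesis .
qed

lemma rooted_of_height:
  fixes \<delta> :: "nat \<Rightarrow> nat"
  assumes fin: "finite V" and rV: "r \<in> V" and dr: "\<delta> r = 0"
    and par: "\<And>v. v \<in> V \<Longrightarrow> v \<noteq> r \<Longrightarrow> par v \<in> V \<and> Suc (\<delta> (par v)) = \<delta> v"
  shows "rooted V par r (\<lambda>v. {(par ^^ i) v | i. i < \<delta> v})"
proof -
  define anc where "anc v = {(par ^^ i) v | i. i < \<delta> v}" for v
  have iter: "(par ^^ i) v \<in> V \<and> \<delta> ((par ^^ i) v) = \<delta> v - i" if "v \<in> V" "i \<le> \<delta> v" for v i
    using that(2)
  proof (induction i)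
    case 0 then show ?case using that by simp
  next
    case (Suc i)
    then have w: "(par ^^ i) v \<in> V" "\<delta> ((par ^^ i) v) = \<delta> v - i" by auto
    then have "(par ^^ i) v \<noteq> r" using Suc.prems dr by auto
    then show ?case using par[of "(par ^^ i) v"] w Suc.prems by auto
  qed
  have "rooted V par r anc"
    unfolding rooted_def
  proof (intro conjI ballI)
    show "anc r = {}" using dr anc_def by simp
    fix v assume v: "v \<in> V"
    show "anc v \<subseteq> V" using iter[OF v] unfolding anc_def by auto
  next
    fix v assume v: "v \<in> V - {r}"
    then have p: "par v \<in> V" "Suc (\<delta> (par v)) = \<delta> v" using par by auto
    show "par v \<in> V" by fact
    show "anc v = insert v (anc (par v))"
      unfolding anc_def p(2)[symmetric] by (rule funpow_iterates_Suc)
    show "v \<notin> anc (par v)"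
    proof
      assume "v \<in> anc (par v)"
      then obtain i where i: "v = (par ^^ i) (par v)" "i < \<delta> (par v)" unfolding anc_def by auto
      then have "\<delta> v = \<delta> (par v) - i" using iter[of "par v" i] p by auto
      then show False using p by simp
    qed
  qed (use fin rV in auto)
  then show ?thesis unfolding anc_def .
qed

lemma tree_step_to_root:
  assumes T: "tree V E" and r: "r \<in> V" and v: "v \<in> V" "v \<noteq> r"
  shows "\<exists>x. {v, x} \<in> E \<and> x \<in> V \<and> Suc (tdist E x r) = tdist E v r"
proof -
  have conn: "connects E u r (tdist E u r)" if "u \<in> V" for u
    using T r that unfolding tree_def by (meson tdist_conn)
  have "tdist E v r \<noteq> 0" using conn[OF v(1)] connects_0[of E v r] v by metis
  then obtain k where k: "tdist E v r = Suc k" by (cases "tdist E v r") auto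
  then obtain x where x: "{v, x} \<in> E" "connects E x r k" using connects_SucD conn[OF v(1)] by metis
  have xV: "x \<in> V" using x(1) T unfolding tree_def by (auto simp: doubleton_eq_iff)
  have "tdist E x r \<le> k" using tdist_le x by simp
  moreover have "tdist E v r \<le> Suc (tdist E x r)" using tdist_le connects_Cons[OF x(1) conn[OF xV]] by simp
  ultimately show ?thesis using x xV k by auto
qed

lemma tree_rooted:
  assumes T: "tree V E" and rV: "r \<in> V"
  shows "\<exists>par anc. rooted V par r anc \<and> E = parent_edges V par r"
proof -
  define par where "par v = (SOME x. {v, x} \<in> E \<and> x \<in> V \<and> Suc (tdist E x r) = tdist E v r)" for v
  have par: "{v, par v} \<in> E \<and> par v \<in> V \<and> Suc (tdist E (par v) r) = tdist E v r" if "v \<in> V" "v \<noteq> r" for v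
    unfolding par_def by (rule someI_ex) (rule tree_step_to_root[OF T rV that])
  have fin: "finite V" using T tree_def by auto
  have "rooted V par r (\<lambda>v. {(par ^^ i) v | i. i < tdist E v r})"
    by (rule rooted_of_height[OF fin rV]) (use par in simp_all)
  then obtain anc where R: "rooted V par r anc" by blast
  interpret rooted_tree V par r anc by (rule rooted_tree.intro[OF R])
  have sub: "parent_edges V par r \<subseteq> E" unfolding parent_edges_def using par by auto
  have "finite E" using T fin unfolding tree_def by (auto intro: finite_subset[of E "Pow V"])
  moreover have "card (parent_edges V par r) = card E" using card_parent_edges T tree_def by simp
  ultimately have "parent_edges V par r = E" using card_subset_eq[OF _ sub] by simp
  then show ?thesis using R by auto
qed

section \<open>The cut formula for the weighted Wiener index\<close>

text \<open>\<open>subtree_weight V anc \<mu> p\<close> is the weight of the subtree hanging at \<open>p\<close>, i.e.\ on the far side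
  of the edge \<open>{p, par p}\<close>, and \<open>path_weight V anc \<mu> p\<close> sums these weights along the path
  from \<open>p\<close> to the root.\<close>

definition subtree_weight :: "nat set \<Rightarrow> (nat \<Rightarrow> nat set) \<Rightarrow> (nat \<Rightarrow> real) \<Rightarrow> nat \<Rightarrow> real" where
  "subtree_weight V anc \<mu> p = (\<Sum>v\<in>V. \<mu> v * of_bool (p \<in> anc v))"

definition path_weight :: "nat set \<Rightarrow> (nat \<Rightarrow> nat set) \<Rightarrow> (nat \<Rightarrow> real) \<Rightarrow> nat \<Rightarrow> real" where
  "path_weight V anc \<mu> p = (\<Sum>z\<in>anc p. subtree_weight V anc \<mu> z)"

definition cut_cost :: "nat set \<Rightarrow> nat \<Rightarrow> (nat \<Rightarrow> nat set) \<Rightarrow> (nat \<Rightarrow> real) \<Rightarrow> real" where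
  "cut_cost V r anc \<mu> = (\<Sum>p\<in>V - {r}. subtree_weight V anc \<mu> p * (sum \<mu> V - subtree_weight V anc \<mu> p))"

definition wiener :: "nat set \<Rightarrow> (nat \<Rightarrow> real) \<Rightarrow> nat set set \<Rightarrow> real" where
  "wiener V \<mu> E = (\<Sum>i\<in>V. \<Sum>j\<in>V. \<mu> i * \<mu> j * real (tdist E i j))"

context rooted_tree
begin

lemma card_sym_diff_sum:
  assumes "i \<in> V" "j \<in> V"
  shows "real (card (sym_diff (anc i) (anc j))) =
    (\<Sum>p\<in>V - {r}. of_bool (p \<in> anc i) + of_bool (p \<in> anc j) - 2 * of_bool (p \<in> anc i) * of_bool (p \<in> anc j))"
proof -
  define X where "X = sym_diff (anc i) (anc j)"
  have "X \<subseteq> V - {r}" using anc_sub' assms unfolding X_def by auto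
  then have "real (card X) = (\<Sum>p\<in>V - {r}. (of_bool (p \<in> X) :: real))"
    by (simp add: Int_absorb1 sum_of_bool_eq)
  then have "real (card (sym_diff (anc i) (anc j))) = (\<Sum>p\<in>V - {r}. (of_bool (p \<in> sym_diff (anc i) (anc j)) :: real))"
    unfolding X_def .
  also have "\<dots> = (\<Sum>p\<in>V - {r}. of_bool (p \<in> anc i) + of_bool (p \<in> anc j) - 2 * of_bool (p \<in> anc i) * of_bool (p \<in> anc j))"
    by (rule sum.cong) auto
  finally show ?thesis .
qed

lemma wiener_parent_edges: "wiener V \<mu> (parent_edges V par r) = 2 * cut_cost V r anc \<mu>"
proof -
  define a where "a p v = (of_bool (p \<in> anc v) :: real)" for p v
  define W where "W = sum \<mu> V"
  have s: "subtree_weight V anc \<mu> p = (\<Sum>v\<in>V. \<mu> v * a p v)" for p unfolding subtree_weight_def a_def by simp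
  have "wiener V \<mu> (parent_edges V par r) = (\<Sum>i\<in>V. \<Sum>j\<in>V. \<mu> i * \<mu> j *
      (\<Sum>p\<in>V - {r}. a p i + a p j - 2 * a p i * a p j))"
    unfolding wiener_def a_def by (intro sum.cong refl) (simp add: tdist_parent_edges card_sym_diff_sum)
  also have "\<dots> = (\<Sum>i\<in>V. \<Sum>j\<in>V. \<Sum>p\<in>V - {r}. \<mu> i * \<mu> j * (a p i + a p j - 2 * a p i * a p j))"
    by (simp only: sum_distrib_left)
  also have "\<dots> = (\<Sum>i\<in>V. \<Sum>p\<in>V - {r}. \<Sum>j\<in>V. \<mu> i * \<mu> j * (a p i + a p j - 2 * a p i * a p j))"
    by (rule sum.cong[OF refl], rule sum.swap)
  also have "\<dots> = (\<Sum>p\<in>V - {r}. \<Sum>i\<in>V. \<Sum>j\<in>V. \<mu> i * \<mu> j * (a p i + a p j - 2 * a p i * a p j))"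
    by (rule sum.swap)
  also have "\<dots> = (\<Sum>p\<in>V - {r}. 2 * (subtree_weight V anc \<mu> p * (W - subtree_weight V anc \<mu> p)))"
  proof (rule sum.cong[OF refl])
    fix p
    have "(\<Sum>i\<in>V. \<Sum>j\<in>V. \<mu> i * \<mu> j * (a p i + a p j - 2 * a p i * a p j)) =
       (\<Sum>i\<in>V. \<Sum>j\<in>V. (\<mu> i * a p i) * \<mu> j + \<mu> i * (\<mu> j * a p j) - 2 * (\<mu> i * a p i) * (\<mu> j * a p j))"
      by (intro sum.cong refl) (simp add: algebra_simps)
    also have "\<dots> = (\<Sum>i\<in>V. \<Sum>j\<in>V. (\<mu> i * a p i) * \<mu> j) + (\<Sum>i\<in>V. \<Sum>j\<in>V. \<mu> i * (\<mu> j * a p j))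
        - 2 * (\<Sum>i\<in>V. \<Sum>j\<in>V. (\<mu> i * a p i) * (\<mu> j * a p j))"
      by (simp only: sum.distrib sum_subtractf sum_distrib_left mult.assoc)
    also have "\<dots> = (\<Sum>v\<in>V. \<mu> v * a p v) * W + W * (\<Sum>v\<in>V. \<mu> v * a p v) - 2 * ((\<Sum>v\<in>V. \<mu> v * a p v) * (\<Sum>v\<in>V. \<mu> v * a p v))"
      unfolding W_def by (simp only: sum_product)
    finally show "(\<Sum>i\<in>V. \<Sum>j\<in>V. \<mu> i * \<mu> j * (a p i + a p j - 2 * a p i * a p j)) =
        2 * (subtree_weight V anc \<mu> p * (W - subtree_weight V anc \<mu> p))" unfolding s by (simp add: algebra_simps)
  qed
  finally show ?thesis unfolding cut_cost_def W_def by (simp add: sum_distrib_left)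
qed

end

lemma transpose_in: "a \<in> V \<Longrightarrow> b \<in> V \<Longrightarrow> v \<in> V \<Longrightarrow> transpose a b v \<in> V"
  by (simp add: transpose_def)

lemma card_Int_triangle:
  assumes "finite X" "finite Y" "finite Z"
  shows "card (X \<inter> Y) + card (Y \<inter> Z) \<le> card Y + card (X \<inter> Z)"
proof -
  have "card (X \<inter> Y) \<le> card (X \<inter> Y \<inter> Z) + card (Y - Z)"
  proof -
    have "X \<inter> Y \<subseteq> (X \<inter> Y \<inter> Z) \<union> (Y - Z)" by blast
    then have "card (X \<inter> Y) \<le> card ((X \<inter> Y \<inter> Z) \<union> (Y - Z))" by (rule card_mono[rotated]) (use assms in auto)
    also have "\<dots> \<le> card (X \<inter> Y \<inter> Z) + card (Y - Z)" by (rule card_Un_le)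
    finally show ?thesis .
  qed
  moreover have "card (X \<inter> Y \<inter> Z) \<le> card (X \<inter> Z)" by (rule card_mono) (use assms in auto)
  moreover have "card Y = card (Y \<inter> Z) + card (Y - Z)"
    using assms card_Int_Diff[of Y Z] by simp
  ultimately show ?thesis by linarith
qed

lemma sum_neg:
  fixes f :: "'a \<Rightarrow> real"
  assumes "finite X" "X \<noteq> {}" "\<And>x. x \<in> X \<Longrightarrow> f x < 0"
  shows "sum f X < 0"
proof -
  have "0 < sum (\<lambda>x. - f x) X" by (rule sum_pos) (use assms in auto)
  then show ?thesis by (simp add: sum_negf)
qed

context rooted_tree
begin

lemma subtree_weight_mono:
  assumes mu: "\<forall>v\<in>V. 0 \<le> \<mu> v" and p: "p \<in> V" and z: "z \<in> anc p"
  shows "subtree_weight V anc \<mu> p \<le> subtree_weight V anc \<mu> z"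
  unfolding subtree_weight_def
proof (rule sum_mono)
  fix v assume v: "v \<in> V"
  have "p \<in> anc v \<Longrightarrow> z \<in> anc v" using anc_trans[of v p] v z by blast
  then show "\<mu> v * of_bool (p \<in> anc v) \<le> \<mu> v * of_bool (z \<in> anc v)" using mu v by auto
qed

lemma leaf_in_anc_eq: "u \<in> V \<Longrightarrow> (\<forall>w\<in>V - {r}. par w \<noteq> u) \<Longrightarrow> v \<in> V \<Longrightarrow> u \<in> anc v \<Longrightarrow> v = u"
  using child_exists[of v u] by auto

lemma subtree_weight_leaf:
  assumes u: "u \<in> V" "u \<noteq> r" and nc: "\<forall>w\<in>V - {r}. par w \<noteq> u"
  shows "subtree_weight V anc \<mu> u = \<mu> u"
proof -
  have "subtree_weight V anc \<mu> u = (\<Sum>v\<in>V. if v = u then \<mu> v else 0)"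
    unfolding subtree_weight_def
  proof (rule sum.cong[OF refl])
    fix v assume v: "v \<in> V"
    show "\<mu> v * of_bool (u \<in> anc v) = (if v = u then \<mu> v else 0)"
      using leaf_in_anc_eq[OF u(1) nc v] self_in[OF u] by auto
  qed
  also have "\<dots> = \<mu> u" using u by (simp add: sum.delta)
  finally show ?thesis .
qed

lemma subtree_weight_change_weights:
  "subtree_weight V anc \<mu>' z = subtree_weight V anc \<mu> z + (\<Sum>v\<in>V. (\<mu>' v - \<mu> v) * of_bool (z \<in> anc v))"
proof -
  have "subtree_weight V anc \<mu>' z = (\<Sum>v\<in>V. \<mu> v * of_bool (z \<in> anc v) + (\<mu>' v - \<mu> v) * of_bool (z \<in> anc v))"
    unfolding subtree_weight_def by (rule sum.cong[OF refl]) (simp add: algebra_simps)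
  then show ?thesis unfolding subtree_weight_def by (simp only: sum.distrib)
qed

lemma subtree_weight_transpose:
  assumes a: "a \<in> V" and b: "b \<in> V"
  shows "subtree_weight V anc (\<mu> \<circ> transpose a b) z = subtree_weight V anc \<mu> z + (\<mu> b - \<mu> a) * (of_bool (z \<in> anc a) - of_bool (z \<in> anc b))"
proof (cases "a = b")
  case True
  then have "\<mu> \<circ> transpose a b = \<mu>" by (auto simp: transpose_def fun_eq_iff)
  then show ?thesis using True by simp
next
  case False
  have "(\<Sum>v\<in>V. ((\<mu> \<circ> transpose a b) v - \<mu> v) * of_bool (z \<in> anc v))
     = (\<Sum>v\<in>V. (if v = a then (\<mu> b - \<mu> a) * of_bool (z \<in> anc a) else 0) + (if v = b then (\<mu> a - \<mu> b) * of_bool (z \<in> anc b) else 0))"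
    by (rule sum.cong[OF refl]) (auto simp: transpose_def False)
  also have "\<dots> = (\<mu> b - \<mu> a) * of_bool (z \<in> anc a) + (\<mu> a - \<mu> b) * of_bool (z \<in> anc b)"
    using a b by (simp add: sum.distrib sum.delta)
  finally show ?thesis using subtree_weight_change_weights[where \<mu>'="\<mu> \<circ> transpose a b" and \<mu>=\<mu> and z=z] by (simp add: algebra_simps)
qed

lemma sum_shift_paths:
  fixes F :: "real \<Rightarrow> real"
  assumes a: "a \<in> V" and b: "b \<in> V"
    and s': "\<And>z. z \<in> V \<Longrightarrow> s' z = g z + \<epsilon> * (of_bool (z \<in> anc b) - of_bool (z \<in> anc a))"
  shows "(\<Sum>z\<in>V - {r}. F (s' z)) - (\<Sum>z\<in>V - {r}. F (g z)) =
     (\<Sum>z\<in>anc b - anc a. F (g z + \<epsilon>) - F (g z)) + (\<Sum>z\<in>anc a - anc b. F (g z - \<epsilon>) - F (g z))"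
proof -
  have sub: "anc b - anc a \<subseteq> V - {r}" "anc a - anc b \<subseteq> V - {r}" using anc_sub' a b by auto
  have disj: "(anc b - anc a) \<inter> (anc a - anc b) = {}" by auto
  have "(\<Sum>z\<in>V - {r}. F (s' z)) - (\<Sum>z\<in>V - {r}. F (g z)) = (\<Sum>z\<in>V - {r}. F (s' z) - F (g z))"
    by (rule sum_subtractf[symmetric])
  also have "\<dots> = (\<Sum>z\<in>V - {r}. (if z \<in> anc b - anc a then F (g z + \<epsilon>) - F (g z) else 0) +
         (if z \<in> anc a - anc b then F (g z - \<epsilon>) - F (g z) else 0))"
  proof (rule sum.cong[OF refl])
    fix z assume "z \<in> V - {r}"
    then have e: "s' z = g z + \<epsilon> * (of_bool (z \<in> anc b) - of_bool (z \<in> anc a))" using s' by simp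
    show "F (s' z) - F (g z) = (if z \<in> anc b - anc a then F (g z + \<epsilon>) - F (g z) else 0) +
         (if z \<in> anc a - anc b then F (g z - \<epsilon>) - F (g z) else 0)"
      by (cases "z \<in> anc a"; cases "z \<in> anc b") (simp_all add: e)
  qed
  also have "\<dots> = (\<Sum>z\<in>anc b - anc a. F (g z + \<epsilon>) - F (g z)) + (\<Sum>z\<in>anc a - anc b. F (g z - \<epsilon>) - F (g z))"
  proof -
    have i1: "(V - {r}) \<inter> {z. z \<in> anc b - anc a} = anc b - anc a" using sub by blast
    have i2: "(V - {r}) \<inter> {z. z \<in> anc a - anc b} = anc a - anc b" using sub by blast
    show ?thesis by (simp only: sum.distrib sum.If_cases i1 i2 finite_Diff finV) simp
  qed
  finally show ?thesis .
qed

lemma card_anc_diff_same_depth: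
  assumes "a \<in> V" "b \<in> V" "depth a = depth b"
  shows "card (anc a - anc b) = card (anc b - anc a)"
proof -
  have "card (anc a - anc b) = card (anc a) - card (anc a \<inter> anc b)" using assms by (simp add: card_Diff_subset_Int)
  moreover have "card (anc b - anc a) = card (anc b) - card (anc b \<inter> anc a)" using assms by (simp add: card_Diff_subset_Int)
  ultimately show ?thesis using assms unfolding depth_def by (simp add: Int_commute)
qed

lemma shift_cost_same_depth:
  assumes a: "a \<in> V" and b: "b \<in> V" and hab: "depth a = depth b"
  shows "(\<Sum>z\<in>anc b - anc a. (g z + \<epsilon>) * (W - (g z + \<epsilon>)) - g z * (W - g z)) +
         (\<Sum>z\<in>anc a - anc b. (g z - \<epsilon>) * (W - (g z - \<epsilon>)) - g z * (W - g z))
       = 2 * \<epsilon> * ((\<Sum>z\<in>anc a - anc b. g z) - (\<Sum>z\<in>anc b - anc a. g z)) - 2 * real (card (anc a - anc b)) * \<epsilon>^2"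
proof -
  have k: "card (anc b - anc a) = card (anc a - anc b)" using card_anc_diff_same_depth[OF a b hab] by simp
  have "(\<Sum>z\<in>anc b - anc a. (g z + \<epsilon>) * (W - (g z + \<epsilon>)) - g z * (W - g z))
      = (\<Sum>z\<in>anc b - anc a. \<epsilon> * W - \<epsilon>^2 - 2 * \<epsilon> * g z)"
    by (rule sum.cong) (auto simp: algebra_simps power2_eq_square)
  also have "\<dots> = real (card (anc b - anc a)) * (\<epsilon> * W - \<epsilon>^2) - 2 * \<epsilon> * (\<Sum>z\<in>anc b - anc a. g z)"
    by (simp only: sum_subtractf sum_constant sum_distrib_left[symmetric] of_nat_mult) (simp add: algebra_simps)
  finally have 1: "(\<Sum>z\<in>anc b - anc a. (g z + \<epsilon>) * (W - (g z + \<epsilon>)) - g z * (W - g z))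
     = real (card (anc b - anc a)) * (\<epsilon> * W - \<epsilon>^2) - 2 * \<epsilon> * (\<Sum>z\<in>anc b - anc a. g z)" .
  have "(\<Sum>z\<in>anc a - anc b. (g z - \<epsilon>) * (W - (g z - \<epsilon>)) - g z * (W - g z))
      = (\<Sum>z\<in>anc a - anc b. 2 * \<epsilon> * g z - \<epsilon> * W - \<epsilon>^2)"
    by (rule sum.cong) (auto simp: algebra_simps power2_eq_square)
  also have "\<dots> = (\<Sum>z\<in>anc a - anc b. 2 * \<epsilon> * g z - (\<epsilon> * W + \<epsilon>^2))"
    by (rule sum.cong) (auto simp: algebra_simps)
  also have "\<dots> = 2 * \<epsilon> * (\<Sum>z\<in>anc a - anc b. g z) - real (card (anc a - anc b)) * (\<epsilon> * W + \<epsilon>^2)"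
    by (simp only: sum_subtractf sum_constant sum_distrib_left[symmetric])
  finally have 2: "(\<Sum>z\<in>anc a - anc b. (g z - \<epsilon>) * (W - (g z - \<epsilon>)) - g z * (W - g z))
     = 2 * \<epsilon> * (\<Sum>z\<in>anc a - anc b. g z) - real (card (anc a - anc b)) * (\<epsilon> * W + \<epsilon>^2)" .
  show ?thesis unfolding 1 2 k by (simp add: algebra_simps)
qed

lemma sum_diff_anc_diff:
  fixes g :: "nat \<Rightarrow> real"
  assumes "a \<in> V" "b \<in> V"
  shows "(\<Sum>z\<in>anc a - anc b. g z) - (\<Sum>z\<in>anc b - anc a. g z) = (\<Sum>z\<in>anc a. g z) - (\<Sum>z\<in>anc b. g z)"
proof -
  have e1: "anc a - (anc a \<inter> anc b) = anc a - anc b" by blast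
  have e2: "anc b - (anc a \<inter> anc b) = anc b - anc a" by blast
  have "(\<Sum>z\<in>anc a. g z) = (\<Sum>z\<in>anc a - (anc a \<inter> anc b). g z) + (\<Sum>z\<in>anc a \<inter> anc b. g z)"
    by (rule sum.subset_diff) (use assms in auto)
  then have 1: "(\<Sum>z\<in>anc a. g z) = (\<Sum>z\<in>anc a - anc b. g z) + (\<Sum>z\<in>anc a \<inter> anc b. g z)" unfolding e1 .
  have "(\<Sum>z\<in>anc b. g z) = (\<Sum>z\<in>anc b - (anc a \<inter> anc b). g z) + (\<Sum>z\<in>anc a \<inter> anc b. g z)"
    by (rule sum.subset_diff) (use assms in auto)
  then have 2: "(\<Sum>z\<in>anc b. g z) = (\<Sum>z\<in>anc b - anc a. g z) + (\<Sum>z\<in>anc a \<inter> anc b. g z)" unfolding e2 .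
  show ?thesis using 1 2 by linarith
qed

lemma anc_diff_par:
  assumes p: "p \<in> V" and q: "q \<in> V" and hq: "depth q = depth p + t" and pq: "\<not> anc p \<subseteq> anc q"
  shows "p \<noteq> r" "q \<noteq> r" "depth (par q) = depth (par p) + t"
    and "anc p - anc q = insert p (anc (par p) - anc (par q))" "p \<notin> anc (par p) - anc (par q)"
    and "anc q - anc p = insert q (anc (par q) - anc (par p))" "q \<notin> anc (par q) - anc (par p)"
proof -
  show pr: "p \<noteq> r" using pq by auto
  have p_q: "p \<notin> anc q" using anc_trans[of q p] q pq by blast
  show qr: "q \<noteq> r" using hq depth_rec[of p] p pr by auto
  have q_p: "q \<notin> anc p"
  proof
    assume "q \<in> anc p"
    then have "anc q \<subseteq> anc p" using anc_trans p by blast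
    moreover have "card (anc q) \<ge> card (anc p)" using hq unfolding depth_def by simp
    ultimately have "anc q = anc p" using finite_anc[OF p] by (metis card_seteq)
    then show False using p_q self_in p pr by blast
  qed
  show "depth (par q) = depth (par p) + t" using depth_rec[of p] depth_rec[of q] hq p q pr qr by auto
  have "anc p = insert p (anc (par p))" "p \<notin> anc (par p)" "anc q = insert q (anc (par q))" "q \<notin> anc (par q)"
    using anc_rec notin_anc_par p q pr qr by auto
  then show "anc p - anc q = insert p (anc (par p) - anc (par q))" "p \<notin> anc (par p) - anc (par q)"
    and "anc q - anc p = insert q (anc (par q) - anc (par p))" "q \<notin> anc (par q) - anc (par p)"
    using p_q q_p by auto
qed

lemma paired_sum_nonpos:
  assumes "p \<in> V" and "q \<in> V" and "depth q = depth p + t"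
    and "\<And>y z. y \<in> anc p - anc q \<Longrightarrow> z \<in> anc q - anc p \<Longrightarrow> depth z = depth y + t \<Longrightarrow> \<phi> y + \<psi> z \<le> (0::real)"
    and "\<And>z. z \<in> anc q - anc p \<Longrightarrow> \<psi> z \<le> 0"
  shows "sum \<phi> (anc p - anc q) + sum \<psi> (anc q - anc p) \<le> 0"
  using assms
proof (induction p arbitrary: q rule: depth_induct)
  case root
  then show ?case by (simp add: sum_nonpos)
next
  case (step p)
  show ?case
  proof (cases "anc p \<subseteq> anc q")
    case True
    then have e: "anc p - anc q = {}" by auto
    have "sum \<psi> (anc q - anc p) \<le> 0" using step.prems(4) by (intro sum_nonpos) blast
    then show ?thesis unfolding e by simp
  next
    case False
    note D = anc_diff_par[OF step.hyps(1) step.prems(1,2) False]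
    have "sum \<phi> (anc (par p) - anc (par q)) + sum \<psi> (anc (par q) - anc (par p)) \<le> 0"
    proof (rule step.IH[OF par_in_V[OF step.prems(1) D(2)] D(3)])
      fix y z assume "y \<in> anc (par p) - anc (par q)" "z \<in> anc (par q) - anc (par p)" "depth z = depth y + t"
      then show "\<phi> y + \<psi> z \<le> 0" using step.prems(3)[of y z] D(4,6) by auto
    next
      fix z assume "z \<in> anc (par q) - anc (par p)"
      then show "\<psi> z \<le> 0" using step.prems(4)[of z] D(6) by auto
    qed
    moreover have "\<phi> p + \<psi> q \<le> 0" using step.prems(3)[of p q] D step.prems(2) by auto
    moreover have "finite (anc (par p) - anc (par q))" "finite (anc (par q) - anc (par p))"
      using finite_anc par_in_V step.hyps(1) step.prems(1) D(1,2) by auto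
    ultimately show ?thesis using D(4-7) by simp
  qed
qed

lemma paired_sum_neg:
  assumes p: "p \<in> V" and q: "q \<in> V" and hq: "depth q = depth p + t"
    and pair: "\<And>y z. y \<in> anc p - anc q \<Longrightarrow> z \<in> anc q - anc p \<Longrightarrow> depth z = depth y + t \<Longrightarrow> \<phi> y + \<psi> z < (0::real)"
    and single: "\<And>z. z \<in> anc q - anc p \<Longrightarrow> \<psi> z < 0"
    and ne: "anc q - anc p \<noteq> {}"
  shows "sum \<phi> (anc p - anc q) + sum \<psi> (anc q - anc p) < 0"
proof (cases "anc p \<subseteq> anc q")
  case True
  then have e: "anc p - anc q = {}" by auto
  have "sum \<psi> (anc q - anc p) < 0" using single ne finite_anc[OF q] by (intro sum_neg) auto
  then show ?thesis unfolding e by simp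
next
  case False
  note D = anc_diff_par[OF p q hq False]
  have "sum \<phi> (anc (par p) - anc (par q)) + sum \<psi> (anc (par q) - anc (par p)) \<le> 0"
  proof (rule paired_sum_nonpos[OF par_in_V[OF p D(1)] par_in_V[OF q D(2)] D(3)])
    fix y z assume "y \<in> anc (par p) - anc (par q)" "z \<in> anc (par q) - anc (par p)" "depth z = depth y + t"
    then show "\<phi> y + \<psi> z \<le> 0" using pair[of y z] D(4,6) by auto
  next
    fix z assume "z \<in> anc (par q) - anc (par p)"
    then show "\<psi> z \<le> 0" using single[of z] D(6) by auto
  qed
  moreover have "\<phi> p + \<psi> q < 0" using pair[of p q] D hq by auto
  moreover have "finite (anc (par p) - anc (par q))" "finite (anc (par q) - anc (par p))"
    using finite_anc par_in_V p q D(1,2) by auto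
  ultimately show ?thesis using D(4-7) by simp
qed

end

context rooted_tree
begin

lemma rooted_relabel:
  assumes tau: "\<forall>v\<in>V. \<tau> v \<in> V \<and> \<tau> (\<tau> v) = v"
  shows "rooted V (\<lambda>v. \<tau> (par (\<tau> v))) (\<tau> r) (\<lambda>v. \<tau> ` anc (\<tau> v))"
  unfolding rooted_def
proof (intro conjI ballI)
  show "finite V" by simp
  show "\<tau> r \<in> V" using tau by simp
  show "\<tau> ` anc (\<tau> (\<tau> r)) = {}" using tau by simp
  fix v assume v: "v \<in> V"
  show "\<tau> ` anc (\<tau> v) \<subseteq> V" using anc_sub[of "\<tau> v"] tau v by auto
next
  fix v assume v: "v \<in> V - {\<tau> r}"
  have tv1: "\<tau> v \<in> V" using v tau by blast
  have tv2: "\<tau> v \<noteq> r"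
  proof
    assume "\<tau> v = r"
    then have "\<tau> (\<tau> v) = \<tau> r" by simp
    then show False using v tau by simp
  qed
  note tv = tv1 tv2
  have pv: "par (\<tau> v) \<in> V" using par_in_V tv by blast
  show "\<tau> (par (\<tau> v)) \<in> V" using tau pv by blast
  have tt: "\<tau> (\<tau> (par (\<tau> v))) = par (\<tau> v)" using tau pv by blast
  show "\<tau> ` anc (\<tau> v) = insert v (\<tau> ` anc (\<tau> (\<tau> (par (\<tau> v)))))"
    unfolding tt using anc_rec[OF tv] tau v by auto
  show "v \<notin> \<tau> ` anc (\<tau> (\<tau> (par (\<tau> v))))"
  proof
    assume "v \<in> \<tau> ` anc (\<tau> (\<tau> (par (\<tau> v))))"
    then obtain z where z: "z \<in> anc (par (\<tau> v))" "v = \<tau> z" unfolding tt by auto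
    have "z \<in> V" using anc_sub pv z by blast
    then have "\<tau> v = z" using z tau by auto
    then show False using notin_anc_par[OF tv] z by simp
  qed
qed

lemma mem_relabel:
  assumes tau: "\<forall>v\<in>V. \<tau> v \<in> V \<and> \<tau> (\<tau> v) = v" and z: "z \<in> V" and v: "v \<in> V"
  shows "z \<in> \<tau> ` anc (\<tau> v) \<longleftrightarrow> \<tau> z \<in> anc (\<tau> v)"
proof
  assume "z \<in> \<tau> ` anc (\<tau> v)"
  then obtain y where y: "y \<in> anc (\<tau> v)" "z = \<tau> y" by auto
  have "y \<in> V" using anc_sub[of "\<tau> v"] tau v y by auto
  then show "\<tau> z \<in> anc (\<tau> v)" using y tau by auto
next
  assume "\<tau> z \<in> anc (\<tau> v)"
  then show "z \<in> \<tau> ` anc (\<tau> v)" using tau z by (metis image_eqI)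
qed

lemma card_relabel:
  assumes tau: "\<forall>v\<in>V. \<tau> v \<in> V \<and> \<tau> (\<tau> v) = v" and v: "v \<in> V"
  shows "card (\<tau> ` anc (\<tau> v)) = depth (\<tau> v)"
proof -
  have "inj_on \<tau> V" using tau by (metis inj_onI)
  moreover have "anc (\<tau> v) \<subseteq> V" using anc_sub tau v by auto
  ultimately show ?thesis unfolding depth_def by (meson card_image inj_on_subset)
qed

lemma subtree_weight_relabel:
  assumes tau: "\<forall>v\<in>V. \<tau> v \<in> V \<and> \<tau> (\<tau> v) = v" and p: "p \<in> V"
  shows "subtree_weight V (\<lambda>v. \<tau> ` anc (\<tau> v)) \<mu> p = subtree_weight V anc (\<mu> \<circ> \<tau>) (\<tau> p)"
proof -
  have "subtree_weight V (\<lambda>v. \<tau> ` anc (\<tau> v)) \<mu> p = (\<Sum>v\<in>V. \<mu> v * of_bool (\<tau> p \<in> anc (\<tau> v)))"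
    unfolding subtree_weight_def by (rule sum.cong[OF refl]) (simp add: mem_relabel[OF tau p])
  also have "\<dots> = (\<Sum>u\<in>V. (\<mu> \<circ> \<tau>) u * of_bool (\<tau> p \<in> anc u))"
    by (rule sum.reindex_bij_witness[of V \<tau> \<tau>]) (use tau in auto)
  finally show ?thesis unfolding subtree_weight_def .
qed

lemma sum_relabel:
  assumes tau: "\<forall>v\<in>V. \<tau> v \<in> V \<and> \<tau> (\<tau> v) = v"
  shows "sum (f \<circ> \<tau>) V = sum f V"
  by (rule sum.reindex_bij_witness[of V \<tau> \<tau>]) (use tau in auto)

lemma sum_relabel_nonroot:
  assumes tau: "\<forall>v\<in>V. \<tau> v \<in> V \<and> \<tau> (\<tau> v) = v"
  shows "(\<Sum>p\<in>V - {\<tau> r}. G (\<tau> p)) = (\<Sum>z\<in>V - {r}. (G z :: real))"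
  by (rule sum.reindex_bij_witness[of _ \<tau> \<tau>]) (use tau rV in \<open>auto, metis+\<close>)

lemma sum_relabel_image:
  assumes tau: "\<forall>v\<in>V. \<tau> v \<in> V \<and> \<tau> (\<tau> v) = v" and q: "q \<in> V"
  shows "(\<Sum>z'\<in>\<tau> ` anc (\<tau> q). G (\<tau> z')) = (\<Sum>z\<in>anc (\<tau> q). (G z :: real))"
proof -
  have tq: "\<tau> q \<in> V" using tau q by auto
  have sub: "anc (\<tau> q) \<subseteq> V" using anc_sub tq by auto
  have inj: "inj_on \<tau> (anc (\<tau> q))" using tau sub by (metis inj_onI subsetD)
  have "(\<Sum>z'\<in>\<tau> ` anc (\<tau> q). G (\<tau> z')) = (\<Sum>z\<in>anc (\<tau> q). G (\<tau> (\<tau> z)))"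
    by (simp add: sum.reindex[OF inj])
  also have "\<dots> = (\<Sum>z\<in>anc (\<tau> q). G z)"
    by (rule sum.cong[OF refl]) (use sub tau in auto)
  finally show ?thesis .
qed

lemma cut_cost_relabel:
  assumes tau: "\<forall>v\<in>V. \<tau> v \<in> V \<and> \<tau> (\<tau> v) = v"
  shows "cut_cost V (\<tau> r) (\<lambda>v. \<tau> ` anc (\<tau> v)) \<mu> = cut_cost V r anc (\<mu> \<circ> \<tau>)"
proof -
  define f where "f q = subtree_weight V anc (\<mu> \<circ> \<tau>) q * (sum \<mu> V - subtree_weight V anc (\<mu> \<circ> \<tau>) q)" for q
  have "cut_cost V (\<tau> r) (\<lambda>v. \<tau> ` anc (\<tau> v)) \<mu> = (\<Sum>p\<in>V - {\<tau> r}. f (\<tau> p))"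
    unfolding cut_cost_def f_def by (rule sum.cong[OF refl]) (simp add: subtree_weight_relabel[OF tau])
  also have "\<dots> = (\<Sum>q\<in>V - {r}. f q)" by (rule sum_relabel_nonroot[OF tau])
  finally show ?thesis unfolding cut_cost_def f_def sum_relabel[OF tau] .
qed

lemma children_relabel:
  assumes tau: "\<forall>v\<in>V. \<tau> v \<in> V \<and> \<tau> (\<tau> v) = v" and v: "v \<in> V"
  shows "{u \<in> V - {\<tau> r}. \<tau> (par (\<tau> u)) = v} = \<tau> ` {u \<in> V - {r}. par u = \<tau> v}"
proof
  show "{u \<in> V - {\<tau> r}. \<tau> (par (\<tau> u)) = v} \<subseteq> \<tau> ` {u \<in> V - {r}. par u = \<tau> v}"
  proof
    fix u assume u: "u \<in> {u \<in> V - {\<tau> r}. \<tau> (par (\<tau> u)) = v}"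
    then have uV: "u \<in> V" "u \<noteq> \<tau> r" "\<tau> (par (\<tau> u)) = v" by auto
    have t1: "\<tau> u \<in> V" using uV tau by blast
    have t2: "\<tau> u \<noteq> r"
    proof
      assume "\<tau> u = r"
      then have "\<tau> (\<tau> u) = \<tau> r" by simp
      then show False using uV tau by simp
    qed
    have t3: "par (\<tau> u) \<in> V" using par_in_V t1 t2 by blast
    have "par (\<tau> u) = \<tau> v" using uV(3) tau t3 by (metis)
    then have "\<tau> u \<in> {u \<in> V - {r}. par u = \<tau> v}" using t1 t2 by simp
    moreover have "u = \<tau> (\<tau> u)" using tau uV by simp
    ultimately show "u \<in> \<tau> ` {u \<in> V - {r}. par u = \<tau> v}" by (rule rev_image_eqI)
  qed
next
  show "\<tau> ` {u \<in> V - {r}. par u = \<tau> v} \<subseteq> {u \<in> V - {\<tau> r}. \<tau> (par (\<tau> u)) = v}"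
  proof
    fix x assume "x \<in> \<tau> ` {u \<in> V - {r}. par u = \<tau> v}"
    then obtain u where u: "u \<in> V" "u \<noteq> r" "par u = \<tau> v" "x = \<tau> u" by auto
    have "x \<in> V" using u tau by blast
    moreover have "x \<noteq> \<tau> r"
    proof
      assume "x = \<tau> r"
      then have "\<tau> x = \<tau> (\<tau> r)" by simp
      then show False using u tau by simp
    qed
    moreover have "\<tau> (par (\<tau> x)) = v" using u tau v by simp
    ultimately show "x \<in> {u \<in> V - {\<tau> r}. \<tau> (par (\<tau> u)) = v}" by simp
  qed
qed

lemma parent_deg_relabel:
  assumes tau: "\<forall>v\<in>V. \<tau> v \<in> V \<and> \<tau> (\<tau> v) = v" and v: "v \<in> V"
  shows "parent_deg V (\<lambda>v. \<tau> (par (\<tau> v))) (\<tau> r) v = parent_deg V par r (\<tau> v)"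
proof -
  have "inj_on \<tau> V" using tau by (metis inj_onI)
  then have "card (\<tau> ` {u \<in> V - {r}. par u = \<tau> v}) = card {u \<in> V - {r}. par u = \<tau> v}"
    by (rule card_image[OF inj_on_subset]) auto
  moreover have "(v = \<tau> r) = (\<tau> v = r)" using tau v by auto
  ultimately show ?thesis unfolding parent_deg_def children_relabel[OF tau v] by simp
qed

end

locale subtree_swap = rooted_tree +
  fixes u v
  assumes u: "u \<in> V" "u \<noteq> r" and v: "v \<in> V" "v \<noteq> r"
    and uv: "u \<notin> anc v" and vu: "v \<notin> anc u"
begin

definition par' where "par' = par(u := par v, v := par u)"
definition anc' where "anc' w = (if u \<in> anc w then (anc w - anc (par u)) \<union> anc (par v)
    else if v \<in> anc w then (anc w - anc (par v)) \<union> anc (par u) else anc w)"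

lemma u_ne_v: "u \<noteq> v" using uv self_in u by auto

lemma pu: "par u \<in> V" using par_in_V u by auto
lemma pv: "par v \<in> V" using par_in_V v by auto

lemma not_both: "w \<in> V \<Longrightarrow> u \<in> anc w \<Longrightarrow> v \<in> anc w \<Longrightarrow> False"
  using anc_chain[of w u v] uv vu u_ne_v by auto

lemma notin_anc_par_uv: "u \<notin> anc (par v)" "u \<notin> anc (par u)" "v \<notin> anc (par u)" "v \<notin> anc (par v)"
  using uv vu anc_rec[of v] anc_rec[of u] v notin_anc_par u by auto

lemma anc_par_u_sub: "w \<in> V \<Longrightarrow> u \<in> anc w \<Longrightarrow> anc (par u) \<subseteq> anc w"
  using anc_rec[of u] anc_trans[of w u] u by auto

lemma anc'_parts_disjoint: "w \<in> V \<Longrightarrow> u \<in> anc w \<Longrightarrow> (anc w - anc (par u)) \<inter> anc (par v) = {}"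
proof (rule ccontr)
  assume w: "w \<in> V" and uw: "u \<in> anc w" and "(anc w - anc (par u)) \<inter> anc (par v) \<noteq> {}"
  then obtain y where y: "y \<in> anc w" "y \<notin> anc (par u)" "y \<in> anc (par v)" by auto
  have "u \<in> anc y"
    using anc_chain[OF w y(1) uw] anc_rec[of u] u y(2) self_in[of y] anc_sub[OF w] y(1) by auto
  moreover have "anc y \<subseteq> anc (par v)" using anc_trans[OF pv y(3)] .
  ultimately show False using notin_anc_par_uv by auto
qed

lemma anc'_below_u:
  assumes w: "w \<in> V" "w \<noteq> r" and uw: "u \<in> anc w"
  shows "anc' w = insert w (anc' (par' w)) \<and> w \<notin> anc' (par' w)"
proof (cases "w = u")
  case True
  have "anc u - anc (par u) = {u}" using anc_rec[of u] u notin_anc_par_uv by auto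
  then have "anc' u = insert u (anc (par v))" unfolding anc'_def using self_in u by auto
  moreover have "anc' (par v) = anc (par v)"
    unfolding anc'_def using notin_anc_par_uv notin_anc_par_uv by simp
  ultimately show ?thesis using True notin_anc_par_uv unfolding par'_def using u_ne_v by simp
next
  case False
  have "v \<notin> anc w" using not_both w uw by blast
  then have pw': "par' w = par w" unfolding par'_def using False self_in v by auto
  have Aw: "anc w = insert w (anc (par w))" "w \<notin> anc (par w)" using anc_rec notin_anc_par w by auto
  then have "u \<in> anc (par w)" using uw False by auto
  then have "anc' (par w) = (anc (par w) - anc (par u)) \<union> anc (par v)" unfolding anc'_def by simp
  moreover have "anc' w = (anc w - anc (par u)) \<union> anc (par v)" unfolding anc'_def using uw by simp
  moreover have "w \<notin> anc (par u)" "w \<notin> anc (par v)"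
    using anc_trans[OF pu] anc_trans[OF pv] uw notin_anc_par_uv by blast+
  ultimately show ?thesis using Aw pw' by auto
qed

lemma of_bool_anc'_u:
  assumes w: "w \<in> V" and uw: "u \<in> anc w" and z: "z \<in> V"
  shows "(of_bool (z \<in> anc' w) :: real) = of_bool (z \<in> anc w) + of_bool (z \<in> anc (par v)) - of_bool (z \<in> anc (par u))"
proof -
  have A'w: "anc' w = (anc w - anc (par u)) \<union> anc (par v)" unfolding anc'_def using uw by simp
  have d: "(anc w - anc (par u)) \<inter> anc (par v) = {}" using anc'_parts_disjoint[OF w uw] .
  have s: "anc (par u) \<subseteq> anc w" using anc_par_u_sub[OF w uw] .
  show ?thesis unfolding A'w using d s by (cases "z \<in> anc (par v)"; cases "z \<in> anc w"; cases "z \<in> anc (par u)") auto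
qed

sublocale sym: subtree_swap V par r anc v u
  by unfold_locales (use u v uv vu in auto)

lemma sym_par': "sym.par' = par'"
  unfolding par'_def sym.par'_def using u_ne_v by (simp add: fun_upd_twist)

lemma sym_anc': "w \<in> V \<Longrightarrow> sym.anc' w = anc' w"
  unfolding anc'_def sym.anc'_def using not_both by auto

lemma rooted': "rooted V par' r anc'"
  unfolding rooted_def
proof (intro conjI ballI)
  fix w assume "w \<in> V - {r}"
  then have w: "w \<in> V" "w \<noteq> r" by auto
  have "anc' w = insert w (anc' (par' w)) \<and> w \<notin> anc' (par' w)"
  proof -
    consider "u \<in> anc w" | "v \<in> anc w" | "u \<notin> anc w" "v \<notin> anc w" by blast
    then show ?thesis
    proof cases
      case 1
      then show ?thesis by (rule anc'_below_u[OF w])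
    next
      case 2
      have "par' w \<in> V" unfolding par'_def using par_in_V w pu pv by auto
      then show ?thesis using sym.anc'_below_u[OF w 2] sym_anc' sym_par' w by simp
    next
      case 3
      then have "w \<noteq> u" "w \<noteq> v" using self_in u v by auto
      then have "par' w = par w" unfolding par'_def by simp
      moreover have "u \<notin> anc (par w)" "v \<notin> anc (par w)" using 3 anc_rec w by auto
      ultimately show ?thesis using 3 anc_rec notin_anc_par w unfolding anc'_def by auto
    qed
  qed
  then show "anc' w = insert w (anc' (par' w))" "w \<notin> anc' (par' w)" by auto
  show "par' w \<in> V" unfolding par'_def using par_in_V w pu pv by auto
next
  fix w assume "w \<in> V"
  then show "anc' w \<subseteq> V" unfolding anc'_def using anc_sub pu pv by auto
qed (auto simp: anc'_def)

lemma of_bool_anc'_v: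
  assumes w: "w \<in> V" and vw: "v \<in> anc w" and z: "z \<in> V"
  shows "(of_bool (z \<in> anc' w) :: real) = of_bool (z \<in> anc w) + of_bool (z \<in> anc (par u)) - of_bool (z \<in> anc (par v))"
  using sym.of_bool_anc'_u[OF w vw z] sym_anc'[OF w] by simp

lemma subtree_weight_anc':
  assumes z: "z \<in> V"
  shows "subtree_weight V anc' \<mu> z = subtree_weight V anc \<mu> z + (subtree_weight V anc \<mu> v - subtree_weight V anc \<mu> u) * (of_bool (z \<in> anc (par u)) - of_bool (z \<in> anc (par v)))"
proof -
  define a where "a = (of_bool (z \<in> anc (par u)) :: real)"
  define b where "b = (of_bool (z \<in> anc (par v)) :: real)"
  have pt: "\<mu> w * of_bool (z \<in> anc' w) = \<mu> w * of_bool (z \<in> anc w)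
       + (\<mu> w * of_bool (u \<in> anc w)) * (b - a) + (\<mu> w * of_bool (v \<in> anc w)) * (a - b)" if w: "w \<in> V" for w
  proof (cases "u \<in> anc w")
    case True
    then have nv: "v \<notin> anc w" using not_both w by blast
    have e: "of_bool (z \<in> anc' w) = of_bool (z \<in> anc w) + b - a" using of_bool_anc'_u[OF w True z] unfolding a_def b_def .
    show ?thesis unfolding e using True nv by (simp add: algebra_simps)
  next
    case False
    show ?thesis
    proof (cases "v \<in> anc w")
      case True
      have e: "of_bool (z \<in> anc' w) = of_bool (z \<in> anc w) + a - b" using of_bool_anc'_v[OF w True z] unfolding a_def b_def .
      show ?thesis unfolding e using True False by (simp add: algebra_simps)
    next
      case F2: False
      then have "anc' w = anc w" unfolding anc'_def using False by simp
      then show ?thesis using False F2 by simp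
    qed
  qed
  have "subtree_weight V anc' \<mu> z = (\<Sum>w\<in>V. \<mu> w * of_bool (z \<in> anc w)
       + (\<mu> w * of_bool (u \<in> anc w)) * (b - a) + (\<mu> w * of_bool (v \<in> anc w)) * (a - b))"
    unfolding subtree_weight_def by (rule sum.cong[OF refl]) (rule pt)
  also have "\<dots> = subtree_weight V anc \<mu> z + subtree_weight V anc \<mu> u * (b - a) + subtree_weight V anc \<mu> v * (a - b)"
    unfolding subtree_weight_def by (simp only: sum.distrib sum_distrib_right)
  finally show ?thesis unfolding a_def b_def by (simp add: algebra_simps)
qed

lemma par'_eq: "w \<in> V \<Longrightarrow> par' w = par (transpose u v w)"
  unfolding par'_def transpose_def by auto

lemma parent_deg_par': "x \<in> V \<Longrightarrow> parent_deg V par' r x = parent_deg V par r x"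
proof -
  assume x: "x \<in> V"
  have "{w \<in> V - {r}. par' w = x} = transpose u v ` {w \<in> V - {r}. par w = x}"
  proof
    show "{w \<in> V - {r}. par' w = x} \<subseteq> transpose u v ` {w \<in> V - {r}. par w = x}"
    proof
      fix w assume w: "w \<in> {w \<in> V - {r}. par' w = x}"
      then have "transpose u v w \<in> {w \<in> V - {r}. par w = x}" using par'_eq[of w] u v transpose_in[of u V v w]
        by (auto simp: transpose_def split: if_splits)
      then show "w \<in> transpose u v ` {w \<in> V - {r}. par w = x}" by (metis transpose_involutory image_eqI)
    qed
  next
    show "transpose u v ` {w \<in> V - {r}. par w = x} \<subseteq> {w \<in> V - {r}. par' w = x}"
    proof
      fix y assume "y \<in> transpose u v ` {w \<in> V - {r}. par w = x}"
      then obtain w where w: "w \<in> V" "w \<noteq> r" "par w = x" "y = transpose u v w" by auto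
      have "transpose u v w \<in> V" using transpose_in[of u V v w] u v w by simp
      moreover have "transpose u v w \<noteq> r" using w u v by (auto simp: transpose_def)
      moreover have "par' (transpose u v w) = x" using par'_eq[of "transpose u v w"] calculation w by simp
      ultimately show "y \<in> {w \<in> V - {r}. par' w = x}" using w by simp
    qed
  qed
  moreover have "inj_on (transpose u v) {w \<in> V - {r}. par w = x}" by (rule inj_onI) (metis transpose_involutory)
  ultimately show ?thesis unfolding parent_deg_def by (simp add: card_image)
qed

end

locale leaf_regraft = rooted_tree +
  fixes R p0 y
  assumes R: "R \<subseteq> V - {r}" and leaves: "\<forall>w\<in>V - {r}. par w \<notin> R"
    and Rp0: "\<forall>x\<in>R. par x = p0" and y: "y \<in> V" "y \<notin> R"
begin

definition par'' where "par'' w = (if w \<in> R then y else par w)"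
definition anc'' where "anc'' w = (if w \<in> R then insert w (anc y) else anc w)"

lemma finite_moved: "finite R" using R finite_subset finV by blast

lemma moved_in_anc_eq: "x \<in> R \<Longrightarrow> w \<in> V \<Longrightarrow> x \<in> anc w \<Longrightarrow> w = x"
  using leaf_in_anc_eq[of x w] R leaves by auto

lemma moved_notin_anc_y: "x \<in> R \<Longrightarrow> x \<notin> anc y"
  using moved_in_anc_eq[of x y] y by auto

lemma rooted'': "rooted V par'' r anc''"
  unfolding rooted_def
proof (intro conjI ballI)
  show "finite V" by simp
  show "r \<in> V" by simp
  show "anc'' r = {}" unfolding anc''_def using R by auto
  fix w assume w: "w \<in> V"
  show "anc'' w \<subseteq> V" unfolding anc''_def using anc_sub w y by auto
next
  fix w assume w: "w \<in> V - {r}"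
  have gl: "par'' w \<in> V \<and> anc'' w = insert w (anc'' (par'' w)) \<and> w \<notin> anc'' (par'' w)"
  proof (cases "w \<in> R")
    case True
    have "anc'' y = anc y" unfolding anc''_def using y by simp
    then show ?thesis unfolding par''_def anc''_def using True y moved_notin_anc_y by simp
  next
    case False
    have "par w \<notin> R" using leaves w by auto
    then have "anc'' (par w) = anc (par w)" unfolding anc''_def by simp
    moreover have "anc w = insert w (anc (par w))" "w \<notin> anc (par w)" "par w \<in> V"
      using anc_rec[of w] notin_anc_par[of w] par_in_V[of w] w by auto
    ultimately show ?thesis unfolding par''_def using False \<open>par w \<notin> R\<close> \<open>anc'' (par w) = anc (par w)\<close>
      by (simp add: anc''_def)
  qed
  then show "par'' w \<in> V" "anc'' w = insert w (anc'' (par'' w))" "w \<notin> anc'' (par'' w)" by auto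
qed

lemma subtree_weight_anc'':
  assumes z: "z \<in> V"
  shows "subtree_weight V anc'' \<mu> z = subtree_weight V anc \<mu> z + sum \<mu> R * (of_bool (z \<in> anc y) - of_bool (z \<in> anc p0))"
proof -
  define c where "c = (of_bool (z \<in> anc y) - of_bool (z \<in> anc p0) :: real)"
  have pt: "\<mu> w * of_bool (z \<in> anc'' w) = \<mu> w * of_bool (z \<in> anc w) + (\<mu> w * of_bool (w \<in> R)) * c"
    if w: "w \<in> V" for w
  proof (cases "w \<in> R")
    case True
    have Aw: "anc w = insert w (anc p0)" "w \<notin> anc p0" using anc_rec[of w] notin_anc_par[of w] Rp0 True R by auto
    have "w \<notin> anc y" using moved_notin_anc_y True by simp
    then have "(of_bool (z \<in> anc'' w) :: real) = of_bool (z \<in> anc w) + c"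
      unfolding anc''_def c_def using True Aw by (cases "z = w"; cases "z \<in> anc y"; cases "z \<in> anc p0") auto
    then show ?thesis using True by (simp add: algebra_simps)
  next
    case False
    then show ?thesis unfolding anc''_def by simp
  qed
  have "subtree_weight V anc'' \<mu> z = (\<Sum>w\<in>V. \<mu> w * of_bool (z \<in> anc w) + (\<mu> w * of_bool (w \<in> R)) * c)"
    unfolding subtree_weight_def by (rule sum.cong[OF refl]) (rule pt)
  also have "\<dots> = subtree_weight V anc \<mu> z + (\<Sum>w\<in>V. \<mu> w * of_bool (w \<in> R)) * c"
    unfolding subtree_weight_def by (simp only: sum.distrib sum_distrib_right)
  also have "(\<Sum>w\<in>V. \<mu> w * of_bool (w \<in> R)) = sum \<mu> R"
  proof -
    have "(\<Sum>w\<in>V. \<mu> w * of_bool (w \<in> R)) = (\<Sum>w\<in>V. if w \<in> R then \<mu> w else 0)"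
      by (rule sum.cong) auto
    also have "\<dots> = sum \<mu> (V \<inter> R)" by (simp add: sum.If_cases Int_def)
    also have "V \<inter> R = R" using R by auto
    finally show ?thesis .
  qed
  finally show ?thesis unfolding c_def .
qed

lemma parent_deg_par'':
  assumes x: "x \<in> V"
  shows "parent_deg V par'' r x + (if x = p0 \<and> R \<noteq> {} then card R else 0) = parent_deg V par r x + (if x = y then card R else 0)"
proof -
  define C0 where "C0 = {w \<in> V - {r} - R. par w = x}"
  have c1: "{w \<in> V - {r}. par'' w = x} = C0 \<union> (if x = y then R else {})"
    unfolding C0_def par''_def using R by auto
  have c2: "{w \<in> V - {r}. par w = x} = C0 \<union> (if x = p0 \<and> R \<noteq> {} then R else {})"
    unfolding C0_def using R Rp0 by auto
  have fC0: "finite C0" unfolding C0_def by simp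
  have d: "C0 \<inter> R = {}" unfolding C0_def by auto
  have e1: "card {w \<in> V - {r}. par'' w = x} = card C0 + (if x = y then card R else 0)"
    unfolding c1 using fC0 finite_moved d by (auto simp: card_Un_disjoint)
  have e2: "card {w \<in> V - {r}. par w = x} = card C0 + (if x = p0 \<and> R \<noteq> {} then card R else 0)"
    unfolding c2 using fC0 finite_moved d by (auto simp: card_Un_disjoint)
  show ?thesis unfolding parent_deg_def e1 e2 by simp
qed

end

section \<open>Optimal trees rooted at a centroid\<close>

lemma card_sym_diff_singleton:
  assumes "finite X"
  shows "real (card (sym_diff X {a})) = real (card X) + 1 - 2 * of_bool (a \<in> X)"
proof (cases "a \<in> X")
  case True
  then have "sym_diff X {a} = X - {a}" by auto
  moreover have "card X \<ge> 1" using True assms by (metis One_nat_def Suc_leI card_gt_0_iff empty_iff)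
  moreover have "card (X - {a}) = card X - 1" using True assms by (simp add: card_Diff_singleton)
  ultimately show ?thesis using True by (simp add: of_nat_diff)
next
  case False
  then have "sym_diff X {a} = insert a X" by auto
  then show ?thesis using False assms by simp
qed

text \<open>A root \<open>c\<close> minimising \<open>\<Sum>v. \<mu> v * d(v, c)\<close> is a centroid: moving it to a child \<open>ch\<close>
  changes the sum by \<open>sum \<mu> V - 2 * subtree_weight ch\<close>.\<close>

lemma exists_centroid_root:
  assumes T: "tree V E" and ne: "V \<noteq> {}" and mu: "\<forall>v\<in>V. 0 \<le> \<mu> v"
  shows "\<exists>c par anc. rooted V par c anc \<and> E = parent_edges V par c \<and> (\<forall>p\<in>V - {c}. 2 * subtree_weight V anc \<mu> p \<le> sum \<mu> V)"
proof -
  have fin: "finite V" using T tree_def by auto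
  define F where "F c = (\<Sum>v\<in>V. \<mu> v * real (tdist E v c))" for c
  define m where "m = Min (F ` V)"
  have "m \<in> F ` V" unfolding m_def using fin ne by (intro Min_in) auto
  then obtain c where c: "c \<in> V" "F c = m" by auto
  have cmin: "F c \<le> F c'" if "c' \<in> V" for c' using c fin that unfolding m_def by (metis Min_le finite_imageI image_eqI)
  obtain par anc where R: "rooted V par c anc" and E: "E = parent_edges V par c" using tree_rooted[OF T c(1)] by blast
  interpret rooted_tree V par c anc by (rule rooted_tree.intro[OF R])
  have Fx: "F x = (\<Sum>v\<in>V. \<mu> v * real (card (sym_diff (anc v) (anc x))))" if "x \<in> V" for x
    unfolding F_def E using that by (intro sum.cong refl) (simp add: tdist_parent_edges)
  have all: "2 * subtree_weight V anc \<mu> p \<le> sum \<mu> V" if p: "p \<in> V - {c}" for p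
  proof -
    obtain ch where ch: "ch \<in> anc p" "ch \<in> V" "ch \<noteq> c" "par ch = c" using top_exists[of p] p by auto
    have Ach: "anc ch = {ch}" using anc_rec[of ch] ch by simp
    have "F ch = (\<Sum>v\<in>V. \<mu> v * (real (card (anc v)) + 1 - 2 * of_bool (ch \<in> anc v)))"
      unfolding Fx[OF ch(2)] Ach by (intro sum.cong refl) (simp add: card_sym_diff_singleton)
    also have "\<dots> = (\<Sum>v\<in>V. \<mu> v * real (card (anc v))) + sum \<mu> V - 2 * subtree_weight V anc \<mu> ch"
    proof -
      have "(\<Sum>v\<in>V. \<mu> v * (real (card (anc v)) + 1 - 2 * of_bool (ch \<in> anc v)))
          = (\<Sum>v\<in>V. \<mu> v * real (card (anc v)) + \<mu> v - 2 * (\<mu> v * of_bool (ch \<in> anc v)))"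
        by (rule sum.cong[OF refl]) (simp add: algebra_simps)
      also have "\<dots> = (\<Sum>v\<in>V. \<mu> v * real (card (anc v))) + sum \<mu> V - 2 * (\<Sum>v\<in>V. \<mu> v * of_bool (ch \<in> anc v))"
        by (simp only: sum.distrib sum_subtractf sum_distrib_left[symmetric])
      finally show ?thesis unfolding subtree_weight_def .
    qed
    finally have Fch: "F ch = (\<Sum>v\<in>V. \<mu> v * real (card (anc v))) + sum \<mu> V - 2 * subtree_weight V anc \<mu> ch" .
    have "F c = (\<Sum>v\<in>V. \<mu> v * real (card (anc v)))"
      unfolding Fx[OF c(1)] by (intro sum.cong refl) simp
    then have "2 * subtree_weight V anc \<mu> ch \<le> sum \<mu> V" using cmin[OF ch(2)] Fch by simp
    moreover have "subtree_weight V anc \<mu> p \<le> subtree_weight V anc \<mu> ch" using subtree_weight_mono[OF mu _ ch(1)] p by auto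
    ultimately show ?thesis by simp
  qed
  show ?thesis using R E all by blast
qed

lemma (in subtree_swap) cut_cost_swap_less:
  assumes mu: "\<forall>v\<in>V. 0 \<le> \<mu> v"
    and cent: "\<forall>p\<in>V - {r}. 2 * subtree_weight V anc \<mu> p \<le> sum \<mu> V"
    and level: "depth (par v) = depth u" and v_r: "par v \<noteq> r"
    and heavier: "subtree_weight V anc \<mu> u < subtree_weight V anc \<mu> v"
    and above: "\<forall>y\<in>V - {r}. \<forall>z\<in>V - {r}. depth y < depth z \<and> depth z < depth v
                  \<longrightarrow> subtree_weight V anc \<mu> z \<le> subtree_weight V anc \<mu> y"
  shows "cut_cost V r anc' \<mu> < cut_cost V r anc \<mu>"
proof -
  define w where "w = subtree_weight V anc \<mu>"
  define F where "F x = x * (sum \<mu> V - x)" for x :: real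
  define \<delta> where "\<delta> = w v - w u"
  have dpos: "\<delta> > 0" unfolding \<delta>_def w_def using heavier by simp
  have hu: "depth u = Suc (depth (par u))" and hv: "depth v = Suc (depth (par v))"
    using depth_rec u v by auto
  have "cut_cost V r anc' \<mu> - cut_cost V r anc \<mu> =
     (\<Sum>z\<in>anc (par u) - anc (par v). F (w z + \<delta>) - F (w z)) +
     (\<Sum>z\<in>anc (par v) - anc (par u). F (w z - \<delta>) - F (w z))"
    unfolding cut_cost_def F_def w_def by (rule sum_shift_paths[OF pv pu]) (simp add: subtree_weight_anc' \<delta>_def w_def)
  also have "\<dots> < 0"
  proof (rule paired_sum_neg[OF pu pv, of 1])
    show "depth (par v) = depth (par u) + 1" using level hu by simp
  next
    fix y z assume y: "y \<in> anc (par u) - anc (par v)" and z: "z \<in> anc (par v) - anc (par u)"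
      and hz: "depth z = depth y + 1"
    have "y \<in> V - {r}" "z \<in> V - {r}" using y z anc_sub' pu pv by auto
    moreover have "depth z < depth v" using depth_mono pv z hv by fastforce
    ultimately have "w z \<le> w y" using above hz unfolding w_def by simp
    moreover have "F (w y + \<delta>) - F (w y) + (F (w z - \<delta>) - F (w z)) = (2 * \<delta>) * (w z - w y - \<delta>)"
      unfolding F_def by (simp add: algebra_simps)
    ultimately show "F (w y + \<delta>) - F (w y) + (F (w z - \<delta>) - F (w z)) < 0"
      using dpos mult_pos_neg[of "2 * \<delta>" "w z - w y - \<delta>"] by simp
  next
    fix z assume z: "z \<in> anc (par v) - anc (par u)"
    have "2 * w z \<le> sum \<mu> V" using cent z anc_sub' pv unfolding w_def by blast
    moreover have "F (w z - \<delta>) - F (w z) = - (\<delta> * (sum \<mu> V - 2 * w z + \<delta>))"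
      unfolding F_def by (simp add: algebra_simps)
    ultimately show "F (w z - \<delta>) - F (w z) < 0"
      using dpos mult_pos_pos[of \<delta> "sum \<mu> V - 2 * w z + \<delta>"] by simp
  next
    have "par v \<notin> anc (par u)" using depth_mono[OF pu] level hu by fastforce
    then show "anc (par v) - anc (par u) \<noteq> {}" using self_in pv v_r by blast
  qed
  finally show ?thesis by simp
qed

context rooted_tree
begin

text \<open>In an optimal tree rooted at a centroid, subtree weights decrease with depth: otherwise take
  a violation \<open>(u, v)\<close> with \<open>v\<close> of least depth; then \<open>par v\<close> lies on the level of \<open>u\<close> and
  swapping the subtrees at \<open>u\<close> and \<open>v\<close> decreases the cost.\<close>

lemma subtree_weight_antimono:
  assumes mu: "\<forall>v\<in>V. 0 \<le> \<mu> v"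
    and cent: "\<forall>p\<in>V - {r}. 2 * subtree_weight V anc \<mu> p \<le> sum \<mu> V"
    and opt: "\<And>par' anc'. rooted V par' r anc' \<Longrightarrow> (\<forall>x\<in>V. parent_deg V par' r x = parent_deg V par r x)
               \<Longrightarrow> cut_cost V r anc \<mu> \<le> cut_cost V r anc' \<mu>"
  shows "\<forall>u\<in>V - {r}. \<forall>v\<in>V - {r}. depth u < depth v \<longrightarrow> subtree_weight V anc \<mu> v \<le> subtree_weight V anc \<mu> u"
proof (rule ccontr)
  define w where "w = subtree_weight V anc \<mu>"
  define B where "B = {v \<in> V - {r}. \<exists>u\<in>V - {r}. depth u < depth v \<and> w u < w v}"
  assume "\<not> (\<forall>u\<in>V - {r}. \<forall>v\<in>V - {r}. depth u < depth v \<longrightarrow> subtree_weight V anc \<mu> v \<le> subtree_weight V anc \<mu> u)"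
  then obtain v0 where "v0 \<in> B" unfolding B_def w_def by force
  then obtain v where vB: "v \<in> B" and vmin: "\<And>v'. v' \<in> B \<Longrightarrow> depth v \<le> depth v'"
    using ex_has_least_nat[of "\<lambda>v. v \<in> B" v0 depth] by blast
  then obtain u where u: "u \<in> V" "u \<noteq> r" and huv: "depth u < depth v" and wuv: "w u < w v"
    and v: "v \<in> V" "v \<noteq> r" unfolding B_def by blast
  have above: "\<forall>y\<in>V - {r}. \<forall>z\<in>V - {r}. depth y < depth z \<and> depth z < depth v \<longrightarrow> w z \<le> w y"
  proof (intro ballI impI)
    fix y z assume yz: "y \<in> V - {r}" "z \<in> V - {r}" "depth y < depth z \<and> depth z < depth v"
    show "w z \<le> w y"
    proof (rule ccontr)
      assume "\<not> w z \<le> w y"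
      then have "z \<in> B" unfolding B_def using yz by force
      then show False using vmin yz by fastforce
    qed
  qed
  have pvV: "par v \<in> V" using par_in_V v by auto
  have pvr: "par v \<noteq> r"
  proof
    assume "par v = r"
    then have "depth v = 1" using depth_rec[of v] v by simp
    then show False using huv depth_rec[of u] u by simp
  qed
  have "w v \<le> w (par v)" using subtree_weight_mono[OF mu v(1) par_in_anc[OF v pvr]] unfolding w_def .
  have level: "depth (par v) = depth u"
  proof (rule ccontr)
    assume "depth (par v) \<noteq> depth u"
    then have "depth u < depth (par v)" using huv depth_rec[of v] v by simp
    then have "par v \<in> B" unfolding B_def using u pvV pvr wuv \<open>w v \<le> w (par v)\<close> by force
    then show False using vmin depth_rec[of v] v by fastforce
  qed
  have "u \<notin> anc v"
  proof
    assume "u \<in> anc v"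
    then have "w v \<le> w u" using subtree_weight_mono[OF mu v(1)] unfolding w_def by blast
    then show False using wuv by simp
  qed
  moreover have "v \<notin> anc u"
  proof
    assume "v \<in> anc u"
    then have "depth v \<le> depth u" using depth_mono u by blast
    then show False using huv by simp
  qed
  ultimately interpret subtree_swap V par r anc u v by unfold_locales (use u v in auto)
  have "cut_cost V r anc' \<mu> < cut_cost V r anc \<mu>"
    by (rule cut_cost_swap_less[OF mu cent level pvr wuv[unfolded w_def] above[unfolded w_def]])
  moreover have "cut_cost V r anc \<mu> \<le> cut_cost V r anc' \<mu>" using opt[OF rooted'] parent_deg_par' by blast
  ultimately show False by simp
qed


lemma no_children_if_deg_1:
  assumes "v \<in> V" "v \<noteq> r" "parent_deg V par r v = 1"
  shows "\<forall>w\<in>V - {r}. par w \<noteq> v"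
proof -
  have "card {u \<in> V - {r}. par u = v} = 0" using assms unfolding parent_deg_def by simp
  then have "{u \<in> V - {r}. par u = v} = {}" by simp
  then show ?thesis by blast
qed

lemma parent_deg_nochild:
  assumes "v \<in> V" "v \<noteq> r" "\<forall>w\<in>V - {r}. par w \<noteq> v"
  shows "parent_deg V par r v = 1"
proof -
  have "{u \<in> V - {r}. par u = v} = {}" using assms by blast
  then show ?thesis unfolding parent_deg_def using assms by simp
qed

lemma parent_deg_child:
  assumes "v \<in> V" "v \<noteq> r" "w \<in> V" "w \<noteq> r" "par w = v"
  shows "parent_deg V par r v \<ge> 2"
proof -
  have "w \<in> {u \<in> V - {r}. par u = v}" using assms by simp
  then have "card {u \<in> V - {r}. par u = v} \<ge> 1"
    by (metis (no_types, lifting) One_nat_def Suc_leI card_gt_0_iff empty_iff finV finite_Diff finite_subset mem_Collect_eq subsetI)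
  then show ?thesis unfolding parent_deg_def using assms by simp
qed

lemma deepest_no_children:
  assumes hD: "\<forall>v\<in>V. depth v \<le> D" and v: "v \<in> V" "depth v = D"
  shows "\<forall>w\<in>V - {r}. par w \<noteq> v"
proof (intro ballI notI)
  fix w assume w: "w \<in> V - {r}" and pw: "par w = v"
  then have "depth w = Suc D" using depth_rec[of w] v by simp
  then show False using hD w by fastforce
qed

lemma path_weight_leaf:
  assumes x: "x \<in> V" "x \<noteq> r" and nc: "\<forall>w\<in>V - {r}. par w \<noteq> x"
  shows "path_weight V anc \<mu> x = path_weight V anc \<mu> (par x) + \<mu> x"
proof -
  have "anc x = insert x (anc (par x))" "x \<notin> anc (par x)" using anc_rec notin_anc_par x by auto
  moreover have "finite (anc (par x))" using finite_anc par_in_V x by auto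
  ultimately have "path_weight V anc \<mu> x = subtree_weight V anc \<mu> x + path_weight V anc \<mu> (par x)" unfolding path_weight_def by simp
  then show ?thesis using subtree_weight_leaf[OF x nc] by simp
qed

lemma path_weight_relabel:
  assumes tau: "\<forall>v\<in>V. \<tau> v \<in> V \<and> \<tau> (\<tau> v) = v" and q: "q \<in> V"
  shows "path_weight V (\<lambda>v. \<tau> ` anc (\<tau> v)) \<mu> q = (\<Sum>z\<in>anc (\<tau> q). subtree_weight V anc (\<mu> \<circ> \<tau>) z)"
proof -
  have tq: "\<tau> q \<in> V" using tau q by auto
  have sub: "anc (\<tau> q) \<subseteq> V" using anc_sub tq by auto
  have inj: "inj_on \<tau> (anc (\<tau> q))" using tau sub by (metis inj_onI subsetD)
  have "path_weight V (\<lambda>v. \<tau> ` anc (\<tau> v)) \<mu> q = (\<Sum>z'\<in>\<tau> ` anc (\<tau> q). subtree_weight V anc (\<mu> \<circ> \<tau>) (\<tau> z'))"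
    unfolding path_weight_def
  proof (rule sum.cong[OF refl])
    fix z' assume "z' \<in> \<tau> ` anc (\<tau> q)"
    then have "z' \<in> V" using sub tau by auto
    then show "subtree_weight V (\<lambda>v. \<tau> ` anc (\<tau> v)) \<mu> z' = subtree_weight V anc (\<mu> \<circ> \<tau>) (\<tau> z')" by (rule subtree_weight_relabel[OF tau])
  qed
  also have "\<dots> = (\<Sum>z\<in>anc (\<tau> q). subtree_weight V anc (\<mu> \<circ> \<tau>) (\<tau> (\<tau> z)))"
    by (simp add: sum.reindex[OF inj])
  also have "\<dots> = (\<Sum>z\<in>anc (\<tau> q). subtree_weight V anc (\<mu> \<circ> \<tau>) z)"
    by (rule sum.cong[OF refl]) (use sub tau in auto)
  finally show ?thesis .
qed

lemma path_weight_shift: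
  assumes q: "q \<in> V" and s': "\<And>z. z \<in> V \<Longrightarrow> s' z = subtree_weight V anc \<mu> z + \<eta> * (of_bool (z \<in> anc b) - of_bool (z \<in> anc a))"
  shows "(\<Sum>z\<in>anc q. s' z) = path_weight V anc \<mu> q + \<eta> * (real (card (anc q \<inter> anc b)) - real (card (anc q \<inter> anc a)))"
proof -
  have sub: "anc q \<subseteq> V" using anc_sub q by auto
  have "(\<Sum>z\<in>anc q. s' z) = (\<Sum>z\<in>anc q. subtree_weight V anc \<mu> z + \<eta> * (of_bool (z \<in> anc b) - of_bool (z \<in> anc a)))"
    by (rule sum.cong[OF refl]) (use sub s' in auto)
  also have "\<dots> = path_weight V anc \<mu> q + \<eta> * ((\<Sum>z\<in>anc q. of_bool (z \<in> anc b)) - (\<Sum>z\<in>anc q. of_bool (z \<in> anc a)))"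
    unfolding path_weight_def by (simp only: sum.distrib sum_distrib_left[symmetric] sum_subtractf)
  also have "(\<Sum>z\<in>anc q. (of_bool (z \<in> anc b) :: real)) = real (card (anc q \<inter> anc b))"
    using finite_anc[OF q] by (simp add: sum_of_bool_eq Int_def)
  also have "(\<Sum>z\<in>anc q. (of_bool (z \<in> anc a) :: real)) = real (card (anc q \<inter> anc a))"
    using finite_anc[OF q] by (simp add: sum_of_bool_eq Int_def)
  finally show ?thesis .
qed


lemma subtree_weight_le_root_leaf:
  assumes mu: "\<forall>v\<in>V. 0 \<le> \<mu> v" and cent: "\<forall>p\<in>V - {r}. 2 * subtree_weight V anc \<mu> p \<le> sum \<mu> V"
    and pr: "parent_deg V par r r = 1" and z: "z \<in> V - {r}"
  shows "subtree_weight V anc \<mu> z \<le> \<mu> r"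
proof -
  have "card {u \<in> V - {r}. par u = r} = 1" using pr unfolding parent_deg_def by simp
  then obtain ch where chs: "{u \<in> V - {r}. par u = r} = {ch}" using card_1_singletonE by blast
  then have ch: "ch \<in> V" "ch \<noteq> r" "par ch = r" by auto
  have inA: "ch \<in> anc v" if "v \<in> V - {r}" for v
  proof -
    have vv: "v \<in> V" "v \<noteq> r" using that by auto
    obtain t where t: "t \<in> anc v" "t \<in> V" "t \<noteq> r" "par t = r" using top_exists[OF vv] by blast
    then have "t = ch" using chs by auto
    then show ?thesis using t by simp
  qed
  have "subtree_weight V anc \<mu> ch = (\<Sum>v\<in>V. if v = r then 0 else \<mu> v)"
    unfolding subtree_weight_def by (rule sum.cong[OF refl]) (use inA in auto)
  also have "\<dots> = sum \<mu> V - \<mu> r"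
  proof -
    have "(\<Sum>v\<in>V. if v = r then 0 else \<mu> v) = (\<Sum>v\<in>V. \<mu> v - (if v = r then \<mu> v else 0))"
      by (rule sum.cong) auto
    also have "\<dots> = sum \<mu> V - \<mu> r" by (simp add: sum_subtractf sum.delta)
    finally show ?thesis .
  qed
  finally have swch: "subtree_weight V anc \<mu> ch = sum \<mu> V - \<mu> r" .
  have "2 * subtree_weight V anc \<mu> ch \<le> sum \<mu> V" using cent ch by auto
  moreover have "2 * subtree_weight V anc \<mu> z \<le> sum \<mu> V" using cent z by auto
  ultimately show ?thesis using swch by linarith
qed

lemma leaf_no_children:
  assumes "v \<in> V" "v \<noteq> r" "d v = 1" "\<forall>v\<in>V. parent_deg V par r v = d v"
  shows "\<forall>w\<in>V - {r}. par w \<noteq> v"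
  using no_children_if_deg_1[of v] assms by auto

lemma exists_child:
  assumes "v \<in> V" "2 \<le> parent_deg V par r v"
  shows "\<exists>w\<in>V - {r}. par w = v"
proof (rule ccontr)
  assume "\<not> ?thesis"
  then have e: "{u \<in> V - {r}. par u = v} = {}" by auto
  have "parent_deg V par r v \<le> 1" unfolding parent_deg_def e by simp
  then show False using assms by simp
qed

end

section \<open>The exchange argument\<close>

definition misplaced :: "nat set \<Rightarrow> nat \<Rightarrow> (nat \<Rightarrow> nat) \<Rightarrow> nat \<Rightarrow> nat set" where
  "misplaced S m par r = {s \<in> S. \<not> (s \<noteq> r \<and> par s = m)}"

text \<open>The situation reached after the first phase of the exchange argument: \<open>m\<close> sits on the
  penultimate level and minimises \<open>path_weight\<close> there, it has \<open>card S\<close> children, and every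
  vertex of \<open>S\<close> that is not yet a child of \<open>m\<close> either lies on the last level or is as heavy as
  the children of \<open>m\<close> outside \<open>S\<close>. Swapping such a vertex with a child of \<open>m\<close> outside \<open>S\<close>
  preserves the situation and does not increase the cost.\<close>

locale gather_state = rooted_tree V par r anc for V par r anc +
  fixes d :: "nat \<Rightarrow> nat" and \<mu> :: "nat \<Rightarrow> real" and m :: nat and height :: nat and S :: "nat set"
  assumes degrees: "\<forall>v\<in>V. parent_deg V par r v = d v"
    and m: "m \<in> V" "m \<noteq> r"
    and depth_le_height: "\<forall>v\<in>V. depth v \<le> height"
    and depth_m: "depth m + 1 = height"
    and card_children_m: "card {u \<in> V - {r}. par u = m} = card S"
    and S: "S \<subseteq> V" "\<forall>s\<in>S. d s = 1"
    and light: "\<forall>s\<in>S. \<forall>x\<in>V. d x = 1 \<and> x \<notin> S \<longrightarrow> \<mu> s \<le> \<mu> x"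
    and misplaced_ok: "\<forall>s\<in>S. \<not> (s \<noteq> r \<and> par s = m) \<longrightarrow> (s \<noteq> r \<and> depth s = height) \<or>
         (\<forall>x\<in>V - {r}. par x = m \<and> x \<notin> S \<longrightarrow> \<mu> s = \<mu> x)"
    and path_weight_m: "\<forall>p\<in>V. depth p + 1 = height \<and> (\<exists>w\<in>V - {r}. par w = p)
         \<longrightarrow> path_weight V anc \<mu> m \<le> path_weight V anc \<mu> p"

locale gather_swap = gather_state +
  fixes s :: nat
  assumes s_misplaced: "s \<in> misplaced S m par r"
begin

definition partner where "partner = (SOME x. x \<in> V - {r} \<and> par x = m \<and> x \<notin> S)"
definition tau where "tau = transpose s partner"
definition par1 where "par1 v = tau (par (tau v))"
definition root1 where "root1 = tau r"
definition anc1 where "anc1 v = tau ` anc (tau v)"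

lemma s: "s \<in> S" "\<not> (s \<noteq> r \<and> par s = m)" "s \<in> V" "d s = 1"
  using s_misplaced S unfolding misplaced_def by auto

lemma partner: "partner \<in> V" "partner \<noteq> r" "par partner = m" "partner \<notin> S"
proof -
  define C where "C = {u \<in> V - {r}. par u = m}"
  have "\<not> C \<subseteq> S"
  proof
    assume sub: "C \<subseteq> S"
    then have "C = S" using card_subset_eq[OF finite_subset[OF S(1) finV] sub] card_children_m C_def by simp
    then show False using s(1,2) C_def by auto
  qed
  then have "\<exists>x. x \<in> V - {r} \<and> par x = m \<and> x \<notin> S" unfolding C_def by blast
  then show "partner \<in> V" "partner \<noteq> r" "par partner = m" "partner \<notin> S"
    unfolding partner_def by (metis (mono_tags, lifting) Diff_iff someI_ex insertI1)+
qed

lemma partner_leaf: "depth partner = height" "\<forall>w\<in>V - {r}. par w \<noteq> partner" "d partner = 1"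
proof -
  show h: "depth partner = height" using depth_rec[of partner] partner depth_m by simp
  show nc: "\<forall>w\<in>V - {r}. par w \<noteq> partner" using deepest_no_children[OF depth_le_height partner(1) h] .
  show "d partner = 1" using parent_deg_nochild[OF partner(1,2) nc] degrees partner by simp
qed

lemma s_ne: "s \<noteq> partner" "s \<noteq> m" "m \<noteq> partner"
proof -
  show "s \<noteq> partner" using s(1) partner(4) by auto
  have "d m \<ge> 2" using parent_deg_child[OF m partner(1,2,3)] degrees m by simp
  then show "s \<noteq> m" using s(4) by auto
  show "m \<noteq> partner" using par_ne[of partner] partner by auto
qed

lemma tau: "\<forall>v\<in>V. tau v \<in> V \<and> tau (tau v) = v"
  unfolding tau_def using transpose_in s(3) partner(1) by auto

lemma tau_simps [simp]: "tau (tau y) = y" "tau s = partner" "tau partner = s" "tau m = m"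
  unfolding tau_def using s_ne by auto

lemma tau_fixes: "v \<noteq> s \<Longrightarrow> v \<noteq> partner \<Longrightarrow> tau v = v"
  unfolding tau_def by simp

sublocale relabelled: rooted_tree V par1 root1 anc1
  unfolding par1_def root1_def anc1_def by (rule rooted_tree.intro[OF rooted_relabel[OF tau]])

lemma card_anc1: "v \<in> V \<Longrightarrow> card (anc1 v) = depth (tau v)"
  unfolding anc1_def by (rule card_relabel[OF tau])

lemma root1_iff: "v = root1 \<longleftrightarrow> tau v = r"
  unfolding root1_def by (metis tau_simps(1))

lemma swap_degrees: "\<forall>v\<in>V. parent_deg V par1 root1 v = d v"
proof
  fix v assume v: "v \<in> V"
  have "parent_deg V par1 root1 v = d (tau v)"
    unfolding par1_def root1_def using parent_deg_relabel[OF tau v] degrees tau v by auto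
  also have "d (tau v) = d v" using s(4) partner_leaf(3) tau_fixes by (cases "v = s \<or> v = partner") auto
  finally show "parent_deg V par1 root1 v = d v" .
qed

lemma swap_children_m: "card {u \<in> V - {root1}. par1 u = m} = card S"
proof -
  have "{u \<in> V - {root1}. par1 u = m} = tau ` {u \<in> V - {r}. par u = m}"
    unfolding par1_def root1_def using children_relabel[OF tau m(1)] by simp
  moreover have "inj_on tau V" using tau by (metis inj_onI)
  ultimately show ?thesis using card_children_m by (simp add: card_image inj_on_subset)
qed

lemma swap_other_S: "s' \<in> S \<Longrightarrow> s' \<noteq> s \<Longrightarrow> (s' \<noteq> root1 \<longleftrightarrow> s' \<noteq> r) \<and> (par1 s' = m \<longleftrightarrow> par s' = m)"
  using tau_fixes[of s'] partner(4) root1_iff unfolding par1_def by (metis tau_simps(1,4))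

lemma s_placed: "s \<noteq> root1" "par1 s = m"
  using root1_iff partner(2,3) unfolding par1_def by auto

lemma swap_misplaced_less: "card (misplaced S m par1 root1) < card (misplaced S m par r)"
proof (rule psubset_card_mono)
  show "finite (misplaced S m par r)" unfolding misplaced_def using finite_subset[OF S(1) finV] by simp
  have "misplaced S m par1 root1 \<subseteq> misplaced S m par r - {s}"
  proof
    fix s' assume "s' \<in> misplaced S m par1 root1"
    then have s': "s' \<in> S" "\<not> (s' \<noteq> root1 \<and> par1 s' = m)" unfolding misplaced_def by auto
    then have "s' \<noteq> s" using s_placed by auto
    then show "s' \<in> misplaced S m par r - {s}" using s' swap_other_S[OF s'(1)] unfolding misplaced_def by auto
  qed
  then show "misplaced S m par1 root1 \<subset> misplaced S m par r" using s_misplaced by auto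
qed

lemma swap_misplaced_ok: "\<forall>s'\<in>S. \<not> (s' \<noteq> root1 \<and> par1 s' = m) \<longrightarrow> (s' \<noteq> root1 \<and> card (anc1 s') = height) \<or>
         (\<forall>x\<in>V - {root1}. par1 x = m \<and> x \<notin> S \<longrightarrow> \<mu> s' = \<mu> x)"
proof (intro ballI impI)
  fix s' assume s': "s' \<in> S" and nm: "\<not> (s' \<noteq> root1 \<and> par1 s' = m)"
  then have s's: "s' \<noteq> s" using s_placed by auto
  have s'V: "s' \<in> V" using s' S by auto
  have ts': "tau s' = s'" using tau_fixes s's s' partner(4) by auto
  from misplaced_ok s' nm swap_other_S[OF s' s's]
  have "(s' \<noteq> r \<and> depth s' = height) \<or> (\<forall>x\<in>V - {r}. par x = m \<and> x \<notin> S \<longrightarrow> \<mu> s' = \<mu> x)" by blast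
  then show "(s' \<noteq> root1 \<and> card (anc1 s') = height) \<or> (\<forall>x\<in>V - {root1}. par1 x = m \<and> x \<notin> S \<longrightarrow> \<mu> s' = \<mu> x)"
  proof
    assume "s' \<noteq> r \<and> depth s' = height"
    then show ?thesis using swap_other_S[OF s' s's] card_anc1[OF s'V] ts' by simp
  next
    assume eq: "\<forall>x\<in>V - {r}. par x = m \<and> x \<notin> S \<longrightarrow> \<mu> s' = \<mu> x"
    have "\<mu> s' = \<mu> x" if x: "x \<in> V - {root1}" "par1 x = m" "x \<notin> S" for x
    proof -
      have "x \<noteq> partner"
      proof
        assume "x = partner"
        then have "tau (par s) = m" using x(2) unfolding par1_def by simp
        then have "par s = m" by (metis tau_simps(1,4))
        moreover have "s \<noteq> r" using x(1) \<open>x = partner\<close> root1_iff by auto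
        ultimately show False using s(2) by simp
      qed
      moreover have "x \<noteq> s" using x(3) s(1) by auto
      ultimately have tx: "tau x = x" by (intro tau_fixes)
      then have "par x = m" using x(2) unfolding par1_def by (metis tau_simps(1,4))
      moreover have "x \<in> V - {r}" using x tx root1_iff by auto
      ultimately show ?thesis using eq x(3) by blast
    qed
    then show ?thesis by blast
  qed
qed

definition gap where "gap = \<mu> partner - \<mu> s"

lemma gap_nonneg: "0 \<le> gap"
  using light s(1) partner partner_leaf(3) unfolding gap_def by auto

lemma subtree_weight_swap:
  "subtree_weight V anc (\<mu> \<circ> tau) z = subtree_weight V anc \<mu> z + gap * (of_bool (z \<in> anc s) - of_bool (z \<in> anc partner))"
  unfolding tau_def gap_def using subtree_weight_transpose[OF s(3) partner(1)] by simp

lemma swap_path_weight: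
  assumes q: "q \<in> V" "tau q = q"
  shows "path_weight V anc1 \<mu> q = path_weight V anc \<mu> q + gap * (real (card (anc q \<inter> anc s)) - real (card (anc q \<inter> anc partner)))"
proof -
  have "path_weight V anc1 \<mu> q = (\<Sum>z\<in>anc q. subtree_weight V anc (\<mu> \<circ> tau) z)"
    unfolding anc1_def using path_weight_relabel[OF tau q(1)] q(2) by simp
  also have "\<dots> = path_weight V anc \<mu> q + gap * (real (card (anc q \<inter> anc s)) - real (card (anc q \<inter> anc partner)))"
    by (rule path_weight_shift[OF q(1)]) (simp add: subtree_weight_swap)
  finally show ?thesis .
qed

lemma swap_path_weight_m:
  assumes p: "p \<in> V" and hp: "card (anc1 p) + 1 = height" and w: "w \<in> V - {root1}" "par1 w = p"
  shows "path_weight V anc1 \<mu> m \<le> path_weight V anc1 \<mu> p"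
proof -
  have tw: "tau w \<in> V" "tau w \<noteq> r" using w tau root1_iff by auto
  have ptw: "par (tau w) = tau p" using arg_cong[OF w(2), of tau] unfolding par1_def by simp
  have htp: "depth (tau p) + 1 = height" using hp card_anc1[OF p] by simp
  have tpV: "tau p \<in> V" using tau p by auto
  have "tau p \<noteq> r" using htp depth_m depth_rec[of m] m by auto
  then have "d (tau p) \<ge> 2" using parent_deg_child[OF tpV _ tw ptw] degrees tpV by simp
  then have tps: "tau p \<noteq> s" "tau p \<noteq> partner" using s(4) partner_leaf(3) by auto
  then have tpp: "tau p = p" by (metis tau_fixes tau_simps(1,2,3))
  have "path_weight V anc \<mu> m \<le> path_weight V anc \<mu> p"
    using path_weight_m p htp tpp tw ptw by auto
  moreover have "partner \<notin> anc p"
    using leaf_in_anc_eq[OF partner(1) partner_leaf(2) p] tps tpp by auto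
  then have "anc p \<inter> anc partner = anc p \<inter> anc m" using anc_rec[of partner] partner by auto
  moreover have "anc m \<inter> anc partner = anc m" using anc_rec[of partner] partner by auto
  moreover have "card (anc p \<inter> anc m) + card (anc m \<inter> anc s) \<le> card (anc m) + card (anc p \<inter> anc s)"
    by (rule card_Int_triangle) (use p m s(3) in auto)
  ultimately have "gap * (real (card (anc m \<inter> anc s)) - real (card (anc m \<inter> anc partner)))
      \<le> gap * (real (card (anc p \<inter> anc s)) - real (card (anc p \<inter> anc partner)))"
    using gap_nonneg by (intro mult_left_mono) simp_all
  then show ?thesis
    using swap_path_weight[OF m(1) tau_simps(4)] swap_path_weight[OF p tpp]
      \<open>path_weight V anc \<mu> m \<le> path_weight V anc \<mu> p\<close> by linarith
qed

lemma swap_gather_state: "gather_state V par1 root1 anc1 d \<mu> m height S"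
proof unfold_locales
  show "\<forall>v\<in>V. parent_deg V par1 root1 v = d v" by (rule swap_degrees)
  show "m \<noteq> root1" using root1_iff m by simp
  show "\<forall>v\<in>V. relabelled.depth v \<le> height" "relabelled.depth m + 1 = height"
    using card_anc1 depth_le_height depth_m tau m unfolding relabelled.depth_def by auto
  show "card {u \<in> V - {root1}. par1 u = m} = card S" by (rule swap_children_m)
  show "\<forall>s\<in>S. \<not> (s \<noteq> root1 \<and> par1 s = m) \<longrightarrow> (s \<noteq> root1 \<and> relabelled.depth s = height) \<or>
      (\<forall>x\<in>V - {root1}. par1 x = m \<and> x \<notin> S \<longrightarrow> \<mu> s = \<mu> x)"
    using swap_misplaced_ok unfolding relabelled.depth_def .
  show "\<forall>p\<in>V. relabelled.depth p + 1 = height \<and> (\<exists>w\<in>V - {root1}. par1 w = p)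
      \<longrightarrow> path_weight V anc1 \<mu> m \<le> path_weight V anc1 \<mu> p"
    using swap_path_weight_m unfolding relabelled.depth_def by blast
qed (use m S light in auto)

lemma swap_cut_cost_diff:
  defines "F \<equiv> \<lambda>y. y * (sum \<mu> V - y)"
  shows "cut_cost V root1 anc1 \<mu> - cut_cost V r anc \<mu> =
     (\<Sum>z\<in>anc s - anc partner. F (subtree_weight V anc \<mu> z + gap) - F (subtree_weight V anc \<mu> z)) +
     (\<Sum>z\<in>anc partner - anc s. F (subtree_weight V anc \<mu> z - gap) - F (subtree_weight V anc \<mu> z))"
proof -
  have "cut_cost V root1 anc1 \<mu> = cut_cost V r anc (\<mu> \<circ> tau)"
    unfolding root1_def anc1_def by (rule cut_cost_relabel[OF tau])
  also have "\<dots> = (\<Sum>z\<in>V - {r}. F (subtree_weight V anc (\<mu> \<circ> tau) z))"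
    unfolding cut_cost_def F_def sum_relabel[OF tau] ..
  finally have "cut_cost V root1 anc1 \<mu> - cut_cost V r anc \<mu>
      = (\<Sum>z\<in>V - {r}. F (subtree_weight V anc (\<mu> \<circ> tau) z)) - (\<Sum>z\<in>V - {r}. F (subtree_weight V anc \<mu> z))"
    unfolding cut_cost_def F_def by simp
  also have "\<dots> =
     (\<Sum>z\<in>anc s - anc partner. F (subtree_weight V anc \<mu> z + gap) - F (subtree_weight V anc \<mu> z)) +
     (\<Sum>z\<in>anc partner - anc s. F (subtree_weight V anc \<mu> z - gap) - F (subtree_weight V anc \<mu> z))"
    by (rule sum_shift_paths[OF partner(1) s(3)]) (simp add: subtree_weight_swap)
  finally show ?thesis .
qed

text \<open>If \<open>s\<close> is strictly lighter than its partner, then \<open>s\<close> is a deepest vertex, and the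
  minimality of \<open>path_weight\<close> at \<open>m\<close> bounds the gain of the swap.\<close>

lemma swap_gap_bound:
  assumes "gap \<noteq> 0"
  shows "depth s = depth partner" "path_weight V anc \<mu> partner - path_weight V anc \<mu> s \<le> gap"
proof -
  have "s \<noteq> r \<and> depth s = height"
    using misplaced_ok s(1,2) partner assms unfolding gap_def by force
  then have sD: "s \<noteq> r" "depth s = height" "\<forall>w\<in>V - {r}. par w \<noteq> s"
    using deepest_no_children[OF depth_le_height s(3)] by auto
  then show "depth s = depth partner" using partner_leaf(1) by simp
  have "path_weight V anc \<mu> m \<le> path_weight V anc \<mu> (par s)"
    using path_weight_m par_in_V[of s] depth_rec[of s] s(3) sD by auto
  moreover have "path_weight V anc \<mu> partner = path_weight V anc \<mu> m + \<mu> partner"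
    using path_weight_leaf[OF partner(1,2) partner_leaf(2)] partner(3) by simp
  moreover have "path_weight V anc \<mu> s = path_weight V anc \<mu> (par s) + \<mu> s"
    using path_weight_leaf[OF s(3) sD(1,3)] by simp
  ultimately show "path_weight V anc \<mu> partner - path_weight V anc \<mu> s \<le> gap" unfolding gap_def by simp
qed

lemma swap_cut_cost_le: "cut_cost V root1 anc1 \<mu> \<le> cut_cost V r anc \<mu>"
proof (cases "gap = 0")
  case True
  then show ?thesis using swap_cut_cost_diff by simp
next
  case False
  note gap = swap_gap_bound[OF False]
  have "partner \<in> anc partner - anc s"
    using self_in partner leaf_in_anc_eq[OF partner(1) partner_leaf(2) s(3)] s_ne(1) by auto
  then have "card (anc partner - anc s) \<noteq> 0" using finite_anc[OF partner(1)] by auto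
  then have k1: "1 \<le> real (card (anc partner - anc s))" by simp
  have "cut_cost V root1 anc1 \<mu> - cut_cost V r anc \<mu> =
      2 * gap * ((\<Sum>z\<in>anc partner - anc s. subtree_weight V anc \<mu> z) - (\<Sum>z\<in>anc s - anc partner. subtree_weight V anc \<mu> z))
      - 2 * real (card (anc partner - anc s)) * gap\<^sup>2"
    unfolding swap_cut_cost_diff by (rule shift_cost_same_depth[OF partner(1) s(3) gap(1)[symmetric]])
  also have "(\<Sum>z\<in>anc partner - anc s. subtree_weight V anc \<mu> z) - (\<Sum>z\<in>anc s - anc partner. subtree_weight V anc \<mu> z)
      = path_weight V anc \<mu> partner - path_weight V anc \<mu> s"
    unfolding path_weight_def by (rule sum_diff_anc_diff[OF partner(1) s(3)])
  finally have diff: "cut_cost V root1 anc1 \<mu> - cut_cost V r anc \<mu> = 2 * gap *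
      (path_weight V anc \<mu> partner - path_weight V anc \<mu> s) - 2 * real (card (anc partner - anc s)) * gap\<^sup>2" .
  have "2 * gap * (path_weight V anc \<mu> partner - path_weight V anc \<mu> s) \<le> 2 * gap * gap"
    using gap(2) gap_nonneg by (intro mult_left_mono) auto
  moreover have "1 * gap\<^sup>2 \<le> real (card (anc partner - anc s)) * gap\<^sup>2"
    using k1 by (intro mult_right_mono) auto
  ultimately show ?thesis using diff by (simp add: power2_eq_square)
qed

end

lemma gather:
  assumes "gather_state V par r anc d \<mu> m height S"
  shows "\<exists>par' r' anc'. gather_state V par' r' anc' d \<mu> m height S \<and> cut_cost V r' anc' \<mu> \<le> cut_cost V r anc \<mu>
     \<and> misplaced S m par' r' = {}"
  using assms
proof (induction "card (misplaced S m par r)" arbitrary: par r anc rule: less_induct)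
  case less
  interpret gather_state V par r anc d \<mu> m height S by (rule less.prems)
  show ?case
  proof (cases "misplaced S m par r = {}")
    case True
    then show ?thesis using less.prems by blast
  next
    case False
    then obtain s where "s \<in> misplaced S m par r" by blast
    then interpret sw: gather_swap V par r anc d \<mu> m height S s by unfold_locales
    obtain par' r' anc' where "gather_state V par' r' anc' d \<mu> m height S"
      "cut_cost V r' anc' \<mu> \<le> cut_cost V sw.root1 sw.anc1 \<mu>" "misplaced S m par' r' = {}"
      using less.hyps[OF sw.swap_misplaced_less sw.swap_gather_state] by blast
    then show ?thesis using sw.swap_cut_cost_le by (meson order.trans)
  qed
qed

text \<open>The first phase of the exchange argument, for an optimal tree rooted at a centroid \<open>c\<close>:
  among the internal vertices on the penultimate level pick the \<open>target\<close> of least \<open>path_weight\<close>,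
  swap the labels of \<open>m\<close> and \<open>target\<close>, and regraft the children of \<open>m\<close> in excess of
  \<open>d m - 1\<close> (those \<open>moved\<close>, chosen outside \<open>S\<close> where possible) to \<open>target\<close>.\<close>

locale exchange_setting = rooted_tree V par c anc for V par c anc +
  fixes \<mu> :: "nat \<Rightarrow> real" and d :: "nat \<Rightarrow> nat" and m :: nat and S :: "nat set"
  assumes mu_nonneg: "\<forall>v\<in>V. 0 \<le> \<mu> v"
    and centroid: "\<forall>p\<in>V - {c}. 2 * subtree_weight V anc \<mu> p \<le> sum \<mu> V"
    and degrees: "\<forall>v\<in>V. parent_deg V par c v = d v"
    and antimono: "\<forall>u\<in>V - {c}. \<forall>v\<in>V - {c}. depth u < depth v
                     \<longrightarrow> subtree_weight V anc \<mu> v \<le> subtree_weight V anc \<mu> u"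
    and internal: "2 \<le> card {v\<in>V. 2 \<le> d v}"
    and m: "m \<in> V" "2 \<le> d m"
    and m_min: "\<forall>k\<in>V. 2 \<le> d k \<longrightarrow> \<mu> m \<le> \<mu> k \<and> d m \<le> d k"
    and S: "S \<subseteq> V" "\<forall>s\<in>S. d s = 1" "card S = d m - 1"
    and light: "\<forall>s\<in>S. \<forall>x\<in>V. d x = 1 \<and> x \<notin> S \<longrightarrow> \<mu> s \<le> \<mu> x"
begin

definition height where "height = Max (depth ` V)"

definition penultimate where
  "penultimate = {p \<in> V. depth p + 1 = height \<and> (\<exists>w\<in>V - {c}. par w = p)}"

definition target where
  "target = (SOME x. x \<in> penultimate \<and> (\<forall>p\<in>penultimate. path_weight V anc \<mu> x \<le> path_weight V anc \<mu> p))"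

definition children where "children = {u \<in> V - {c}. par u = target}"

definition filler where
  "filler = (SOME F. F \<subseteq> children - S \<and> card F = d m - 1 - card (S \<inter> children))"

definition kept where "kept = (S \<inter> children) \<union> filler"

definition moved where "moved = children - kept"

lemma depth_le_height: "v \<in> V \<Longrightarrow> depth v \<le> height"
  unfolding height_def by (rule Max_ge) auto

lemma height_ge_2: "2 \<le> height"
proof -
  have "{v\<in>V. 2 \<le> d v} - {c} \<noteq> {}"
  proof
    assume "{v\<in>V. 2 \<le> d v} - {c} = {}"
    then have "card {v\<in>V. 2 \<le> d v} \<le> card {c}" by (intro card_mono) auto
    then show False using internal by simp
  qed
  then obtain k where k: "k \<in> V" "k \<noteq> c" "2 \<le> d k" by auto
  obtain w where w: "w \<in> V - {c}" "par w = k" using exists_child[of k] k degrees by auto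
  then have "depth w = Suc (depth k)" "1 \<le> depth k" using depth_rec[of w] depth_rec[of k] k by auto
  then show ?thesis using depth_le_height[of w] w by simp
qed

lemma target: "target \<in> penultimate" "\<forall>p\<in>penultimate. path_weight V anc \<mu> target \<le> path_weight V anc \<mu> p"
proof -
  have "V \<noteq> {}" using rV by blast
  then have "height \<in> depth ` V" unfolding height_def by (intro Max_in) auto
  then obtain v where v: "v \<in> V" "depth v = height" by auto
  then have "v \<noteq> c" using height_ge_2 by auto
  then have "par v \<in> penultimate"
    unfolding penultimate_def using v par_in_V[of v] depth_rec[of v] by auto
  then have "penultimate \<noteq> {}" "finite penultimate" unfolding penultimate_def by auto
  then obtain x where "x \<in> penultimate" "\<forall>p\<in>penultimate. path_weight V anc \<mu> x \<le> path_weight V anc \<mu> p"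
    by (metis (no_types, lifting) arg_min_if_finite(1) arg_min_least)
  then show "target \<in> penultimate" "\<forall>p\<in>penultimate. path_weight V anc \<mu> target \<le> path_weight V anc \<mu> p"
    unfolding target_def by (smt (verit, ccfv_threshold) someI_ex)+
qed

lemma target_props:
  "target \<in> V" "target \<noteq> c" "depth target + 1 = height" "2 \<le> d target"
  "\<mu> m \<le> \<mu> target" "d m \<le> d target"
proof -
  show tV: "target \<in> V" and h: "depth target + 1 = height" using target(1) unfolding penultimate_def by auto
  then show tc: "target \<noteq> c" using height_ge_2 by auto
  obtain w where "w \<in> V" "w \<noteq> c" "par w = target" using target(1) unfolding penultimate_def by auto
  then show "2 \<le> d target" using parent_deg_child[OF tV tc] degrees tV by auto
  then show "\<mu> m \<le> \<mu> target" "d m \<le> d target" using m_min tV by auto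
qed

lemma children_leaf:
  assumes "u \<in> children"
  shows "u \<in> V" "u \<noteq> c" "par u = target" "depth u = height" "\<forall>w\<in>V - {c}. par w \<noteq> u" "d u = 1"
proof -
  show u: "u \<in> V" "u \<noteq> c" "par u = target" using assms unfolding children_def by auto
  then show hu: "depth u = height" using depth_rec[of u] target_props(3) by simp
  show nc: "\<forall>w\<in>V - {c}. par w \<noteq> u"
    using deepest_no_children[OF _ u(1) hu] depth_le_height by blast
  show "d u = 1" using parent_deg_nochild[OF u(1,2) nc] degrees u by simp
qed

lemma card_children: "card children = d target - 1"
  using degrees target_props(1,2) unfolding children_def parent_deg_def by auto

lemma finite_children: "finite children"
  unfolding children_def by simp

lemma filler: "filler \<subseteq> children - S" "card filler = d m - 1 - card (S \<inter> children)"
proof -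
  have "card (S \<inter> children) \<le> d m - 1" using S card_mono[of S "S \<inter> children"] finite_subset[OF S(1)] by auto
  moreover have "card (children - S) = card children - card (S \<inter> children)"
    using finite_children by (simp add: card_Diff_subset_Int Int_commute)
  ultimately have "d m - 1 - card (S \<inter> children) \<le> card (children - S)"
    using card_children target_props(6) by linarith
  then obtain F where "F \<subseteq> children - S" "card F = d m - 1 - card (S \<inter> children)"
    by (meson obtain_subset_with_card_n)
  then show "filler \<subseteq> children - S" "card filler = d m - 1 - card (S \<inter> children)"
    unfolding filler_def by (metis (mono_tags, lifting) someI_ex)+
qed

lemma kept_moved:
  "kept \<subseteq> children" "S \<inter> children \<subseteq> kept" "card kept = d m - 1"
  "moved \<subseteq> children" "card moved = d target - d m" "kept \<inter> moved = {}"
proof -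
  show "kept \<subseteq> children" "S \<inter> children \<subseteq> kept" using filler unfolding kept_def by auto
  have "card (S \<inter> children) \<le> d m - 1" using S card_mono[of S "S \<inter> children"] finite_subset[OF S(1)] by auto
  moreover have "card kept = card (S \<inter> children) + card filler" unfolding kept_def
    by (rule card_Un_disjoint) (use filler finite_children finite_subset in auto)
  ultimately show ck: "card kept = d m - 1" using filler by simp
  show "moved \<subseteq> children" "kept \<inter> moved = {}" unfolding moved_def by auto
  show "card moved = d target - d m"
    unfolding moved_def using card_Diff_subset[OF finite_subset[OF \<open>kept \<subseteq> children\<close> finite_children]]
      \<open>kept \<subseteq> children\<close> card_children ck target_props(6) m(2) by simp
qed

definition tau where "tau = transpose m target"
definition par1 where "par1 v = tau (par (tau v))"
definition root1 where "root1 = tau c"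
definition anc1 where "anc1 v = tau ` anc (tau v)"

lemma tau: "\<forall>v\<in>V. tau v \<in> V \<and> tau (tau v) = v"
  unfolding tau_def using transpose_in m target_props(1) by auto

lemma tau_simps [simp]: "tau (tau y) = y" "tau m = target" "tau target = m"
  unfolding tau_def by auto

lemma tau_leaf: "d u = 1 \<Longrightarrow> tau u = u"
  unfolding tau_def using m target_props(4) by (metis numeral_le_one_iff semiring_norm(69) transpose_apply_other)

lemma root1_iff: "u = root1 \<longleftrightarrow> tau u = c"
  unfolding root1_def by (metis tau_simps(1))

sublocale relabelled: rooted_tree V par1 root1 anc1
  unfolding par1_def root1_def anc1_def by (rule rooted_tree.intro[OF rooted_relabel[OF tau]])

sublocale regraft: leaf_regraft V par1 root1 anc1 moved m target
proof unfold_locales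
  show "moved \<subseteq> V - {root1}"
    using kept_moved(4) children_leaf root1_iff tau_leaf by fastforce
  show "\<forall>w\<in>V - {root1}. par1 w \<notin> moved"
  proof (intro ballI notI)
    fix w assume w: "w \<in> V - {root1}" and pw: "par1 w \<in> moved"
    have tw: "tau w \<in> V" "tau w \<noteq> c" using w tau root1_iff by auto
    have l: "par1 w \<in> children" using pw kept_moved(4) by auto
    then have "tau (par1 w) = par1 w" using children_leaf tau_leaf by auto
    then have "par (tau w) = par1 w" unfolding par1_def by simp
    then show False using children_leaf(5)[OF l] tw by auto
  qed
  show "\<forall>u\<in>moved. par1 u = m"
    using kept_moved(4) children_leaf(3,6) tau_leaf unfolding par1_def by fastforce
  show "target \<in> V" "target \<notin> moved"
    using target_props(1,4) kept_moved(4) children_leaf(6) by fastforce+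
qed

definition shift where "shift = \<mu> target - \<mu> m + sum \<mu> moved"

lemma shift_nonneg: "0 \<le> shift"
proof -
  have "sum \<mu> moved \<ge> 0" using mu_nonneg kept_moved(4) children_leaf(1) by (intro sum_nonneg) auto
  then show ?thesis unfolding shift_def using target_props(5) by simp
qed

lemma subtree_weight_regraft:
  assumes z: "z \<in> V"
  shows "subtree_weight V regraft.anc'' \<mu> z = subtree_weight V anc \<mu> (tau z)
    + shift * (of_bool (tau z \<in> anc m) - of_bool (tau z \<in> anc target))"
proof -
  have "subtree_weight V regraft.anc'' \<mu> z = subtree_weight V anc1 \<mu> z
      + sum \<mu> moved * (of_bool (z \<in> anc1 target) - of_bool (z \<in> anc1 m))"
    by (rule regraft.subtree_weight_anc''[OF z])
  also have "subtree_weight V anc1 \<mu> z = subtree_weight V anc (\<mu> \<circ> tau) (tau z)"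
    unfolding anc1_def by (rule subtree_weight_relabel[OF tau z])
  also have "(z \<in> anc1 target) = (tau z \<in> anc m)"
    unfolding anc1_def using mem_relabel[OF tau z target_props(1)] by simp
  also have "(z \<in> anc1 m) = (tau z \<in> anc target)"
    unfolding anc1_def using mem_relabel[OF tau z m(1)] by simp
  also have "subtree_weight V anc (\<mu> \<circ> tau) (tau z) = subtree_weight V anc \<mu> (tau z)
      + (\<mu> target - \<mu> m) * (of_bool (tau z \<in> anc m) - of_bool (tau z \<in> anc target))"
    unfolding tau_def by (rule subtree_weight_transpose[OF m(1) target_props(1)])
  finally show ?thesis unfolding shift_def by (simp add: algebra_simps)
qed

lemma cut_cost_regraft_diff:
  defines "F \<equiv> \<lambda>y. y * (sum \<mu> V - y)"
  shows "cut_cost V root1 regraft.anc'' \<mu> - cut_cost V c anc \<mu> =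
     (\<Sum>z\<in>anc m - anc target. F (subtree_weight V anc \<mu> z + shift) - F (subtree_weight V anc \<mu> z)) +
     (\<Sum>z\<in>anc target - anc m. F (subtree_weight V anc \<mu> z - shift) - F (subtree_weight V anc \<mu> z))"
proof -
  define g where "g z = subtree_weight V anc \<mu> z + shift * (of_bool (z \<in> anc m) - of_bool (z \<in> anc target))" for z
  have "cut_cost V root1 regraft.anc'' \<mu> = (\<Sum>p\<in>V - {tau c}. F (g (tau p)))"
    unfolding cut_cost_def F_def root1_def g_def by (rule sum.cong[OF refl]) (simp add: subtree_weight_regraft)
  also have "\<dots> = (\<Sum>z\<in>V - {c}. F (g z))" by (rule sum_relabel_nonroot[OF tau])
  finally have "cut_cost V root1 regraft.anc'' \<mu> = (\<Sum>z\<in>V - {c}. F (g z))" .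
  moreover have "cut_cost V c anc \<mu> = (\<Sum>z\<in>V - {c}. F (subtree_weight V anc \<mu> z))"
    unfolding cut_cost_def F_def ..
  ultimately show ?thesis by (simp only:) (rule sum_shift_paths[OF target_props(1) m(1)], simp add: g_def)
qed

lemma depth_m: "depth m + 1 \<le> height"
proof (cases "m = c")
  case True then show ?thesis using height_ge_2 by simp
next
  case False
  obtain w where "w \<in> V - {c}" "par w = m" using exists_child[of m] m degrees by auto
  then show ?thesis using depth_rec[of w] depth_le_height[of w] by auto
qed

lemma cut_cost_regraft_le_deeper:
  assumes deeper: "depth m < depth target"
  shows "cut_cost V root1 regraft.anc'' \<mu> \<le> cut_cost V c anc \<mu>"
proof -
  define F where "F y = y * (sum \<mu> V - y)" for y :: real
  define w where "w = subtree_weight V anc \<mu>"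
  define t where "t = depth target - depth m"
  have "(\<Sum>z\<in>anc m - anc target. F (w z + shift) - F (w z)) +
     (\<Sum>z\<in>anc target - anc m. F (w z - shift) - F (w z)) \<le> 0"
  proof (rule paired_sum_nonpos[OF m(1) target_props(1), of t])
    show "depth target = depth m + t" unfolding t_def using deeper by simp
  next
    fix y z assume y: "y \<in> anc m - anc target" and z: "z \<in> anc target - anc m" and hz: "depth z = depth y + t"
    have "y \<in> V - {c}" "z \<in> V - {c}" using y z anc_sub' m target_props(1) by auto
    moreover have "depth y < depth z" using hz deeper t_def by simp
    ultimately have "w z \<le> w y" using antimono unfolding w_def by blast
    moreover have "F (w y + shift) - F (w y) + (F (w z - shift) - F (w z)) = (2 * shift) * (w z - w y - shift)"
      unfolding F_def by (simp add: algebra_simps)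
    ultimately show "F (w y + shift) - F (w y) + (F (w z - shift) - F (w z)) \<le> 0"
      using shift_nonneg mult_nonneg_nonpos[of "2 * shift" "w z - w y - shift"] by simp
  next
    fix z assume z: "z \<in> anc target - anc m"
    have "2 * w z \<le> sum \<mu> V" using centroid z anc_sub' target_props(1) unfolding w_def by blast
    moreover have "F (w z - shift) - F (w z) = - (shift * (sum \<mu> V - 2 * w z + shift))"
      unfolding F_def by (simp add: algebra_simps)
    ultimately show "F (w z - shift) - F (w z) \<le> 0"
      using shift_nonneg mult_nonneg_nonneg[of shift "sum \<mu> V - 2 * w z + shift"] by simp
  qed
  then show ?thesis using cut_cost_regraft_diff unfolding F_def w_def by simp
qed

lemma cut_cost_regraft_le_level:
  assumes level: "depth m = depth target"
  shows "cut_cost V root1 regraft.anc'' \<mu> \<le> cut_cost V c anc \<mu>"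
proof -
  define F where "F y = y * (sum \<mu> V - y)" for y :: real
  have "m \<noteq> c" using level target_props(2) depth_rec[of target] target_props(1) by auto
  then have "m \<in> penultimate"
    unfolding penultimate_def using m level target_props(3) exists_child[of m] degrees by auto
  then have pw: "path_weight V anc \<mu> target \<le> path_weight V anc \<mu> m" using target(2) by blast
  have "cut_cost V root1 regraft.anc'' \<mu> - cut_cost V c anc \<mu>
      = 2 * shift * ((\<Sum>z\<in>anc target - anc m. subtree_weight V anc \<mu> z) - (\<Sum>z\<in>anc m - anc target. subtree_weight V anc \<mu> z))
        - 2 * real (card (anc target - anc m)) * shift\<^sup>2"
    using cut_cost_regraft_diff shift_cost_same_depth[OF target_props(1) m(1) level[symmetric]]
    by (simp add: F_def)
  also have "(\<Sum>z\<in>anc target - anc m. subtree_weight V anc \<mu> z) - (\<Sum>z\<in>anc m - anc target. subtree_weight V anc \<mu> z)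
      = path_weight V anc \<mu> target - path_weight V anc \<mu> m"
    unfolding path_weight_def by (rule sum_diff_anc_diff[OF target_props(1) m(1)])
  finally show ?thesis using shift_nonneg pw by (smt (verit) mult_nonneg_nonpos zero_le_power2 of_nat_0_le_iff
      mult_nonneg_nonneg)
qed

lemma cut_cost_regraft_le: "cut_cost V root1 regraft.anc'' \<mu> \<le> cut_cost V c anc \<mu>"
  using cut_cost_regraft_le_deeper cut_cost_regraft_le_level depth_m target_props(3) by fastforce

lemma regraft_outside_moved: "v \<notin> moved \<Longrightarrow> regraft.anc'' v = anc1 v \<and> regraft.par'' v = par1 v"
  unfolding regraft.anc''_def regraft.par''_def by simp

lemma card_anc1: "v \<in> V \<Longrightarrow> card (anc1 v) = depth (tau v)"
  unfolding anc1_def by (rule card_relabel[OF tau])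

lemma m_target_not_moved: "m \<notin> moved" "target \<notin> moved"
  using kept_moved(4) children_leaf(6) m(2) target_props(4) by fastforce+

lemma moved_empty_if: "m = target \<or> d target = d m \<Longrightarrow> moved = {}"
  using kept_moved(4,5) finite_subset[OF _ finite_children] by auto

lemma regraft_degrees: "\<forall>v\<in>V. parent_deg V regraft.par'' root1 v = d v"
proof
  fix v assume v: "v \<in> V"
  have e: "parent_deg V regraft.par'' root1 v + (if v = m \<and> moved \<noteq> {} then card moved else 0) =
      parent_deg V par1 root1 v + (if v = target then card moved else 0)" by (rule regraft.parent_deg_par''[OF v])
  have p1: "parent_deg V par1 root1 v = d (tau v)"
    unfolding par1_def root1_def using parent_deg_relabel[OF tau v] degrees tau v by auto
  consider "m = target" | "m \<noteq> target" "v = m" | "m \<noteq> target" "v = target" | "v \<noteq> m" "v \<noteq> target"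
    by blast
  then show "parent_deg V regraft.par'' root1 v = d v"
  proof cases
    case 1
    then have "tau v = v" unfolding tau_def by simp
    then show ?thesis using e p1 moved_empty_if 1 by simp
  next
    case 2
    then show ?thesis using e p1 moved_empty_if kept_moved(5) target_props(6)
      by (cases "moved = {}") auto
  next
    case 3
    then show ?thesis using e p1 kept_moved(5) target_props(6) by auto
  next
    case 4
    then have "tau v = v" unfolding tau_def by simp
    then show ?thesis using e p1 4 by simp
  qed
qed

lemma m_not_root1: "m \<noteq> root1"
  using root1_iff target_props(2) by simp

lemma regraft_depth_le: "\<forall>v\<in>V. card (regraft.anc'' v) \<le> height"
proof
  fix v assume v: "v \<in> V"
  show "card (regraft.anc'' v) \<le> height"
  proof (cases "v \<in> moved")
    case True
    then have "card (regraft.anc'' v) = Suc (card (anc1 target))"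
      unfolding regraft.anc''_def using regraft.moved_notin_anc_y relabelled.finite_anc[OF target_props(1)] by simp
    then show ?thesis using card_anc1[OF target_props(1)] depth_m by simp
  next
    case False
    then show ?thesis using regraft_outside_moved card_anc1[OF v] depth_le_height tau v by auto
  qed
qed

lemma regraft_depth_m: "card (regraft.anc'' m) + 1 = height"
  using regraft_outside_moved[OF m_target_not_moved(1)] card_anc1[OF m(1)] target_props(3) by simp

lemma regraft_children_m: "{u \<in> V - {root1}. regraft.par'' u = m} = kept"
proof
  show "{u \<in> V - {root1}. regraft.par'' u = m} \<subseteq> kept"
  proof
    fix u assume "u \<in> {u \<in> V - {root1}. regraft.par'' u = m}"
    then have u: "u \<in> V" "u \<noteq> root1" "regraft.par'' u = m" by auto
    have "u \<notin> moved"
    proof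
      assume "u \<in> moved"
      then have "m = target" using u unfolding regraft.par''_def by simp
      then show False using moved_empty_if \<open>u \<in> moved\<close> by simp
    qed
    then have "par (tau u) = target" using u regraft_outside_moved unfolding par1_def
      by (metis tau_simps(1,2))
    then have "tau u \<in> children" unfolding children_def using u tau root1_iff by auto
    then have "u \<in> children" using children_leaf(6) tau_leaf by force
    then show "u \<in> kept" using \<open>u \<notin> moved\<close> unfolding moved_def by auto
  qed
next
  show "kept \<subseteq> {u \<in> V - {root1}. regraft.par'' u = m}"
  proof
    fix u assume u: "u \<in> kept"
    then have "u \<in> children" using kept_moved(1) by auto
    note l = children_leaf(1-3,6)[OF this]
    have "u \<notin> moved" using u unfolding moved_def by auto
    moreover have tu: "tau u = u" using tau_leaf l(4) .
    moreover have "u \<noteq> root1" using root1_iff tu l(2) by simp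
    ultimately show "u \<in> {u \<in> V - {root1}. regraft.par'' u = m}"
      using regraft_outside_moved l unfolding par1_def by simp
  qed
qed

lemma regraft_misplaced_equal:
  assumes y: "y \<in> S" and nm: "\<not> (y \<noteq> root1 \<and> regraft.par'' y = m)"
  shows "(y \<noteq> root1 \<and> card (regraft.anc'' y) = height) \<or>
    (\<forall>x\<in>V - {root1}. regraft.par'' x = m \<and> x \<notin> S \<longrightarrow> \<mu> y = \<mu> x)"
proof -
  have sV: "y \<in> V" "d y = 1" using y S by auto
  have ty: "tau y = y" using tau_leaf sV by simp
  have "y \<notin> moved" using y kept_moved(2) unfolding moved_def by auto
  then have anc_s: "regraft.anc'' y = anc1 y" using regraft_outside_moved by simp
  have sr1: "(y \<noteq> root1) = (y \<noteq> c)" using root1_iff ty by simp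
  show ?thesis
  proof (cases "y \<noteq> c \<and> depth y = height")
    case True
    then show ?thesis using anc_s card_anc1[OF sV(1)] ty sr1 by simp
  next
    case False
    have "\<mu> y = \<mu> x" if x: "x \<in> V - {root1}" "regraft.par'' x = m" "x \<notin> S" for x
    proof -
      have "x \<in> kept" using regraft_children_m x by auto
      then have xC: "x \<in> children" using kept_moved(1) by auto
      note lx = children_leaf[OF xC]
      have wx: "subtree_weight V anc \<mu> x = \<mu> x" using subtree_weight_leaf[OF lx(1,2,5)] .
      have "\<mu> x \<le> \<mu> y"
      proof (cases "y = c")
        case True
        have "parent_deg V par c c = 1" using degrees sV True by simp
        then have "subtree_weight V anc \<mu> x \<le> \<mu> c" using subtree_weight_le_root_leaf[OF mu_nonneg centroid] lx(1,2) by blast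
        then show ?thesis using wx True by simp
      next
        case sc: False
        then have "depth y < height" using False depth_le_height sV by fastforce
        then have "subtree_weight V anc \<mu> x \<le> subtree_weight V anc \<mu> y" using antimono sV sc lx by auto
        moreover have "subtree_weight V anc \<mu> y = \<mu> y"
          using subtree_weight_leaf[OF sV(1) sc] leaf_no_children[OF sV(1) sc sV(2) degrees] by simp
        ultimately show ?thesis using wx by simp
      qed
      moreover have "\<mu> y \<le> \<mu> x" using light y lx x by blast
      ultimately show ?thesis by simp
    qed
    then show ?thesis by blast
  qed
qed

lemma regraft_path_weight:
  assumes q: "q \<in> V" "q \<notin> moved"
  shows "path_weight V regraft.anc'' \<mu> q = path_weight V anc \<mu> (tau q)
    + shift * (real (card (anc (tau q) \<inter> anc m)) - real (card (anc (tau q) \<inter> anc target)))"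
proof -
  define g where "g z = subtree_weight V anc \<mu> z + shift * (of_bool (z \<in> anc m) - of_bool (z \<in> anc target))" for z
  have "path_weight V regraft.anc'' \<mu> q = (\<Sum>z\<in>anc1 q. subtree_weight V regraft.anc'' \<mu> z)"
    unfolding path_weight_def using regraft_outside_moved[OF q(2)] by simp
  also have "\<dots> = (\<Sum>z\<in>tau ` anc (tau q). g (tau z))"
  proof (rule sum.cong)
    show "anc1 q = tau ` anc (tau q)" unfolding anc1_def ..
    fix z assume "z \<in> tau ` anc (tau q)"
    then have "z \<in> V" using anc_sub[of "tau q"] tau q by auto
    then show "subtree_weight V regraft.anc'' \<mu> z = g (tau z)"
      unfolding g_def by (rule subtree_weight_regraft)
  qed
  also have "\<dots> = (\<Sum>z\<in>anc (tau q). g z)" by (rule sum_relabel_image[OF tau q(1)])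
  also have "\<dots> = path_weight V anc \<mu> (tau q)
      + shift * (real (card (anc (tau q) \<inter> anc m)) - real (card (anc (tau q) \<inter> anc target)))"
    by (rule path_weight_shift) (use tau q g_def in auto)
  finally show ?thesis .
qed

lemma regraft_path_weight_min:
  assumes p: "p \<in> V" and hp: "card (regraft.anc'' p) + 1 = height"
    and w: "w \<in> V - {root1}" "regraft.par'' w = p"
  shows "path_weight V regraft.anc'' \<mu> m \<le> path_weight V regraft.anc'' \<mu> p"
proof -
  have pR: "p \<notin> moved"
  proof
    assume pR: "p \<in> moved"
    show False
    proof (cases "w \<in> moved")
      case True
      then show False using w pR m_target_not_moved(2) unfolding regraft.par''_def by simp
    next
      case False
      then show False using regraft_outside_moved regraft.leaves w pR by auto
    qed
  qed
  have htp: "depth (tau p) + 1 = height" using hp regraft_outside_moved[OF pR] card_anc1[OF p] by simp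
  have tpV: "tau p \<in> V" using tau p by auto
  have "\<exists>w\<in>V - {c}. par w = tau p"
  proof (cases "w \<in> moved")
    case True
    then have "p = target" using w unfolding regraft.par''_def by simp
    then have "tau p = m" by simp
    moreover have "m \<noteq> c" using htp \<open>tau p = m\<close> height_ge_2 by auto
    ultimately show ?thesis using exists_child[of m] m degrees by auto
  next
    case False
    then have "par (tau w) = tau p" using w regraft_outside_moved unfolding par1_def by (metis tau_simps(1))
    moreover have "tau w \<in> V" "tau w \<noteq> c" using w tau root1_iff by auto
    ultimately show ?thesis by blast
  qed
  then have "tau p \<in> penultimate" unfolding penultimate_def using tpV htp by simp
  then have base: "path_weight V anc \<mu> target \<le> path_weight V anc \<mu> (tau p)" using target(2) by blast
  have "card (anc (tau p) \<inter> anc target) + card (anc target \<inter> anc m) \<le> card (anc target) + card (anc (tau p) \<inter> anc m)"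
    by (rule card_Int_triangle) (use tpV target_props(1) m in auto)
  then have "shift * (real (card (anc target \<inter> anc m)) - real (card (anc target \<inter> anc target))) \<le>
      shift * (real (card (anc (tau p) \<inter> anc m)) - real (card (anc (tau p) \<inter> anc target)))"
    using shift_nonneg by (intro mult_left_mono) simp_all
  then show ?thesis
    using regraft_path_weight[OF m(1) m_target_not_moved(1)] regraft_path_weight[OF p pR] base by simp
qed

lemma regraft_gather_state: "gather_state V regraft.par'' root1 regraft.anc'' d \<mu> m height S"
proof -
  interpret t: rooted_tree V regraft.par'' root1 regraft.anc'' by (rule rooted_tree.intro[OF regraft.rooted''])
  show ?thesis
  proof unfold_locales
    show "\<forall>v\<in>V. t.depth v \<le> height" "t.depth m + 1 = height"
      using regraft_depth_le regraft_depth_m unfolding t.depth_def by auto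
    show "card {u \<in> V - {root1}. regraft.par'' u = m} = card S"
      using regraft_children_m kept_moved(3) S(3) by simp
    show "\<forall>s\<in>S. \<not> (s \<noteq> root1 \<and> regraft.par'' s = m) \<longrightarrow> (s \<noteq> root1 \<and> t.depth s = height) \<or>
        (\<forall>x\<in>V - {root1}. regraft.par'' x = m \<and> x \<notin> S \<longrightarrow> \<mu> s = \<mu> x)"
      using regraft_misplaced_equal unfolding t.depth_def by blast
    show "\<forall>p\<in>V. t.depth p + 1 = height \<and> (\<exists>w\<in>V - {root1}. regraft.par'' w = p)
        \<longrightarrow> path_weight V regraft.anc'' \<mu> m \<le> path_weight V regraft.anc'' \<mu> p"
      using regraft_path_weight_min unfolding t.depth_def by blast
  qed (use regraft_degrees m(1) m_not_root1 S light in auto)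
qed

end

lemma (in rooted_tree) optimal_cut_cost_le:
  assumes deg: "\<forall>v\<in>V. parent_deg V par r v = d v"
    and opt: "\<And>T. tree V T \<Longrightarrow> \<forall>v\<in>V. tree_deg T v = d v \<Longrightarrow> wiener V \<mu> (parent_edges V par r) \<le> wiener V \<mu> T"
    and R': "rooted V par' r anc'" and deg': "\<forall>x\<in>V. parent_deg V par' r x = parent_deg V par r x"
  shows "cut_cost V r anc \<mu> \<le> cut_cost V r anc' \<mu>"
proof -
  interpret r': rooted_tree V par' r anc' by (rule rooted_tree.intro[OF R'])
  have "\<forall>v\<in>V. tree_deg (parent_edges V par' r) v = d v" using r'.tree_deg_parent_edges deg' deg by auto
  then have "wiener V \<mu> (parent_edges V par r) \<le> wiener V \<mu> (parent_edges V par' r)"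
    by (rule opt[OF r'.tree_parent_edges])
  then show ?thesis using wiener_parent_edges r'.wiener_parent_edges by simp
qed

lemma exists_optimal_tree_with_star:
  assumes mu: "\<forall>v\<in>V. 0 \<le> \<mu> v"
    and M2: "2 \<le> card {v\<in>V. 2 \<le> d v}" and m: "m \<in> V" "2 \<le> d m"
    and mmin: "\<forall>k\<in>V. 2 \<le> d k \<longrightarrow> \<mu> m \<le> \<mu> k \<and> d m \<le> d k"
    and S: "S \<subseteq> V" "\<forall>s\<in>S. d s = 1" "card S = d m - 1"
    and light: "\<forall>s\<in>S. \<forall>x\<in>V. d x = 1 \<and> x \<notin> S \<longrightarrow> \<mu> s \<le> \<mu> x"
    and T0: "tree V T0" "\<forall>v\<in>V. tree_deg T0 v = d v"
    and opt: "\<And>T. tree V T \<Longrightarrow> \<forall>v\<in>V. tree_deg T v = d v \<Longrightarrow> wiener V \<mu> T0 \<le> wiener V \<mu> T"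
  shows "\<exists>T. tree V T \<and> (\<forall>v\<in>V. tree_deg T v = d v) \<and> wiener V \<mu> T \<le> wiener V \<mu> T0 \<and> (\<forall>s\<in>S. {m, s} \<in> T)"
proof -
  have Vne: "V \<noteq> {}" using m by auto
  obtain c par anc where R: "rooted V par c anc" and E0: "T0 = parent_edges V par c"
    and cent: "\<forall>p\<in>V - {c}. 2 * subtree_weight V anc \<mu> p \<le> sum \<mu> V"
    using exists_centroid_root[OF T0(1) Vne mu] by blast
  interpret rooted_tree V par c anc by (rule rooted_tree.intro[OF R])
  have deg: "\<forall>v\<in>V. parent_deg V par c v = d v" using T0(2) tree_deg_parent_edges E0 by auto
  have WIE0: "wiener V \<mu> T0 = 2 * cut_cost V c anc \<mu>" using wiener_parent_edges E0 by simp
  have AMc: "\<forall>u\<in>V - {c}. \<forall>v\<in>V - {c}. depth u < depth v \<longrightarrow> subtree_weight V anc \<mu> v \<le> subtree_weight V anc \<mu> u"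
    by (rule subtree_weight_antimono[OF mu cent])
      (use optimal_cut_cost_le[OF deg] opt E0 in blast)
  interpret ex: exchange_setting V par c anc \<mu> d m S
    by unfold_locales (use mu cent deg AMc M2 m mmin S light in auto)
  obtain par' r' anc' where inv: "gather_state V par' r' anc' d \<mu> m ex.height S"
    and cost: "cut_cost V r' anc' \<mu> \<le> cut_cost V ex.root1 ex.regraft.anc'' \<mu>"
    and gathered: "misplaced S m par' r' = {}"
    using gather[OF ex.regraft_gather_state] by blast
  interpret t': gather_state V par' r' anc' d \<mu> m ex.height S by (rule inv)
  have deg': "\<forall>v\<in>V. parent_deg V par' r' v = d v" by (rule t'.degrees)
  show ?thesis
  proof (intro exI conjI)
    show "tree V (parent_edges V par' r')" by (rule t'.tree_parent_edges)
    show "\<forall>v\<in>V. tree_deg (parent_edges V par' r') v = d v" using t'.tree_deg_parent_edges deg' by simp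
    show "wiener V \<mu> (parent_edges V par' r') \<le> wiener V \<mu> T0"
      using t'.wiener_parent_edges WIE0 cost ex.cut_cost_regraft_le by simp
    show "\<forall>s\<in>S. {m, s} \<in> parent_edges V par' r'"
      using gathered S unfolding misplaced_def parent_edges_def by (force simp: insert_commute)
  qed
qed

abbreviation star :: "nat \<Rightarrow> nat set \<Rightarrow> nat set set" where
  "star m S \<equiv> (\<lambda>s. {m, s}) ` S"

context rooted_tree
begin

lemma rooted_attach_leaves:
  assumes SV: "S \<inter> V = {}" and finS: "finite S"
  shows "rooted (V \<union> S) (\<lambda>v. if v \<in> S then r else par v) r (\<lambda>v. if v \<in> S then {v} else anc v)"
proof -
  define par' where "par' v = (if v \<in> S then r else par v)" for v
  define anc' where "anc' v = (if v \<in> S then {v} else anc v)" for v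
  have rS: "r \<notin> S" using SV by auto
  have step: "par' v \<in> V \<union> S \<and> anc' v = insert v (anc' (par' v)) \<and> v \<notin> anc' (par' v)"
    if "v \<in> V \<union> S - {r}" for v
  proof (cases "v \<in> S")
    case True
    then show ?thesis using rS unfolding par'_def anc'_def by simp
  next
    case False
    with that have v: "v \<in> V" "v \<noteq> r" by auto
    then have "par v \<in> V" "par v \<notin> S" using par_in_V SV by auto
    then show ?thesis using False anc_rec[OF v] notin_anc_par[OF v] unfolding par'_def anc'_def by simp
  qed
  have "anc' v \<subseteq> V \<union> S" if "v \<in> V \<union> S" for v using anc_sub that unfolding anc'_def by auto
  then have "rooted (V \<union> S) par' r anc'"
    unfolding rooted_def using step rS finS by (simp add: anc'_def)
  then show ?thesis unfolding par'_def anc'_def .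
qed

lemma parent_edges_attach_leaves:
  assumes "S \<inter> V = {}"
  shows "parent_edges (V \<union> S) (\<lambda>v. if v \<in> S then r else par v) r = parent_edges V par r \<union> star r S"
proof -
  have split: "V \<union> S - {r} = (V - {r}) \<union> S" using assms rV by auto
  show ?thesis
    unfolding parent_edges_def split image_Un
    by (intro arg_cong2[where f="(\<union>)"] image_cong) (use assms in \<open>auto simp: insert_commute\<close>)
qed

lemma cut_cost_attach_leaves:
  assumes SV: "S \<inter> V = {}" and finS: "finite S"
  shows "cut_cost (V \<union> S) r (\<lambda>v. if v \<in> S then {v} else anc v) \<mu>
    = cut_cost V r anc (\<mu>(r := \<mu> r + sum \<mu> S)) + (\<Sum>s\<in>S. \<mu> s * (sum \<mu> (V \<union> S) - \<mu> s))"
proof -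
  define anc' where "anc' v = (if v \<in> S then {v} else anc v)" for v
  define \<mu>' where "\<mu>' = \<mu>(r := \<mu> r + sum \<mu> S)"
  have weight_S: "subtree_weight (V \<union> S) anc' \<mu> p = \<mu> p" if "p \<in> S" for p
  proof -
    have "subtree_weight (V \<union> S) anc' \<mu> p = (\<Sum>v\<in>V \<union> S. if v = p then \<mu> v else 0)"
      unfolding subtree_weight_def anc'_def
      by (rule sum.cong[OF refl]) (use that anc_sub SV in auto)
    then show ?thesis using that finS by (simp add: sum.delta)
  qed
  have weight_V: "subtree_weight (V \<union> S) anc' \<mu> p = subtree_weight V anc \<mu>' p" if "p \<in> V - {r}" for p
  proof -
    have "subtree_weight (V \<union> S) anc' \<mu> p
        = (\<Sum>v\<in>V. \<mu> v * of_bool (p \<in> anc' v)) + (\<Sum>v\<in>S. \<mu> v * of_bool (p \<in> anc' v))"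
      unfolding subtree_weight_def by (rule sum.union_disjoint) (use SV finS in auto)
    also have "(\<Sum>v\<in>S. \<mu> v * of_bool (p \<in> anc' v)) = 0"
      unfolding anc'_def using that SV by (intro sum.neutral) auto
    also have "(\<Sum>v\<in>V. \<mu> v * of_bool (p \<in> anc' v)) = (\<Sum>v\<in>V. \<mu>' v * of_bool (p \<in> anc v))"
      unfolding anc'_def \<mu>'_def using SV that by (intro sum.cong refl) auto
    finally show ?thesis unfolding subtree_weight_def by simp
  qed
  have total: "sum \<mu>' V = sum \<mu> (V \<union> S)"
  proof -
    have "sum \<mu>' V = sum \<mu> V + sum \<mu> S"
      unfolding \<mu>'_def by (simp add: sum.remove[OF finV rV] algebra_simps)
    then show ?thesis using SV finS by (simp add: sum.union_disjoint Int_commute)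
  qed
  have split: "V \<union> S - {r} = (V - {r}) \<union> S" using SV by auto
  have "cut_cost (V \<union> S) r anc' \<mu>
      = (\<Sum>p\<in>V - {r}. subtree_weight (V \<union> S) anc' \<mu> p * (sum \<mu> (V \<union> S) - subtree_weight (V \<union> S) anc' \<mu> p))
        + (\<Sum>p\<in>S. subtree_weight (V \<union> S) anc' \<mu> p * (sum \<mu> (V \<union> S) - subtree_weight (V \<union> S) anc' \<mu> p))"
    unfolding cut_cost_def split by (rule sum.union_disjoint) (use SV finS in auto)
  also have "\<dots> = cut_cost V r anc \<mu>' + (\<Sum>s\<in>S. \<mu> s * (sum \<mu> (V \<union> S) - \<mu> s))"
    unfolding cut_cost_def total[symmetric] by (simp add: weight_S weight_V)
  finally show ?thesis unfolding anc'_def \<mu>'_def .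
qed

lemma rooted_remove_leaves:
  assumes S: "S \<subseteq> V - {r}" and leaves: "\<forall>w\<in>V - {r}. par w \<notin> S"
  shows "rooted (V - S) par r anc"
  unfolding rooted_def
proof (intro conjI ballI)
  fix v assume v: "v \<in> V - S"
  show "anc v \<subseteq> V - S"
  proof
    fix z assume z: "z \<in> anc v"
    have "z \<notin> S"
      using leaf_in_anc_eq[of z v] leaves S v z by auto
    then show "z \<in> V - S" using anc_sub v z by auto
  qed
next
  fix v assume "v \<in> V - S - {r}"
  then have v: "v \<in> V" "v \<noteq> r" and "par v \<notin> S" using leaves by auto
  then show "par v \<in> V - S" "anc v = insert v (anc (par v))" "v \<notin> anc (par v)"
    using par_in_V anc_rec notin_anc_par by auto
qed (use S in auto)

lemma parent_edges_remove_leaves: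
  assumes S: "S \<subseteq> V - {r}" and "\<forall>s\<in>S. par s = r"
  shows "parent_edges V par r = parent_edges (V - S) par r \<union> star r S"
    and "parent_edges (V - S) par r \<inter> star r S = {}"
proof -
  have "V - {r} = (V - S - {r}) \<union> S" using S by auto
  then show "parent_edges V par r = parent_edges (V - S) par r \<union> star r S"
    unfolding parent_edges_def using assms(2) by (auto simp: insert_commute)
  show "parent_edges (V - S) par r \<inter> star r S = {}"
    unfolding parent_edges_def using S by (auto simp: doubleton_eq_iff)
qed

end

lemma attach_star:
  assumes T1: "tree V' H1" and m: "m \<in> V'" and SV: "S \<inter> V' = {}" and finS: "finite S"
  shows "tree (V' \<union> S) (H1 \<union> star m S)"
    and "wiener (V' \<union> S) \<mu> (H1 \<union> star m S)
       = wiener V' (\<mu>(m := \<mu> m + sum \<mu> S)) H1 + 2 * (\<Sum>s\<in>S. \<mu> s * (sum \<mu> (V' \<union> S) - \<mu> s))"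
proof -
  obtain par anc where R: "rooted V' par m anc" and H1: "H1 = parent_edges V' par m"
    using tree_rooted[OF T1 m] by blast
  interpret t1: rooted_tree V' par m anc by (rule rooted_tree.intro[OF R])
  interpret t: rooted_tree "V' \<union> S" "\<lambda>v. if v \<in> S then m else par v" m "\<lambda>v. if v \<in> S then {v} else anc v"
    by (rule rooted_tree.intro[OF t1.rooted_attach_leaves[OF SV finS]])
  have H: "H1 \<union> star m S = parent_edges (V' \<union> S) (\<lambda>v. if v \<in> S then m else par v) m"
    unfolding H1 t1.parent_edges_attach_leaves[OF SV] ..
  show "tree (V' \<union> S) (H1 \<union> star m S)" unfolding H by (rule t.tree_parent_edges)
  show "wiener (V' \<union> S) \<mu> (H1 \<union> star m S)
       = wiener V' (\<mu>(m := \<mu> m + sum \<mu> S)) H1 + 2 * (\<Sum>s\<in>S. \<mu> s * (sum \<mu> (V' \<union> S) - \<mu> s))"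
  proof -
    have "wiener (V' \<union> S) \<mu> (H1 \<union> star m S)
        = 2 * cut_cost (V' \<union> S) m (\<lambda>v. if v \<in> S then {v} else anc v) \<mu>"
      unfolding H by (rule t.wiener_parent_edges)
    then show ?thesis unfolding t1.cut_cost_attach_leaves[OF SV finS] H1 t1.wiener_parent_edges by simp
  qed
qed

lemma tree_deg_Un_star:
  assumes H1: "H1 \<subseteq> Pow V'" "finite H1" and SV: "S \<inter> V' = {}" and m: "m \<in> V'" and finS: "finite S"
  shows "tree_deg (H1 \<union> star m S) v
    = (if v \<in> S then 1 else if v = m then tree_deg H1 m + card S else tree_deg H1 v)"
proof -
  have disj: "H1 \<inter> star m S = {}" using H1 SV by auto
  have mS: "m \<notin> S" using SV m by auto
  consider "v \<in> S" | "v = m" | "v \<notin> S" "v \<noteq> m" by blast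
  then show ?thesis
  proof cases
    case 1
    then have "{e \<in> H1 \<union> star m S. v \<in> e} = {{m, v}}" using H1 SV m by auto
    then show ?thesis unfolding tree_deg_def using 1 by simp
  next
    case 2
    then have "{e \<in> H1 \<union> star m S. v \<in> e} = {e \<in> H1. m \<in> e} \<union> star m S" by auto
    moreover have "card (star m S) = card S"
      by (rule card_image) (use SV m in \<open>auto simp: inj_on_def doubleton_eq_iff\<close>)
    moreover have "card ({e \<in> H1. m \<in> e} \<union> star m S) = card {e \<in> H1. m \<in> e} + card (star m S)"
      by (rule card_Un_disjoint) (use disj H1(2) finS in auto)
    ultimately show ?thesis unfolding tree_deg_def using 2 mS by simp
  next
    case 3
    then have "{e \<in> H1 \<union> star m S. v \<in> e} = {e \<in> H1. v \<in> e}" by auto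
    then show ?thesis unfolding tree_deg_def using 3 by simp
  qed
qed

lemma tree_edges_Pow: "tree V T \<Longrightarrow> T \<subseteq> Pow V \<and> finite T"
  unfolding tree_def by (auto intro: finite_subset[of T "Pow V"])

lemma tree_deg_attach_star_iff:
  assumes T1: "tree V' H1" and SV: "S \<inter> V' = {}" and m: "m \<in> V'" and finS: "finite S"
    and S: "\<forall>s\<in>S. d s = 1" and dm: "card S = d m - 1" "2 \<le> d m"
  shows "(\<forall>v\<in>V' \<union> S. tree_deg (H1 \<union> star m S) v = d v) \<longleftrightarrow> (\<forall>v\<in>V'. tree_deg H1 v = (d(m := 1)) v)"
  using tree_deg_Un_star[OF tree_edges_Pow[OF T1, THEN conjunct1] tree_edges_Pow[OF T1, THEN conjunct2] SV m finS]
    S dm SV m by (auto simp: disjoint_iff)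

lemma remove_star:
  assumes T: "tree V T" and m: "m \<in> V" and S: "S \<subseteq> V - {m}"
    and leaves: "\<forall>s\<in>S. tree_deg T s = 1 \<and> {m, s} \<in> T"
  obtains T' where "tree (V - S) T'" and "T = T' \<union> star m S"
proof -
  obtain par anc where R: "rooted V par m anc" and E: "T = parent_edges V par m"
    using tree_rooted[OF T m] by blast
  interpret t: rooted_tree V par m anc by (rule rooted_tree.intro[OF R])
  have par_S: "\<forall>s\<in>S. par s = m"
  proof
    fix s assume "s \<in> S"
    then have "{m, s} \<in> parent_edges V par m" using leaves E by auto
    then obtain v where "v \<in> V - {m}" "{m, s} = {v, par v}"
      unfolding parent_edges_def by auto
    then show "par s = m" by (auto simp: doubleton_eq_iff)
  qed
  have "\<forall>w\<in>V - {m}. par w \<notin> S"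
  proof (intro ballI notI)
    fix w assume w: "w \<in> V - {m}" "par w \<in> S"
    then have "parent_deg V par m (par w) = 1" using leaves S E t.tree_deg_parent_edges[of "par w"] by auto
    then show False using t.no_children_if_deg_1[of "par w"] w S by auto
  qed
  then interpret t': rooted_tree "V - S" par m anc
    by (intro rooted_tree.intro t.rooted_remove_leaves S)
  show thesis
    by (rule that[OF t'.tree_parent_edges]) (use t.parent_edges_remove_leaves(1)[OF S par_S] E in simp)
qed

section \<open>Optimality of Huffman trees\<close>

text \<open>The step relation underlying \<open>huff_reach\<close>, for an arbitrary vertex set, so that a run can
  be decomposed at its first step.\<close>

inductive huffman_step :: "(nat \<Rightarrow> nat) \<Rightarrow> nat set \<times> nat set \<times> (nat \<Rightarrow> real) \<times> nat set set
    \<Rightarrow> nat set \<times> nat set \<times> (nat \<Rightarrow> real) \<times> nat set set \<Rightarrow> bool" for d where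
  "\<lbrakk>2 \<le> card M; m \<in> M; \<forall>k\<in>M. w m \<le> w k; \<forall>k\<in>M. w k = w m \<longrightarrow> d m \<le> d k;
    S \<subseteq> W; card S = d m - 1; \<forall>s\<in>S. \<forall>x\<in>W - S. w s \<le> w x\<rbrakk>
   \<Longrightarrow> huffman_step d (W, M, w, E) (insert m (W - S), M - {m}, w(m := w m + sum w S), E \<union> star m S)"

lemma huffman_steps_stuck:
  assumes "card M < 2" "(huffman_step d)\<^sup>*\<^sup>* (W, M, w, E) st"
  shows "st = (W, M, w, E)"
  using assms(2)
proof (cases rule: converse_rtranclpE)
  case (step y)
  from step(1) have "2 \<le> card M" by cases
  then show ?thesis using assms(1) by simp
qed simp

lemma huffman_steps_internal_subset: "(huffman_step d)\<^sup>*\<^sup>* st st' \<Longrightarrow> fst (snd st') \<subseteq> fst (snd st)"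
proof (induction rule: rtranclp_induct)
  case (step y z)
  from step.hyps(2) have "fst (snd z) \<subseteq> fst (snd y)" by cases auto
  then show ?case using step.IH by blast
qed simp

lemma huffman_step_drop_edges:
  assumes "huffman_step d (W, M, w, E) (W', M', w', E')"
  obtains X where "E' = E \<union> X" "\<And>F. huffman_step d (W, M, w, F) (W', M', w', F \<union> X)"
  using assms
proof cases
  case (1 m S)
  show thesis
  proof (rule that[of "star m S"])
    show "E' = E \<union> star m S" using 1 by simp
    fix F show "huffman_step d (W, M, w, F) (W', M', w', F \<union> star m S)"
      using 1 huffman_step.intros[of M m w d S W F] by simp
  qed
qed

lemma huffman_steps_drop_edges:
  assumes "(huffman_step d)\<^sup>*\<^sup>* (W, M, w, E0) st"
  shows "\<exists>E1. (huffman_step d)\<^sup>*\<^sup>* (W, M, w, {}) (fst st, fst (snd st), fst (snd (snd st)), E1)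
    \<and> snd (snd (snd st)) = E0 \<union> E1"
  using assms
proof (induction rule: rtranclp_induct)
  case base then show ?case by auto
next
  case (step y z)
  obtain E1 where E1: "(huffman_step d)\<^sup>*\<^sup>* (W, M, w, {}) (fst y, fst (snd y), fst (snd (snd y)), E1)"
    "snd (snd (snd y)) = E0 \<union> E1" using step.IH by blast
  obtain W1 M1 w1 Ey where y: "y = (W1, M1, w1, Ey)" by (cases y) auto
  obtain W' M' w' Ez where z: "z = (W', M', w', Ez)" by (cases z) auto
  obtain X where X: "Ez = Ey \<union> X" "huffman_step d (W1, M1, w1, E1) (W', M', w', E1 \<union> X)"
    using huffman_step_drop_edges[of d W1 M1 w1 Ey W' M' w' Ez] step.hyps(2) unfolding y z by metis
  have "(huffman_step d)\<^sup>*\<^sup>* (W, M, w, {}) (W', M', w', E1 \<union> X)"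
    using E1(1) X(2) y by (auto intro: rtranclp.rtrancl_into_rtrancl)
  then show ?case using z X(1) E1(2) y by auto
qed

lemma huffman_steps_cong_deg:
  assumes "(huffman_step d)\<^sup>*\<^sup>* (W, M, w, E) st" and "\<forall>k\<in>M. d' k = d k"
  shows "(huffman_step d')\<^sup>*\<^sup>* (W, M, w, E) st"
  using assms(1)
proof (induction rule: rtranclp_induct)
  case base then show ?case by simp
next
  case (step y z)
  have "fst (snd y) \<subseteq> M" using huffman_steps_internal_subset[OF step.hyps(1)] by simp
  from step.hyps(2) have "huffman_step d' y z"
  proof cases
    case (1 M1 m w1 S W1 E1)
    then have dk: "\<forall>k\<in>M1. d' k = d k" using assms(2) \<open>fst (snd y) \<subseteq> M\<close> by auto
    then have "d' m = d m" "\<forall>k\<in>M1. w1 k = w1 m \<longrightarrow> d' m \<le> d' k" using 1(4,6) by auto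
    then show ?thesis unfolding 1(1,2) using 1(3-9) by (intro huffman_step.intros) simp_all
  qed
  then show ?case using step.IH by (rule rtranclp.rtrancl_into_rtrancl[rotated])
qed

lemma (in rooted_tree) parent_edges_all_leaves:
  assumes leaves: "\<forall>v\<in>V - {r}. parent_deg V par r v = 1"
  shows "parent_edges V par r = star r (V - {r})"
proof -
  have "par v = r" if v: "v \<in> V" "v \<noteq> r" for v
  proof (rule ccontr)
    assume "par v \<noteq> r"
    then have "parent_deg V par r (par v) \<ge> 2" using parent_deg_child[OF par_in_V[OF v] _ v refl] by simp
    then show False using leaves par_in_V[OF v] \<open>par v \<noteq> r\<close> by simp
  qed
  then show ?thesis
    unfolding parent_edges_def by (intro image_cong refl) (simp add: insert_commute)
qed

lemma tree_star_if_leaves: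
  assumes T: "tree V T" and deg: "\<forall>v\<in>V. tree_deg T v = d v" and m: "m \<in> V"
    and leaves: "\<forall>v\<in>V - {m}. d v < 2"
  shows "\<forall>v\<in>V - {m}. d v = 1" "T = star m (V - {m})"
proof -
  obtain par anc where R: "rooted V par m anc" and E: "T = parent_edges V par m"
    using tree_rooted[OF T m] by blast
  interpret rooted_tree V par m anc by (rule rooted_tree.intro[OF R])
  have pd: "parent_deg V par m v = d v" if "v \<in> V" for v using deg tree_deg_parent_edges E that by simp
  have "d v = 1" if v: "v \<in> V - {m}" for v
  proof -
    have "parent_deg V par m v \<ge> 1" unfolding parent_deg_def using v by simp
    then have "1 \<le> d v" using pd v by simp
    moreover have "d v < 2" using leaves v by blast
    ultimately show ?thesis by simp
  qed
  then show "\<forall>v\<in>V - {m}. d v = 1" by blast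
  then have "\<forall>v\<in>V - {m}. parent_deg V par m v = 1" using pd by simp
  then show "T = star m (V - {m})" using parent_edges_all_leaves E by simp
qed

lemma tree_single_internal_star:
  assumes T: "tree V T" and deg: "\<forall>v\<in>V. tree_deg T v = d v" and M: "{i\<in>V. 2 \<le> d i} = {m}"
  shows "T = star m {i\<in>V. d i = 1}"
proof -
  have m: "m \<in> V" "2 \<le> d m" using M by blast+
  have leaves: "\<forall>v\<in>V - {m}. d v < 2"
  proof (intro ballI)
    fix v assume v: "v \<in> V - {m}"
    show "d v < 2"
    proof (rule ccontr)
      assume "\<not> d v < 2"
      then have "v \<in> {i\<in>V. 2 \<le> d i}" using v by simp
      then show False using M v by simp
    qed
  qed
  then have "{i\<in>V. d i = 1} = V - {m}" using tree_star_if_leaves(1)[OF T deg m(1) leaves] m(2) by auto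
  then show ?thesis using tree_star_if_leaves(2)[OF T deg m(1) leaves] by simp
qed

lemma tree_no_internal_edge:
  assumes T: "tree V T" and deg: "\<forall>v\<in>V. tree_deg T v = d v"
    and M: "{i\<in>V. 2 \<le> d i} = {}" and L: "{i\<in>V. d i = 1} = {a, b}" and ab: "a \<noteq> b"
  shows "T = {{a, b}}"
proof -
  have a: "a \<in> V" using L by blast
  have leaves: "\<forall>v\<in>V - {a}. d v < 2"
  proof (intro ballI)
    fix v assume v: "v \<in> V - {a}"
    show "d v < 2"
    proof (rule ccontr)
      assume "\<not> d v < 2"
      then have "v \<in> {i\<in>V. 2 \<le> d i}" using v by simp
      then show False using M by simp
    qed
  qed
  then have "V - {a} = {b}" using tree_star_if_leaves(1)[OF T deg a leaves] L ab by auto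
  then show ?thesis using tree_star_if_leaves(2)[OF T deg a leaves] by simp
qed
lemma finite_trees: "finite V \<Longrightarrow> finite {T. tree V T \<and> P T}"
proof -
  assume fin: "finite V"
  have "{T. tree V T \<and> P T} \<subseteq> Pow (Pow V)" unfolding tree_def by auto
  then show ?thesis using fin by (meson finite_Pow_iff finite_subset)
qed

definition huffman_tree :: "nat set \<Rightarrow> (nat \<Rightarrow> real) \<Rightarrow> (nat \<Rightarrow> nat) \<Rightarrow> nat set set \<Rightarrow> bool" where
  "huffman_tree V \<mu> d H \<longleftrightarrow> (\<exists>W M w E.
     (huffman_step d)\<^sup>*\<^sup>* ({i\<in>V. d i = 1}, {i\<in>V. 2 \<le> d i}, \<mu>, {}) (W, M, w, E) \<and>
     ((\<exists>m. M = {m} \<and> H = E \<union> star m W) \<or> (\<exists>a b. M = {} \<and> W = {a, b} \<and> a \<noteq> b \<and> H = insert {a, b} E)))"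

lemma huff_reach_huffman_steps:
  "huff_reach n mu d W M w E \<Longrightarrow>
   (huffman_step d)\<^sup>*\<^sup>* ({i\<in>{1..n}. d i = 1}, {i\<in>{1..n}. 2 \<le> d i}, mu, {}) (W, M, w, E)"
proof (induction rule: huff_reach.induct)
  case init then show ?case by simp
next
  case (step W M w E m S)
  then have "huffman_step d (W, M, w, E) (insert m (W - S), M - {m}, w(m := w m + sum w S), E \<union> star m S)"
    by (intro huffman_step.intros) auto
  then show ?case using step.IH by (rule rtranclp.rtrancl_into_rtrancl[rotated])
qed

lemma huffman_trees_huffman_tree: "H \<in> huffman_trees n mu d \<Longrightarrow> huffman_tree {1..n} mu d H"
  unfolding huffman_trees_def huffman_tree_def by (blast dest: huff_reach_huffman_steps)

lemma huffman_tree_base: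
  assumes H: "huffman_tree V \<mu> d H" and M: "card {i\<in>V. 2 \<le> d i} < 2"
    and T: "tree V T" "\<forall>v\<in>V. tree_deg T v = d v"
  shows "H = T"
proof -
  obtain W M w E where
    run: "(huffman_step d)\<^sup>*\<^sup>* ({i\<in>V. d i = 1}, {i\<in>V. 2 \<le> d i}, \<mu>, {}) (W, M, w, E)" and
    fin: "(\<exists>m. M = {m} \<and> H = E \<union> star m W) \<or> (\<exists>a b. M = {} \<and> W = {a, b} \<and> a \<noteq> b \<and> H = insert {a, b} E)"
    using H unfolding huffman_tree_def by blast
  have st: "W = {i\<in>V. d i = 1}" "M = {i\<in>V. 2 \<le> d i}" "E = {}"
    using huffman_steps_stuck[OF M run] by auto
  from fin show ?thesis
  proof (elim disjE exE conjE)
    fix m assume "M = {m}" "H = E \<union> star m W"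
    then show ?thesis using tree_single_internal_star[OF T, of m] st by auto
  next
    fix a b assume "M = {}" "W = {a, b}" "a \<noteq> b" "H = insert {a, b} E"
    then show ?thesis using tree_no_internal_edge[OF T] st by auto
  qed
qed

lemma huffman_treeI:
  assumes "(huffman_step d)\<^sup>*\<^sup>* ({i\<in>V. d i = 1}, {i\<in>V. 2 \<le> d i}, \<mu>, {}) (W, M, w, E)"
  shows "M = {m} \<Longrightarrow> huffman_tree V \<mu> d (E \<union> star m W)"
    and "M = {} \<Longrightarrow> W = {a, b} \<Longrightarrow> a \<noteq> b \<Longrightarrow> huffman_tree V \<mu> d (insert {a, b} E)"
  using assms unfolding huffman_tree_def by blast+

lemma huffman_tree_first_step:
  assumes H: "huffman_tree V \<mu> d H" and M: "2 \<le> card {i\<in>V. 2 \<le> d i}"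
  obtains m S H1 where "m \<in> V" "2 \<le> d m"
    "\<forall>k\<in>V. 2 \<le> d k \<longrightarrow> \<mu> m \<le> \<mu> k \<and> (\<mu> k = \<mu> m \<longrightarrow> d m \<le> d k)"
    "S \<subseteq> V" "\<forall>s\<in>S. d s = 1" "card S = d m - 1" "\<forall>s\<in>S. \<forall>x\<in>V. d x = 1 \<and> x \<notin> S \<longrightarrow> \<mu> s \<le> \<mu> x"
    "huffman_tree (V - S) (\<mu>(m := \<mu> m + sum \<mu> S)) (d(m := 1)) H1" "H = H1 \<union> star m S"
proof -
  define L0 where "L0 = {i\<in>V. d i = 1}"
  define M0 where "M0 = {i\<in>V. 2 \<le> d i}"
  obtain W Mf w E where run: "(huffman_step d)\<^sup>*\<^sup>* (L0, M0, \<mu>, {}) (W, Mf, w, E)" and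
    fin: "(\<exists>m. Mf = {m} \<and> H = E \<union> star m W) \<or> (\<exists>a b. Mf = {} \<and> W = {a, b} \<and> a \<noteq> b \<and> H = insert {a, b} E)"
    using H unfolding huffman_tree_def L0_def M0_def by blast
  from run show thesis
  proof (cases rule: converse_rtranclpE)
    case base
    then show thesis using fin M unfolding M0_def by auto
  next
    case (step st1)
    from step(1) obtain m S where step1: "m \<in> M0" "\<forall>k\<in>M0. \<mu> m \<le> \<mu> k"
      "\<forall>k\<in>M0. \<mu> k = \<mu> m \<longrightarrow> d m \<le> d k" "S \<subseteq> L0" "card S = d m - 1" "\<forall>s\<in>S. \<forall>x\<in>L0 - S. \<mu> s \<le> \<mu> x"
      and st1: "st1 = (insert m (L0 - S), M0 - {m}, \<mu>(m := \<mu> m + sum \<mu> S), star m S)"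
      by cases blast
    obtain E1 where run1: "(huffman_step d)\<^sup>*\<^sup>* (insert m (L0 - S), M0 - {m}, \<mu>(m := \<mu> m + sum \<mu> S), {})
        (W, Mf, w, E1)" and E: "E = star m S \<union> E1"
      using huffman_steps_drop_edges[OF step(2)[unfolded st1]] by auto
    have "{i\<in>V - S. (d(m := 1)) i = 1} = insert m (L0 - S)" "{i\<in>V - S. 2 \<le> (d(m := 1)) i} = M0 - {m}"
      using step1(1,4) unfolding L0_def M0_def by auto
    then have run1': "(huffman_step (d(m := 1)))\<^sup>*\<^sup>* ({i\<in>V - S. (d(m := 1)) i = 1},
        {i\<in>V - S. 2 \<le> (d(m := 1)) i}, \<mu>(m := \<mu> m + sum \<mu> S), {}) (W, Mf, w, E1)"
      using huffman_steps_cong_deg[OF run1, of "d(m := 1)"] by simp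
    obtain H1 where "huffman_tree (V - S) (\<mu>(m := \<mu> m + sum \<mu> S)) (d(m := 1)) H1" "H = H1 \<union> star m S"
      using fin
    proof (elim disjE exE conjE)
      fix m' assume "Mf = {m'}" "H = E \<union> star m' W"
      then show thesis using that[OF huffman_treeI(1)[OF run1']] E by blast
    next
      fix a b assume "Mf = {}" "W = {a, b}" "a \<noteq> b" "H = insert {a, b} E"
      then show thesis using that[OF huffman_treeI(2)[OF run1']] E by blast
    qed
    moreover have "m \<in> V" "2 \<le> d m" "S \<subseteq> V" "\<forall>s\<in>S. d s = 1"
      "\<forall>k\<in>V. 2 \<le> d k \<longrightarrow> \<mu> m \<le> \<mu> k \<and> (\<mu> k = \<mu> m \<longrightarrow> d m \<le> d k)"
      "\<forall>s\<in>S. \<forall>x\<in>V. d x = 1 \<and> x \<notin> S \<longrightarrow> \<mu> s \<le> \<mu> x"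
      using step1 unfolding L0_def M0_def by auto
    ultimately show thesis using that step1(5) by blast
  qed
qed

lemma contract_star_weights:
  fixes \<mu> :: "nat \<Rightarrow> real" and d :: "nat \<Rightarrow> nat"
  assumes mu: "\<forall>v\<in>V. 0 \<le> \<mu> v"
    and mono: "\<forall>i\<in>V. \<forall>j\<in>V. 1 < d i \<and> d i < d j \<longrightarrow> \<mu> i \<le> \<mu> j"
    and S: "S \<subseteq> V"
  shows "\<forall>v\<in>V - S. 0 \<le> (\<mu>(m := \<mu> m + sum \<mu> S)) v"
    and "\<forall>i\<in>V - S. \<forall>j\<in>V - S. 1 < (d(m := 1)) i \<and> (d(m := 1)) i < (d(m := 1)) j
           \<longrightarrow> (\<mu>(m := \<mu> m + sum \<mu> S)) i \<le> (\<mu>(m := \<mu> m + sum \<mu> S)) j"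
proof -
  have "0 \<le> sum \<mu> S" using mu S by (intro sum_nonneg) auto
  then show "\<forall>v\<in>V - S. 0 \<le> (\<mu>(m := \<mu> m + sum \<mu> S)) v" using mu by auto
  show "\<forall>i\<in>V - S. \<forall>j\<in>V - S. 1 < (d(m := 1)) i \<and> (d(m := 1)) i < (d(m := 1)) j
           \<longrightarrow> (\<mu>(m := \<mu> m + sum \<mu> S)) i \<le> (\<mu>(m := \<mu> m + sum \<mu> S)) j"
  proof (intro ballI impI)
    fix i j assume ij: "i \<in> V - S" "j \<in> V - S" and d: "1 < (d(m := 1)) i \<and> (d(m := 1)) i < (d(m := 1)) j"
    then have "i \<noteq> m" "j \<noteq> m" by auto
    then show "(\<mu>(m := \<mu> m + sum \<mu> S)) i \<le> (\<mu>(m := \<mu> m + sum \<mu> S)) j" using mono ij d by simp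
  qed
qed

lemma exists_optimal_contraction:
  assumes fin: "finite V" and mu: "\<forall>v\<in>V. 0 \<le> \<mu> v"
    and M: "2 \<le> card {v\<in>V. 2 \<le> d v}" and m: "m \<in> V" "2 \<le> d m"
    and m_min: "\<forall>k\<in>V. 2 \<le> d k \<longrightarrow> \<mu> m \<le> \<mu> k \<and> d m \<le> d k"
    and S: "S \<subseteq> V" "\<forall>s\<in>S. d s = 1" "card S = d m - 1"
    and light: "\<forall>s\<in>S. \<forall>x\<in>V. d x = 1 \<and> x \<notin> S \<longrightarrow> \<mu> s \<le> \<mu> x"
    and T: "tree V T" "\<forall>v\<in>V. tree_deg T v = d v"
  obtains T' where "tree (V - S) T'" "\<forall>v\<in>V - S. tree_deg T' v = (d(m := 1)) v"
    "wiener (V - S) (\<mu>(m := \<mu> m + sum \<mu> S)) T' + 2 * (\<Sum>s\<in>S. \<mu> s * (sum \<mu> V - \<mu> s)) \<le> wiener V \<mu> T"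
proof -
  define trees where "trees = {T. tree V T \<and> (\<forall>v\<in>V. tree_deg T v = d v)}"
  have "finite trees" "T \<in> trees" unfolding trees_def using finite_trees[OF fin] T by auto
  then obtain T0 where T0: "T0 \<in> trees" and T0_min: "\<forall>T'\<in>trees. wiener V \<mu> T0 \<le> wiener V \<mu> T'"
    using ex_min_if_finite[of "wiener V \<mu> ` trees"] by (metis (no_types, lifting) arg_min_if_finite(1,2)
      [of trees "wiener V \<mu>"] empty_iff not_less)
  obtain T2 where T2: "tree V T2" "\<forall>v\<in>V. tree_deg T2 v = d v" "wiener V \<mu> T2 \<le> wiener V \<mu> T0"
      "\<forall>s\<in>S. {m, s} \<in> T2"
    using exists_optimal_tree_with_star[OF mu M m m_min S light, of T0] T0 T0_min unfolding trees_def by auto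
  have mS: "m \<notin> S" using S m by auto
  have "S \<subseteq> V - {m}" "\<forall>s\<in>S. tree_deg T2 s = 1 \<and> {m, s} \<in> T2" using S T2 mS by auto
  then obtain T' where T': "tree (V - S) T'" and T2_eq: "T2 = T' \<union> star m S"
    using remove_star[OF T2(1) m(1)] by blast
  have VS: "V - S \<union> S = V" "S \<inter> (V - S) = {}" "m \<in> V - S" "finite S"
    using S m mS finite_subset[OF S(1) fin] by auto
  show thesis
  proof (rule that[OF T'])
    show "\<forall>v\<in>V - S. tree_deg T' v = (d(m := 1)) v"
      using tree_deg_attach_star_iff[OF T' VS(2-4) S(2,3) m(2)] T2(2) T2_eq VS(1) by simp
    show "wiener (V - S) (\<mu>(m := \<mu> m + sum \<mu> S)) T' + 2 * (\<Sum>s\<in>S. \<mu> s * (sum \<mu> V - \<mu> s)) \<le> wiener V \<mu> T"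
      using attach_star(2)[OF T' VS(3,2,4), of \<mu>] T2(3) T0_min T T2_eq VS(1) unfolding trees_def by auto
  qed
qed

lemma least_weight_least_degree:
  fixes d :: "nat \<Rightarrow> nat"
  assumes mono: "\<forall>i\<in>V. \<forall>j\<in>V. 1 < d i \<and> d i < d j \<longrightarrow> \<mu> i \<le> (\<mu> j :: real)"
    and m: "m \<in> V" "2 \<le> d m"
    and m_min: "\<forall>k\<in>V. 2 \<le> d k \<longrightarrow> \<mu> m \<le> \<mu> k \<and> (\<mu> k = \<mu> m \<longrightarrow> d m \<le> d k)"
  shows "\<forall>k\<in>V. 2 \<le> d k \<longrightarrow> \<mu> m \<le> \<mu> k \<and> d m \<le> d k"
proof (intro ballI impI conjI)
  fix k assume k: "k \<in> V" "2 \<le> d k"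
  then show "\<mu> m \<le> \<mu> k" using m_min by blast
  show "d m \<le> d k"
  proof (rule ccontr)
    assume "\<not> d m \<le> d k"
    then have "\<mu> k \<le> \<mu> m" using mono k m by auto
    then show False using m_min k \<open>\<not> d m \<le> d k\<close> by force
  qed
qed

lemma huffman_tree_optimal:
  assumes "finite V" and "\<forall>v\<in>V. 0 \<le> \<mu> v"
    and "\<forall>i\<in>V. \<forall>j\<in>V. 1 < d i \<and> d i < d j \<longrightarrow> \<mu> i \<le> \<mu> j"
    and "huffman_tree V \<mu> d H" and "tree V T" and "\<forall>v\<in>V. tree_deg T v = d v"
  shows "tree V H \<and> (\<forall>v\<in>V. tree_deg H v = d v) \<and> wiener V \<mu> H \<le> wiener V \<mu> T"
  using assms
proof (induction "card {i\<in>V. 2 \<le> d i}" arbitrary: V \<mu> d H T rule: less_induct)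
  case less
  note fin = less.prems(1) and mu = less.prems(2) and mono = less.prems(3) and T = less.prems(5,6)
  show ?case
  proof (cases "card {i\<in>V. 2 \<le> d i} < 2")
    case True
    then show ?thesis using huffman_tree_base[OF less.prems(4) True T] T by simp
  next
    case False
    then have M: "2 \<le> card {i\<in>V. 2 \<le> d i}" by simp
    obtain m S H1 where m: "m \<in> V" "2 \<le> d m"
      and m_min: "\<forall>k\<in>V. 2 \<le> d k \<longrightarrow> \<mu> m \<le> \<mu> k \<and> (\<mu> k = \<mu> m \<longrightarrow> d m \<le> d k)"
      and S: "S \<subseteq> V" "\<forall>s\<in>S. d s = 1" "card S = d m - 1"
      and light: "\<forall>s\<in>S. \<forall>x\<in>V. d x = 1 \<and> x \<notin> S \<longrightarrow> \<mu> s \<le> \<mu> x"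
      and H1: "huffman_tree (V - S) (\<mu>(m := \<mu> m + sum \<mu> S)) (d(m := 1)) H1" and H: "H = H1 \<union> star m S"
      using huffman_tree_first_step[OF less.prems(4) M] by blast
    have m_min': "\<forall>k\<in>V. 2 \<le> d k \<longrightarrow> \<mu> m \<le> \<mu> k \<and> d m \<le> d k"
      by (rule least_weight_least_degree[OF mono m m_min])
    obtain T' where T': "tree (V - S) T'" "\<forall>v\<in>V - S. tree_deg T' v = (d(m := 1)) v"
      and W: "wiener (V - S) (\<mu>(m := \<mu> m + sum \<mu> S)) T' + 2 * (\<Sum>s\<in>S. \<mu> s * (sum \<mu> V - \<mu> s)) \<le> wiener V \<mu> T"
      using exists_optimal_contraction[OF fin mu M m m_min' S light T] by blast
    have "card ({i\<in>V. 2 \<le> d i} - {m}) < card {i\<in>V. 2 \<le> d i}"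
      by (rule card_Diff1_less) (use fin m in auto)
    moreover have "{i\<in>V - S. 2 \<le> (d(m := 1)) i} = {i\<in>V. 2 \<le> d i} - {m}" using S by auto
    ultimately have fewer: "card {i\<in>V - S. 2 \<le> (d(m := 1)) i} < card {i\<in>V. 2 \<le> d i}" by simp
    have IH: "tree (V - S) H1 \<and> (\<forall>v\<in>V - S. tree_deg H1 v = (d(m := 1)) v)
        \<and> wiener (V - S) (\<mu>(m := \<mu> m + sum \<mu> S)) H1 \<le> wiener (V - S) (\<mu>(m := \<mu> m + sum \<mu> S)) T'"
      using less.hyps[OF fewer _ contract_star_weights[OF mu mono S(1)] H1 T'] fin by simp
    have mS: "m \<notin> S" using S m by auto
    have VS: "V - S \<union> S = V" "S \<inter> (V - S) = {}" "m \<in> V - S" "finite S"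
      using S m mS finite_subset[OF S(1) fin] by auto
    from IH have H1_tree: "tree (V - S) H1" by blast
    show ?thesis
      using attach_star(1)[OF H1_tree VS(3,2,4)] attach_star(2)[OF H1_tree VS(3,2,4), of \<mu>]
        tree_deg_attach_star_iff[OF H1_tree VS(2-4) S(2,3) m(2)] IH W H VS(1) by auto
  qed
qed

lemma is_tree_tree: "is_tree n E \<longleftrightarrow> tree {1..n} E"
  unfolding is_tree_def tree_def by simp

lemma huffman_trees_minimize_wiener:
  assumes "\<forall>i\<in>{1..n}. mu i \<ge> 0"
    and "\<forall>i\<in>{1..n}. \<forall>j\<in>{1..n}. 1 < d i \<and> d i < d j \<longrightarrow> mu i \<le> mu j"
    and "T \<in> trees_deg n d" and "H \<in> huffman_trees n mu d"
  shows "wiener {1..n} mu H \<le> wiener {1..n} mu T"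
  using huffman_tree_optimal[of "{1..n}" mu d H T] huffman_trees_huffman_tree assms
  unfolding trees_deg_def is_tree_tree by auto
section \<open>The lower bound\<close>

context rooted_tree
begin

text \<open>The sign \<open>1 - 2 * of_bool (p \<in> anc i)\<close> records on which side of the edge \<open>{p, par p}\<close>
  the vertex \<open>i\<close> lies; this exhibits \<open>P(T)\<close> as a Gram matrix.\<close>

lemma Pmat_gram:
  assumes "i \<in> V" "j \<in> V"
  shows "(real (card V) - 1) / 2 - real (tdist (parent_edges V par r) i j) =
     (\<Sum>p\<in>V - {r}. (1 - 2 * of_bool (p \<in> anc i)) * (1 - 2 * of_bool (p \<in> anc j))) / 2"
proof -
  define g where "g p = (of_bool (p \<in> anc i) + of_bool (p \<in> anc j)
    - 2 * of_bool (p \<in> anc i) * of_bool (p \<in> anc j) :: real)" for p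
  have "card V \<ge> 1" using rV finV by (metis One_nat_def Suc_leI card_gt_0_iff empty_iff)
  then have card: "real (card (V - {r})) = real (card V) - 1" by (simp add: card_Diff_singleton of_nat_diff)
  have "(\<Sum>p\<in>V - {r}. (1 - 2 * of_bool (p \<in> anc i)) * (1 - 2 * of_bool (p \<in> anc j)) :: real)
     = (\<Sum>p\<in>V - {r}. 1 - 2 * g p)"
    unfolding g_def by (rule sum.cong) (auto simp: algebra_simps)
  also have "\<dots> = real (card (V - {r})) - 2 * real (tdist (parent_edges V par r) i j)"
    using tdist_parent_edges[OF assms] card_sym_diff_sum[OF assms] unfolding g_def
    by (simp only: sum_subtractf sum_distrib_left[symmetric]) simp
  finally show ?thesis unfolding card by simp
qed

end

lemma gram_trace_psd_nonneg:
  fixes \<sigma> :: "'a \<Rightarrow> nat \<Rightarrow> real"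
  assumes "\<forall>i\<in>{1..n}. \<forall>j\<in>{1..n}. P i j = (\<Sum>p\<in>Q. \<sigma> p i * \<sigma> p j)" and "psd_on n M"
  shows "0 \<le> (\<Sum>i=1..n. \<Sum>j=1..n. P i j * M i j)"
proof -
  have "(\<Sum>i=1..n. \<Sum>j=1..n. P i j * M i j) = (\<Sum>i=1..n. \<Sum>j=1..n. \<Sum>p\<in>Q. \<sigma> p i * M i j * \<sigma> p j)"
    using assms(1) by (intro sum.cong refl) (simp add: sum_distrib_left sum_distrib_right mult_ac)
  also have "\<dots> = (\<Sum>p\<in>Q. \<Sum>i=1..n. \<Sum>j=1..n. \<sigma> p i * M i j * \<sigma> p j)"
    by (subst sum.swap) (simp add: sum.swap[of _ Q])
  also have "\<dots> \<ge> 0"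
  proof (rule sum_nonneg)
    fix p show "0 \<le> (\<Sum>i=1..n. \<Sum>j=1..n. \<sigma> p i * M i j * \<sigma> p j)"
      using assms(2) unfolding psd_on_def by blast
  qed
  finally show ?thesis .
qed

lemma Pmat_trace_psd_nonneg:
  assumes T: "tree {1..n} T" and psd: "psd_on n M"
  shows "0 \<le> (\<Sum>i=1..n. \<Sum>j=1..n. Pmat n T i j * M i j)"
proof (cases "n = 0")
  case False
  then obtain par anc where R: "rooted {1..n} par 1 anc" and E: "T = parent_edges {1..n} par 1"
    using tree_rooted[OF T, of 1] by auto
  interpret rooted_tree "{1..n}" par 1 anc by (rule rooted_tree.intro[OF R])
  have "0 \<le> (\<Sum>i=1..n. \<Sum>j=1..n. (2 * Pmat n T i j) * M i j)"
  proof (rule gram_trace_psd_nonneg[OF _ psd])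
    show "\<forall>i\<in>{1..n}. \<forall>j\<in>{1..n}. 2 * Pmat n T i j =
        (\<Sum>p\<in>{1..n} - {1}. (1 - 2 * of_bool (p \<in> anc i)) * (1 - 2 * of_bool (p \<in> anc j)))"
    proof (intro ballI)
      fix i j assume "i \<in> {1..n}" "j \<in> {1..n}"
      from Pmat_gram[OF this] have "Pmat n T i j =
          (\<Sum>p\<in>{1..n} - {1}. (1 - 2 * of_bool (p \<in> anc i)) * (1 - 2 * of_bool (p \<in> anc j))) / 2"
        unfolding Pmat_def E by (simp only: card_atLeastAtMost diff_Suc_1)
      then show "2 * Pmat n T i j =
          (\<Sum>p\<in>{1..n} - {1}. (1 - 2 * of_bool (p \<in> anc i)) * (1 - 2 * of_bool (p \<in> anc j)))"
        by simp
    qed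
  qed
  then show ?thesis by (simp add: sum_distrib_left[symmetric] mult.assoc)
qed simp

lemma quad_form_Pmat:
  "quad_form n x (Pmat n E) = (real n - 1) / 2 * (\<Sum>i=1..n. x i)\<^sup>2 - wiener {1..n} x E"
proof -
  have "quad_form n x (Pmat n E) =
      (\<Sum>i=1..n. \<Sum>j=1..n. (real n - 1) / 2 * (x i * x j) - x i * x j * real (tdist E i j))"
    unfolding quad_form_def Pmat_def by (intro sum.cong refl) (simp add: algebra_simps)
  also have "\<dots> = (real n - 1) / 2 * (\<Sum>i=1..n. \<Sum>j=1..n. x i * x j) - wiener {1..n} x E"
    unfolding wiener_def by (simp only: sum_subtractf sum_distrib_left)
  finally show ?thesis by (simp only: power2_eq_square sum_product)
qed

lemma Pmat_trace_expand:
  "(\<Sum>i=1..n. \<Sum>j=1..n. Pmat n T i j * ((if i = j then alpha i else 0) + mu i * mu j - A i j))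
     = (real n - 1) / 2 * (\<Sum>i=1..n. alpha i) + quad_form n mu (Pmat n T)
       - (real n - 1) / 2 * (\<Sum>i=1..n. \<Sum>j=1..n. A i j) + cost n A T"
proof -
  have entry: "Pmat n T i j * ((if i = j then alpha i else 0) + mu i * mu j - A i j)
      = (if i = j then (real n - 1) / 2 * alpha i else 0) + mu i * Pmat n T i j * mu j
        - (real n - 1) / 2 * A i j + A i j * real (tdist T i j)" for i j
    unfolding Pmat_def by (cases "i = j") (simp_all add: field_simps)
  show ?thesis
    unfolding entry quad_form_def cost_def
    by (simp add: sum.distrib sum_subtractf sum_distrib_left sum.delta)
qed

theorem theorem2:
  fixes n :: nat and d :: "nat \<Rightarrow> nat" and A :: "nat \<Rightarrow> nat \<Rightarrow> real"
    and alpha mu :: "nat \<Rightarrow> real" and T H :: "nat set set"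
  assumes gen: "generating_deg_seq n d"
    and A_sym: "\<forall>i\<in>{1..n}. \<forall>j\<in>{1..n}. A i j = A j i"
    and A_nonneg: "\<forall>i\<in>{1..n}. \<forall>j\<in>{1..n}. A i j \<ge> 0"
    and mu_nonneg: "\<forall>i\<in>{1..n}. mu i \<ge> 0"
    and mono: "\<forall>i\<in>{1..n}. \<forall>j\<in>{1..n}. 1 < d i \<and> d i < d j \<longrightarrow> mu i \<le> mu j"
    and psd: "psd_on n (\<lambda>i j. (if i = j then alpha i else 0) + mu i * mu j - A i j)"
    and T: "T \<in> trees_deg n d"
    and H: "H \<in> huffman_trees n mu d"
  shows "cost n A T \<ge> LB n A alpha mu H"
proof -
  have "tree {1..n} T" using T unfolding trees_deg_def by (simp add: is_tree_tree)
  then have "0 \<le> (\<Sum>i=1..n. \<Sum>j=1..n.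
      Pmat n T i j * ((if i = j then alpha i else 0) + mu i * mu j - A i j))"
    using psd by (rule Pmat_trace_psd_nonneg)
  moreover have "wiener {1..n} mu H \<le> wiener {1..n} mu T"
    using mu_nonneg mono T H by (rule huffman_trees_minimize_wiener)
  then have "quad_form n mu (Pmat n T) \<le> quad_form n mu (Pmat n H)"
    by (simp add: quad_form_Pmat)
  ultimately show ?thesis unfolding LB_def Pmat_trace_expand by linarith
qed

end
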